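(* For every nonzero $\omega$, the generating functions satisfy $\mathsf Q(t,\omega^2+\omega^{-2})=\mathsf C(t,\omega)$.
   Context: $\mathsf Q(t,\gamma)$ is the generating function of rooted planar maps with all vertices of degree 4 equipped with an Eulerian orientation (each vertex has two incoming and two outgoing edges), counted by vertices ($t$) with weight $\gamma$ per alternating vertex (a vertex whose two outgoing edges are opposite in the cyclic order around it). $\mathsf C(t,\omega)$ is the generating function of rooted planar maps with all vertices of degree 3 equipped with a partial orientation in which every vertex is incident to exactly one incoming edge, one outgoing edge and one undirected edge. Such vertices come in two types according to the cyclic order (clockwise versus counterclockwise) of (incoming, outgoing, undirected) around the vertex, called right-turn and left-turn vertices. Each right-turn vertex has weight $\omega^{-1}$, each left-turn vertex weight $\omega$, and each undirected edge weight $t$. The root is a directed root edge together with its incident root vertex, the root edge being oriented away from the root vertex. *)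

theory Defs
  imports "HOL-Combinatorics.Permutations" "HOL-Computational_Algebra.Formal_Power_Series"
begin

(* Combinatorial maps: darts {..<N}; sigma = rotation around vertices (counterclockwise),
   alpha = fixed-point-free involution pairing the two darts of each edge.
   Vertices = sigma-orbits, edges = alpha-orbits, faces = (sigma o alpha)-orbits.
   The root is the dart 0 (root vertex = its vertex, root edge = its edge). *)

definition orbit :: "(nat \<Rightarrow> nat) \<Rightarrow> nat \<Rightarrow> nat set" where
  "orbit f x = {(f ^^ k) x | k. True}"

definition orbits :: "(nat \<Rightarrow> nat) \<Rightarrow> nat \<Rightarrow> nat set set" where
  "orbits f N = {orbit f d | d. d < N}"

definition is_map :: "nat \<Rightarrow> (nat \<Rightarrow> nat) \<Rightarrow> (nat \<Rightarrow> nat) \<Rightarrow> bool" where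
  "is_map N \<sigma> \<alpha> \<longleftrightarrow>
     \<sigma> permutes {..<N} \<and> \<alpha> permutes {..<N} \<and>
     (\<forall>d<N. \<alpha> d \<noteq> d \<and> \<alpha> (\<alpha> d) = d) \<and>
     (\<forall>x<N. \<forall>y<N. (x, y) \<in> ({(a, \<sigma> a) | a. a < N} \<union> {(a, \<alpha> a) | a. a < N})\<^sup>*)"

(* planar = genus 0, via Euler's formula V - E + F = 2 *)
definition is_planar_map :: "nat \<Rightarrow> (nat \<Rightarrow> nat) \<Rightarrow> (nat \<Rightarrow> nat) \<Rightarrow> bool" where
  "is_planar_map N \<sigma> \<alpha> \<longleftrightarrow> is_map N \<sigma> \<alpha> \<and>
     card (orbits \<sigma> N) + card (orbits (\<sigma> \<circ> \<alpha>) N) = card (orbits \<alpha> N) + 2"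

(* Out = set of darts that are tails of their edge (outgoing at their vertex).
   The root edge is oriented away from the root vertex: 0 \<in> Out. *)
definition quartic_EO :: "nat \<Rightarrow> ((nat \<Rightarrow> nat) \<times> (nat \<Rightarrow> nat) \<times> nat set) set" where
  "quartic_EO n = {(\<sigma>, \<alpha>, Out). is_planar_map (4 * n) \<sigma> \<alpha> \<and>
      (\<forall>d < 4 * n. card (orbit \<sigma> d) = 4) \<and>
      Out \<subseteq> {..< 4 * n} \<and>
      (\<forall>d < 4 * n. d \<in> Out \<longleftrightarrow> \<alpha> d \<notin> Out) \<and>
      (\<forall>d < 4 * n. card (orbit \<sigma> d \<inter> Out) = 2) \<and>
      0 \<in> Out}"

definition iso_Q :: "nat \<Rightarrow> (((nat \<Rightarrow> nat) \<times> (nat \<Rightarrow> nat) \<times> nat set) \<times>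
                               ((nat \<Rightarrow> nat) \<times> (nat \<Rightarrow> nat) \<times> nat set)) set" where
  "iso_Q N = {((\<sigma>, \<alpha>, Out), (\<sigma>', \<alpha>', Out')). \<exists>\<pi>. \<pi> permutes {..<N} \<and> \<pi> 0 = 0 \<and>
      \<sigma>' = \<pi> \<circ> \<sigma> \<circ> inv \<pi> \<and> \<alpha>' = \<pi> \<circ> \<alpha> \<circ> inv \<pi> \<and> Out' = \<pi> ` Out}"

(* alternating vertex: the two outgoing darts are opposite in the cyclic order *)
definition num_alternating :: "nat \<Rightarrow> (nat \<Rightarrow> nat) \<Rightarrow> nat set \<Rightarrow> nat" where
  "num_alternating N \<sigma> Out = card {v \<in> orbits \<sigma> N. \<forall>d\<in>v. d \<in> Out \<longrightarrow> \<sigma> (\<sigma> d) \<in> Out}"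

definition Q_coeff :: "nat \<Rightarrow> complex \<Rightarrow> complex" where
  "Q_coeff n \<gamma> = (\<Sum>c \<in> quartic_EO n // iso_Q (4 * n).
      (case (SOME x. x \<in> c) of (\<sigma>, \<alpha>, Out) \<Rightarrow> \<gamma> ^ num_alternating (4 * n) \<sigma> Out))"

(* Q(t,gamma) as a formal power series in t (t counts vertices) *)
definition Q_gf :: "complex \<Rightarrow> complex fps" where
  "Q_gf \<gamma> = Abs_fps (\<lambda>n. Q_coeff n \<gamma>)"

(* U = darts of undirected edges; Out = darts that are tails of directed edges (outgoing);
   the remaining darts are heads (incoming). n = number of undirected edges
   (so 2n vertices, 3n edges, 6n darts). *)
definition cubic_PO :: "nat \<Rightarrow> ((nat \<Rightarrow> nat) \<times> (nat \<Rightarrow> nat) \<times> nat set \<times> nat set) set" where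
  "cubic_PO n = {(\<sigma>, \<alpha>, U, Out). is_planar_map (6 * n) \<sigma> \<alpha> \<and>
      (\<forall>d < 6 * n. card (orbit \<sigma> d) = 3) \<and>
      U \<subseteq> {..< 6 * n} \<and> Out \<subseteq> {..< 6 * n} \<and> U \<inter> Out = {} \<and>
      (\<forall>d < 6 * n. d \<in> U \<longleftrightarrow> \<alpha> d \<in> U) \<and>
      (\<forall>d < 6 * n. d \<notin> U \<longrightarrow> (d \<in> Out \<longleftrightarrow> \<alpha> d \<notin> Out)) \<and>
      (\<forall>d < 6 * n. card (orbit \<sigma> d \<inter> U) = 1 \<and> card (orbit \<sigma> d \<inter> Out) = 1) \<and>
      card U = 2 * n \<and>
      0 \<in> Out}"

definition iso_C :: "nat \<Rightarrow> (((nat \<Rightarrow> nat) \<times> (nat \<Rightarrow> nat) \<times> nat set \<times> nat set) \<times>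
                               ((nat \<Rightarrow> nat) \<times> (nat \<Rightarrow> nat) \<times> nat set \<times> nat set)) set" where
  "iso_C N = {((\<sigma>, \<alpha>, U, Out), (\<sigma>', \<alpha>', U', Out')). \<exists>\<pi>. \<pi> permutes {..<N} \<and> \<pi> 0 = 0 \<and>
      \<sigma>' = \<pi> \<circ> \<sigma> \<circ> inv \<pi> \<and> \<alpha>' = \<pi> \<circ> \<alpha> \<circ> inv \<pi> \<and> U' = \<pi> ` U \<and> Out' = \<pi> ` Out}"

(* sigma is the counterclockwise rotation. Right-turn: (incoming, outgoing, undirected)
   in clockwise order, i.e. sigma maps the outgoing dart to the incoming one.
   Left-turn: counterclockwise order, i.e. sigma maps the incoming dart to the outgoing one. *)
definition num_right_turn :: "nat \<Rightarrow> (nat \<Rightarrow> nat) \<Rightarrow> nat set \<Rightarrow> nat set \<Rightarrow> nat" where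
  "num_right_turn N \<sigma> U Out = card {v \<in> orbits \<sigma> N. \<exists>d\<in>v. d \<in> Out \<and> \<sigma> d \<notin> U \<and> \<sigma> d \<notin> Out}"

definition num_left_turn :: "nat \<Rightarrow> (nat \<Rightarrow> nat) \<Rightarrow> nat set \<Rightarrow> nat set \<Rightarrow> nat" where
  "num_left_turn N \<sigma> U Out = card {v \<in> orbits \<sigma> N. \<exists>d\<in>v. d \<notin> U \<and> d \<notin> Out \<and> \<sigma> d \<in> Out}"

definition C_coeff :: "nat \<Rightarrow> complex \<Rightarrow> complex" where
  "C_coeff n \<omega> = (\<Sum>c \<in> cubic_PO n // iso_C (6 * n).
      (case (SOME x. x \<in> c) of (\<sigma>, \<alpha>, U, Out) \<Rightarrow>
         \<omega> powi (int (num_left_turn (6 * n) \<sigma> U Out) - int (num_right_turn (6 * n) \<sigma> U Out))))"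

(* C(t,omega) as a formal power series in t (t counts undirected edges) *)
definition C_gf :: "complex \<Rightarrow> complex fps" where
  "C_gf \<omega> = Abs_fps (\<lambda>n. C_coeff n \<omega>)"

end

theory Submission
  imports Defs
begin

text \<open>
  A relabelling of the darts
  that fixes the root dart and commutes with the rotation and the edge involution of a connected
  map is the identity, so the root-fixing relabellings act freely and the class sums become sums
  over labelled maps, divided by a factorial. For cubic maps one may moreover prescribe the labels
  \<open>{4n..<6n}\<close> of the \<open>2n\<close> darts of undirected edges.

  Contracting the \<open>n\<close> undirected edges of such a cubic map merges their endpoints into the
  vertices of a rooted quartic map with an Eulerian orientation; vertices and edges both drop by
  \<open>n\<close>, so faces and planarity are preserved. The cubic map is recovered from the quartic map
  and the injection \<open>p u = \<sigma> (\<sigma> u)\<close> on undirected darts, whose image picks two opposite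
  darts at every quartic vertex, one at each of the two merged cubic vertices; the cubic vertex
  of \<open>u\<close> turns left iff \<open>p u\<close> is outgoing. At an alternating quartic vertex both pairs of
  opposite darts are admissible, with weights \<open>\<omega>\<^sup>2\<close> and \<open>\<omega>\<^sup>-\<^sup>2\<close>; at any other vertex only
  one is, with weight \<open>\<omega> \<omega>\<^sup>-\<^sup>1 = 1\<close>. Summing over the \<open>(2n)!\<close> injections with a given image
  and then over the images yields \<open>(2n)! (4n-1)! [t\<^sup>n] C(t,\<omega>) = (2n)! (4n-1)! [t\<^sup>n] Q(t,\<omega>\<^sup>2+\<omega>\<^sup>-\<^sup>2)\<close>.
\<close>

section \<open>Orbits of permutations\<close>

lemma funpow_add_apply: "(f ^^ a) ((f ^^ b) x) = (f ^^ (a + b)) x"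
  by (simp add: funpow_add)

lemma inj_funpow_permutes: "f permutes S \<Longrightarrow> inj (f ^^ k)"
  using permutes_inj inj_fn by blast

lemma permutes_funpow_period:
  assumes "f permutes S" "finite S"
  obtains m where "m > 0" "(f ^^ m) x = x"
  using permutation_self permutation_permutes assms by metis

lemma funpow_period_mult: "(f ^^ m) x = x \<Longrightarrow> (f ^^ (m * q)) x = x"
proof (induction q)
  case 0 then show ?case by simp
next
  case (Suc q)
  have "(f ^^ (m * Suc q)) x = (f ^^ m) ((f ^^ (m * q)) x)"
    by (simp add: funpow_add_apply)
  then show ?case using Suc by simp
qed

lemma funpow_period_mod: "(f ^^ m) x = x \<Longrightarrow> (f ^^ k) x = (f ^^ (k mod m)) x"
proof -
  assume a: "(f ^^ m) x = x"
  have k: "k = k mod m + m * (k div m)" by simp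
  have "(f ^^ k) x = (f ^^ (k mod m + m * (k div m))) x" using k by metis
  also have "\<dots> = (f ^^ (k mod m)) ((f ^^ (m * (k div m))) x)"
    by (simp only: funpow_add_apply)
  finally show ?thesis using funpow_period_mult[OF a] by simp
qed

lemma orbit_eq_image_period:
  assumes "(f ^^ m) x = x" "m > 0"
  shows "orbit f x = (\<lambda>i. (f ^^ i) x) ` {..<m}"
proof
  show "orbit f x \<subseteq> (\<lambda>i. (f ^^ i) x) ` {..<m}"
  proof
    fix y assume "y \<in> orbit f x"
    then obtain k where "y = (f ^^ k) x" unfolding orbit_def by auto
    then have "y = (f ^^ (k mod m)) x" using funpow_period_mod[OF assms(1)] by simp
    then show "y \<in> (\<lambda>i. (f ^^ i) x) ` {..<m}" using assms(2) by auto
  qed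
  show "(\<lambda>i. (f ^^ i) x) ` {..<m} \<subseteq> orbit f x" unfolding orbit_def by auto
qed

lemma self_in_orbit: "x \<in> orbit f x"
  unfolding orbit_def by (auto intro: exI[of _ 0])

lemma funpow_in_orbit: "(f ^^ k) x \<in> orbit f x"
  unfolding orbit_def by auto

lemma orbit_subset: "f permutes S \<Longrightarrow> x \<in> S \<Longrightarrow> orbit f x \<subseteq> S"
  unfolding orbit_def using permutes_in_funpow_image[of f S x] by auto

lemma orbit_mem_trans: "y \<in> orbit f x \<Longrightarrow> z \<in> orbit f y \<Longrightarrow> z \<in> orbit f x"
proof -
  assume "y \<in> orbit f x" "z \<in> orbit f y"
  then obtain a b where "y = (f ^^ a) x" "z = (f ^^ b) y" unfolding orbit_def by auto
  then have "z = (f ^^ (b + a)) x" by (simp add: funpow_add_apply)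
  then show "z \<in> orbit f x" unfolding orbit_def by auto
qed

lemma orbit_apply_closed: "y \<in> orbit f x \<Longrightarrow> f y \<in> orbit f x"
  using orbit_mem_trans[of y f x "f y"] funpow_in_orbit[where f=f and k=1 and x=y] by auto

lemma orbit_subset_orbit: "y \<in> orbit f x \<Longrightarrow> orbit f y \<subseteq> orbit f x"
  using orbit_mem_trans by blast

lemma orbit_sym:
  assumes "f permutes S" "finite S" "y \<in> orbit f x"
  shows "x \<in> orbit f y"
proof -
  obtain m where m: "m > 0" "(f ^^ m) x = x" by (rule permutes_funpow_period[OF assms(1,2)])
  obtain j where j: "y = (f ^^ j) x" using assms(3) unfolding orbit_def by auto
  have "(f ^^ (m - j mod m)) y = (f ^^ (m - j mod m + j mod m)) x"
    using j funpow_period_mod[OF m(2), of j] by (simp add: funpow_add)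
  also have "\<dots> = x" using m by simp
  finally show ?thesis using funpow_in_orbit by metis
qed

lemma orbit_eq:
  assumes "f permutes S" "finite S" "y \<in> orbit f x"
  shows "orbit f y = orbit f x"
  using orbit_subset_orbit orbit_sym[OF assms] assms(3) by blast

lemma orbit_apply: "f permutes S \<Longrightarrow> finite S \<Longrightarrow> orbit f (f x) = orbit f x"
  using orbit_eq funpow_in_orbit[where k=1 and f=f and x=x] by simp

lemma orbit_eq_if_meet:
  assumes "f permutes S" "finite S" "orbit f x \<inter> orbit f y \<noteq> {}"
  shows "orbit f x = orbit f y"
  using assms orbit_eq by blast

lemma funpow_least_period:
  assumes "f permutes S" "finite S"
  shows "(LEAST m. m > 0 \<and> (f ^^ m) x = x) > 0" "(f ^^ (LEAST m. m > 0 \<and> (f ^^ m) x = x)) x = x"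
     "inj_on (\<lambda>i. (f ^^ i) x) {..<(LEAST m. m > 0 \<and> (f ^^ m) x = x)}"
proof -
  define m where "m = (LEAST m. m > 0 \<and> (f ^^ m) x = x)"
  obtain k where k: "k > 0" "(f ^^ k) x = x" by (rule permutes_funpow_period[OF assms(1,2)])
  show m: "(LEAST m. m > 0 \<and> (f ^^ m) x = x) > 0" "(f ^^ (LEAST m. m > 0 \<and> (f ^^ m) x = x)) x = x"
    using LeastI[of "\<lambda>m. m > 0 \<and> (f ^^ m) x = x", OF conjI[OF k]]
    unfolding m_def by auto
  show "inj_on (\<lambda>i. (f ^^ i) x) {..<(LEAST m. m > 0 \<and> (f ^^ m) x = x)}"
    unfolding m_def[symmetric]
  proof (rule inj_onI, rule ccontr)
    fix i j assume ij: "i \<in> {..<m}" "j \<in> {..<m}" "(f ^^ i) x = (f ^^ j) x" "i \<noteq> j"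
    { fix i j assume ij: "i < m" "j < m" "(f ^^ i) x = (f ^^ j) x" "i < j"
      have "(f ^^ i) ((f ^^ (j - i)) x) = (f ^^ i) x"
        using ij by (simp add: funpow_add_apply)
      hence "(f ^^ (j - i)) x = x" using inj_funpow_permutes[OF assms(1), of i] by (auto dest: injD)
      hence "m \<le> j - i" unfolding m_def using ij by (intro Least_le) auto
      hence False using ij by auto }
    with ij show False by (metis lessThan_iff linorder_neqE_nat)
  qed
qed

lemma card_orbit_iff:
  assumes "f permutes S" "finite S" "k > 0"
  shows "card (orbit f x) = k \<longleftrightarrow> (f ^^ k) x = x \<and> inj_on (\<lambda>i. (f ^^ i) x) {..<k}"
proof
  define m where "m = (LEAST m. m > 0 \<and> (f ^^ m) x = x)"
  note L = funpow_least_period[OF assms(1,2), of x, folded m_def]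
  have cm: "card (orbit f x) = m" using orbit_eq_image_period[OF L(2,1)] card_image[OF L(3)] by simp
  assume "card (orbit f x) = k"
  then show "(f ^^ k) x = x \<and> inj_on (\<lambda>i. (f ^^ i) x) {..<k}" using cm L by simp
next
  assume "(f ^^ k) x = x \<and> inj_on (\<lambda>i. (f ^^ i) x) {..<k}"
  then have "orbit f x = (\<lambda>i. (f ^^ i) x) ` {..<k}" "inj_on (\<lambda>i. (f ^^ i) x) {..<k}"
    using orbit_eq_image_period[where f=f and m=k and x=x] assms(3) by auto
  then show "card (orbit f x) = k" using card_image by fastforce
qed

lemma card_orbits_mult:
  assumes "f permutes {..<N}" "\<And>d. d < N \<Longrightarrow> card (orbit f d) = k"
  shows "k * card (orbits f N) = N"
proof -
  let ?C = "orbits f N"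
  have C: "?C = (\<lambda>d. orbit f d) ` {..<N}" unfolding orbits_def by auto
  have fin: "finite ?C" unfolding C by simp
  have U: "\<Union>?C = {..<N}"
  proof
    show "\<Union>?C \<subseteq> {..<N}" unfolding C using orbit_subset[OF assms(1)] by blast
    show "{..<N} \<subseteq> \<Union>?C" unfolding C using self_in_orbit by blast
  qed
  have "k * card ?C = card (\<Union>?C)"
  proof (rule card_partition)
    show "finite ?C" by fact
    show "finite (\<Union>?C)" unfolding U by simp
    show "\<And>c. c \<in> ?C \<Longrightarrow> card c = k" unfolding C using assms(2) by auto
    show "\<And>c1 c2. c1 \<in> ?C \<Longrightarrow> c2 \<in> ?C \<Longrightarrow> c1 \<noteq> c2 \<Longrightarrow> c1 \<inter> c2 = {}"
      unfolding C using orbit_eq_if_meet[OF assms(1)] by auto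
  qed
  then show ?thesis unfolding U by simp
qed

lemma card_orbits_uniform:
  assumes "f permutes {..<N}" "\<And>d. d < N \<Longrightarrow> card (orbit f d) = k" "0 < k"
  shows "card (orbits f N) = N div k"
  using card_orbits_mult[OF assms(1,2)] assms(3) by (metis nonzero_mult_div_cancel_left not_less0)

context
  fixes f g :: "nat \<Rightarrow> nat" and N M :: nat
  assumes f: "f permutes {..<M}" and NM: "N \<le> M"
    and out: "\<And>a. N \<le> a \<Longrightarrow> a < M \<Longrightarrow> f a < N"
    and g: "\<And>b. b < N \<Longrightarrow> g b = (if f b < N then f b else f (f b))"
begin

lemma first_return_funpow:
  assumes b: "b < N"
  shows "(g ^^ k) b \<in> orbit f b \<inter> {..<N}"
proof (induction k)
  case 0 then show ?case using b self_in_orbit by auto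
next
  case (Suc k)
  let ?c = "(g ^^ k) b"
  have c: "?c \<in> orbit f b" "?c < N" using Suc by auto
  have "f ?c \<in> orbit f b" "f (f ?c) \<in> orbit f b" using c(1) orbit_apply_closed by blast+
  moreover have "f (f ?c) < N" if "\<not> f ?c < N"
    using out that permutes_in_image[OF f, of ?c] c(2) NM by auto
  ultimately show ?case using g[OF c(2)] by auto
qed

lemma first_return_catches_up:
  assumes b: "b < N"
  shows "\<exists>j. (g ^^ j) b = (f ^^ k) b \<or> (N \<le> (f ^^ k) b \<and> f ((g ^^ j) b) = (f ^^ k) b)"
proof (induction k)
  case 0 then show ?case by (intro exI[of _ 0]) auto
next
  case (Suc k)
  then obtain j where j: "(g ^^ j) b = (f ^^ k) b \<or> (N \<le> (f ^^ k) b \<and> f ((g ^^ j) b) = (f ^^ k) b)"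
    by blast
  have gN: "(g ^^ j) b < N" using first_return_funpow[OF b] by blast
  show ?case
  proof (cases "(g ^^ j) b = (f ^^ k) b")
    case True
    show ?thesis
    proof (cases "f ((f ^^ k) b) < N")
      case True2: True
      then have "(g ^^ Suc j) b = (f ^^ Suc k) b" using True g[OF gN] by simp
      then show ?thesis by blast
    next
      case False
      then show ?thesis using True by (intro exI[of _ j]) auto
    qed
  next
    case False
    then have "N \<le> (f ^^ k) b" "f ((g ^^ j) b) = (f ^^ k) b" using j by auto
    then have "(g ^^ Suc j) b = (f ^^ Suc k) b" using g[OF gN] by simp
    then show ?thesis by blast
  qed
qed

lemma first_return_orbit:
  assumes b: "b < N"
  shows "orbit g b = orbit f b \<inter> {..<N}"
proof
  show "orbit g b \<subseteq> orbit f b \<inter> {..<N}" using first_return_funpow[OF b] unfolding orbit_def by auto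
  show "orbit f b \<inter> {..<N} \<subseteq> orbit g b"
  proof
    fix y assume y: "y \<in> orbit f b \<inter> {..<N}"
    then obtain k where k: "y = (f ^^ k) b" unfolding orbit_def by auto
    then obtain j where "(g ^^ j) b = y" using first_return_catches_up[OF b, of k] y by auto
    then show "y \<in> orbit g b" using funpow_in_orbit by metis
  qed
qed

lemma card_orbits_first_return: "card (orbits f M) = card (orbits g N)"
proof -
  let ?\<Phi> = "\<lambda>Ob. Ob \<inter> {..<N}"
  have FR: "\<And>b. b < N \<Longrightarrow> orbit g b = orbit f b \<inter> {..<N}"
    using first_return_orbit by blast
  have rep: "\<exists>b<N. orbit f a = orbit f b" if "a < M" for a
  proof (cases "a < N")
    case True then show ?thesis by auto
  next
    case False
    then have "f a < N" using out that by auto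
    then show ?thesis using orbit_apply[OF f] by (intro exI[of _ "f a"]) auto
  qed
  have "bij_betw ?\<Phi> (orbits f M) (orbits g N)"
  proof (rule bij_betw_imageI)
    show "inj_on ?\<Phi> (orbits f M)"
    proof (rule inj_onI)
      fix Ob1 Ob2 assume O: "Ob1 \<in> orbits f M" "Ob2 \<in> orbits f M" "?\<Phi> Ob1 = ?\<Phi> Ob2"
      obtain a1 a2 where a: "a1 < M" "a2 < M" "Ob1 = orbit f a1" "Ob2 = orbit f a2"
        using O(1,2) unfolding orbits_def by auto
      obtain b1 where b1: "b1 < N" "Ob1 = orbit f b1" using rep[OF a(1)] a(3) by auto
      have "b1 \<in> ?\<Phi> Ob2" using O(3) b1 self_in_orbit by blast
      then have "Ob1 \<inter> Ob2 \<noteq> {}" using b1 self_in_orbit by blast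
      then show "Ob1 = Ob2" using orbit_eq_if_meet[OF f] a by auto
    qed
    show "?\<Phi> ` orbits f M = orbits g N"
    proof
      show "?\<Phi> ` orbits f M \<subseteq> orbits g N"
      proof
        fix X assume "X \<in> ?\<Phi> ` orbits f M"
        then obtain a where a: "a < M" "X = ?\<Phi> (orbit f a)" unfolding orbits_def by auto
        obtain b where "b < N" "orbit f a = orbit f b" using rep[OF a(1)] by auto
        then show "X \<in> orbits g N" using a FR unfolding orbits_def by auto
      qed
      show "orbits g N \<subseteq> ?\<Phi> ` orbits f M"
      proof
        fix X assume "X \<in> orbits g N"
        then obtain b where b: "b < N" "X = orbit g b" unfolding orbits_def by auto
        then have "X = ?\<Phi> (orbit f b)" using FR by auto
        moreover have "orbit f b \<in> orbits f M" using b NM unfolding orbits_def by auto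
        ultimately show "X \<in> ?\<Phi> ` orbits f M" by blast
      qed
    qed
  qed
  then show ?thesis using bij_betw_same_card by blast
qed

end

lemma funpow_bij_conj:
  assumes "bij \<pi>"
  shows "((\<pi> \<circ> f \<circ> inv \<pi>) ^^ k) (\<pi> x) = \<pi> ((f ^^ k) x)"
  by (induction k) (auto simp: bij_inv_eq_iff[OF assms] inv_f_f[OF bij_is_inj[OF assms]])

lemma orbit_bij_conj:
  assumes "bij \<pi>"
  shows "orbit (\<pi> \<circ> f \<circ> inv \<pi>) (\<pi> x) = \<pi> ` orbit f x"
  unfolding orbit_def using funpow_bij_conj[OF assms] by auto

lemma orbit_bij_conj':
  assumes "bij \<pi>"
  shows "orbit (\<pi> \<circ> f \<circ> inv \<pi>) y = \<pi> ` orbit f (inv \<pi> y)"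
  using orbit_bij_conj[OF assms, of f "inv \<pi> y"]
    by (simp add: surj_f_inv_f[OF bij_is_surj[OF assms]])

lemma orbits_permutes_conj:
  assumes "\<pi> permutes {..<N}"
  shows "orbits (\<pi> \<circ> f \<circ> inv \<pi>) N = (\<lambda>Ob. \<pi> ` Ob) ` orbits f N"
proof -
  have b: "bij \<pi>" using permutes_bij[OF assms] .
  have "orbits (\<pi> \<circ> f \<circ> inv \<pi>) N = (\<lambda>d. orbit (\<pi> \<circ> f \<circ> inv \<pi>) (\<pi> d)) ` {..<N}"
  proof -
    have "{..<N} = \<pi> ` {..<N}" using permutes_image[OF assms] by simp
    have "orbits (\<pi> \<circ> f \<circ> inv \<pi>) N = (\<lambda>d. orbit (\<pi> \<circ> f \<circ> inv \<pi>) d) ` {..<N}"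
      unfolding orbits_def by auto
    also have "\<dots> = (\<lambda>d. orbit (\<pi> \<circ> f \<circ> inv \<pi>) d) ` (\<pi> ` {..<N})"
      using \<open>{..<N} = \<pi> ` {..<N}\<close> by simp
    finally show ?thesis by (simp add: image_image)
  qed
  also have "\<dots> = (\<lambda>d. \<pi> ` orbit f d) ` {..<N}" using orbit_bij_conj[OF b] by simp
  also have "\<dots> = (\<lambda>Ob. \<pi> ` Ob) ` orbits f N" unfolding orbits_def by auto
  finally show ?thesis .
qed

lemma card_orbits_permutes_conj:
  assumes "\<pi> permutes {..<N}"
  shows "card (orbits (\<pi> \<circ> f \<circ> inv \<pi>) N) = card (orbits f N)"
proof -
  have "inj (\<lambda>Ob. \<pi> ` Ob)" using permutes_inj[OF assms]
    by (simp add: inj_image_eq_iff inj_on_def)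
  then show ?thesis unfolding orbits_permutes_conj[OF assms] by (simp add: card_image inj_on_subset)
qed

section \<open>Counting labelled structures\<close>

locale free_action =
  fixes G :: "('a \<Rightarrow> 'a) set" and act :: "('a \<Rightarrow> 'a) \<Rightarrow> 'x \<Rightarrow> 'x" and X :: "'x set"
  assumes id_mem: "id \<in> G"
    and comp_mem: "\<And>\<pi> \<pi>'. \<pi> \<in> G \<Longrightarrow> \<pi>' \<in> G \<Longrightarrow> \<pi> \<circ> \<pi>' \<in> G"
    and inv_mem: "\<And>\<pi>. \<pi> \<in> G \<Longrightarrow> inv \<pi> \<in> G \<and> inv \<pi> \<circ> \<pi> = id \<and> \<pi> \<circ> inv \<pi> = id"
    and act_id: "\<And>x. x \<in> X \<Longrightarrow> act id x = x"
    and act_comp: "\<And>\<pi> \<pi>' x. \<pi> \<in> G \<Longrightarrow> \<pi>' \<in> G \<Longrightarrow> x \<in> X \<Longrightarrow> act (\<pi> \<circ> \<pi>') x = act \<pi> (act \<pi>' x)"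
    and act_closed: "\<And>\<pi> x. \<pi> \<in> G \<Longrightarrow> x \<in> X \<Longrightarrow> act \<pi> x \<in> X"
    and act_free: "\<And>\<pi> x. \<pi> \<in> G \<Longrightarrow> x \<in> X \<Longrightarrow> act \<pi> x = x \<Longrightarrow> \<pi> = id"
begin

definition act_orbit :: "'x \<Rightarrow> 'x set" where
  "act_orbit x = (\<lambda>\<pi>. act \<pi> x) ` G"

lemma act_orbit_subset: "x \<in> X \<Longrightarrow> act_orbit x \<subseteq> X"
  unfolding act_orbit_def using act_closed by auto

lemma act_orbit_self: "x \<in> X \<Longrightarrow> x \<in> act_orbit x"
  unfolding act_orbit_def using id_mem act_id by force

lemma act_inv_act: "\<pi> \<in> G \<Longrightarrow> x \<in> X \<Longrightarrow> act (inv \<pi>) (act \<pi> x) = x"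
  using act_comp[of "inv \<pi>" \<pi> x] inv_mem act_id by auto

lemma act_orbit_eq:
  assumes x: "x \<in> X" and y: "y \<in> act_orbit x"
  shows "act_orbit y = act_orbit x"
proof -
  obtain \<pi> where \<pi>: "\<pi> \<in> G" "y = act \<pi> x" using y unfolding act_orbit_def by auto
  have "act \<pi>' y = act (\<pi>' \<circ> \<pi>) x" if "\<pi>' \<in> G" for \<pi>'
    using act_comp[OF that \<pi>(1) x] \<pi>(2) by simp
  then have "act_orbit y \<subseteq> act_orbit x" unfolding act_orbit_def using comp_mem[OF _ \<pi>(1)] by auto
  moreover have "act \<pi>' x = act (\<pi>' \<circ> inv \<pi>) y" if "\<pi>' \<in> G" for \<pi>'
    using act_comp[OF that _ act_closed[OF \<pi>(1) x], of "inv \<pi>"] act_inv_act[OF \<pi>(1) x] \<pi>(2) inv_mem[OF \<pi>(1)]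
    by simp
  then have "act_orbit x \<subseteq> act_orbit y"
    unfolding act_orbit_def using comp_mem[OF _ conjunct1[OF inv_mem[OF \<pi>(1)]]] by auto
  ultimately show ?thesis by blast
qed

lemma act_orbit_disjoint:
  "x \<in> X \<Longrightarrow> y \<in> X \<Longrightarrow> act_orbit x \<noteq> act_orbit y \<Longrightarrow> act_orbit x \<inter> act_orbit y = {}"
  using act_orbit_eq by blast

lemma inj_on_act:
  assumes x: "x \<in> X"
  shows "inj_on (\<lambda>\<pi>. act \<pi> x) G"
proof (rule inj_onI)
  fix \<pi> \<pi>' assume a: "\<pi> \<in> G" "\<pi>' \<in> G" "act \<pi> x = act \<pi>' x"
  have "act (inv \<pi>' \<circ> \<pi>) x = x"
    using act_comp[of "inv \<pi>'" \<pi> x] inv_mem[OF a(2)] a x act_inv_act[OF a(2) x] by auto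
  then have "inv \<pi>' \<circ> \<pi> = id" using act_free[OF comp_mem[OF _ a(1)] x] inv_mem[OF a(2)] by blast
  then show "\<pi> = \<pi>'" using inv_mem[OF a(2)] by (metis comp_assoc comp_id fun.map_id)
qed

lemma sum_quotient:
  fixes w :: "'x \<Rightarrow> 'b :: semiring_1"
  assumes R: "\<And>x x'. (x, x') \<in> R \<longleftrightarrow> (\<exists>\<pi>\<in>G. x' = act \<pi> x)"
    and fin: "finite X" and w_act: "\<And>\<pi> x. \<pi> \<in> G \<Longrightarrow> x \<in> X \<Longrightarrow> w (act \<pi> x) = w x"
    and Y: "Y \<subseteq> X" and K: "\<And>x. x \<in> X \<Longrightarrow> card {\<pi>\<in>G. act \<pi> x \<in> Y} = K"
  shows "of_nat K * (\<Sum>c\<in>X // R. w (SOME x. x \<in> c)) = (\<Sum>y\<in>Y. w y)"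
proof -
  have "R `` {x} = act_orbit x" for x unfolding act_orbit_def using R by auto
  then have quot: "X // R = act_orbit ` X" unfolding quotient_def by auto
  have w_orbit: "w y = w x" if "x \<in> X" "y \<in> act_orbit x" for x y
    using that w_act unfolding act_orbit_def by auto
  have card_Int: "card (act_orbit x \<inter> Y) = K" if "x \<in> X" for x
  proof -
    have "act_orbit x \<inter> Y = (\<lambda>\<pi>. act \<pi> x) ` {\<pi>\<in>G. act \<pi> x \<in> Y}" unfolding act_orbit_def by auto
    then show ?thesis
      using K[OF that] card_image inj_on_subset[OF inj_on_act[OF that], of "{\<pi>\<in>G. act \<pi> x \<in> Y}"]
      by auto
  qed
  have "Y = (\<Union>c\<in>X // R. c \<inter> Y)" using Y act_orbit_self unfolding quot by auto
  then have "(\<Sum>y\<in>Y. w y) = (\<Sum>y\<in>(\<Union>c\<in>X // R. c \<inter> Y). w y)" by simp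
  also have "\<dots> = (\<Sum>c\<in>X // R. \<Sum>y\<in>c \<inter> Y. w y)"
  proof (rule sum.UNION_disjoint)
    show "finite (X // R)" unfolding quot using fin by simp
    show "\<forall>c\<in>X // R. finite (c \<inter> Y)"
      using fin act_orbit_subset unfolding quot by (auto intro: finite_subset)
    show "\<forall>c\<in>X // R. \<forall>c'\<in>X // R. c \<noteq> c' \<longrightarrow> (c \<inter> Y) \<inter> (c' \<inter> Y) = {}"
      using act_orbit_disjoint unfolding quot by blast
  qed
  also have "\<dots> = (\<Sum>c\<in>X // R. of_nat K * w (SOME x. x \<in> c))"
  proof (rule sum.cong[OF refl])
    fix c assume "c \<in> X // R"
    then obtain x where x: "x \<in> X" "c = act_orbit x" unfolding quot by auto
    then have "(SOME x. x \<in> c) \<in> c" using act_orbit_self by (metis someI)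
    then have "w (SOME x. x \<in> c) = w x" using w_orbit x by auto
    moreover have "(\<Sum>y\<in>c \<inter> Y. w y) = (\<Sum>y\<in>c \<inter> Y. w x)" using w_orbit x by (intro sum.cong) auto
    ultimately show "(\<Sum>y\<in>c \<inter> Y. w y) = of_nat K * w (SOME x. x \<in> c)" using card_Int x by simp
  qed
  finally show ?thesis by (simp add: sum_distrib_left)
qed

end

lemma permutes_fix_remove:
  assumes "\<pi> permutes S" "\<pi> a = a"
  shows "\<pi> permutes (S - {a})"
proof -
  have "\<forall>x. x \<notin> S - {a} \<longrightarrow> \<pi> x = x" using assms
    unfolding permutes_def by auto
  moreover have "\<forall>y. \<exists>!x. \<pi> x = y" using assms(1) unfolding permutes_def
    by blast
  ultimately show ?thesis unfolding permutes_def by blast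
qed

lemma permutes_fix_iff:
  assumes "a \<in> S"
  shows "(\<pi> permutes S \<and> \<pi> a = a) \<longleftrightarrow> \<pi> permutes (S - {a})"
  using permutes_fix_remove permutes_subset[of \<pi> "S - {a}" S] permutes_not_in[of \<pi> "S - {a}" a]
  by auto

lemma card_permutes_fixing:
  assumes "0 < N"
  shows "card {\<pi>. \<pi> permutes {..<N} \<and> \<pi> 0 = 0} = fact (N - 1)"
proof -
  have "{\<pi>. \<pi> permutes {..<N} \<and> \<pi> 0 = 0} = {\<pi>. \<pi> permutes ({..<N} - {0})}"
    using permutes_fix_iff[of 0 "{..<N}"] assms by auto
  moreover have "card ({..<N} - {0::nat}) = N - 1" using assms by simp
  ultimately show ?thesis using card_permutations[of "{..<N} - {0}" "N - 1"] by simp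
qed

lemma card_permutes_stabilising:
  assumes fin: "finite S" and AS: "A \<subseteq> S"
  shows "card {\<tau>. \<tau> permutes S \<and> \<tau> ` A = A} = fact (card A) * fact (card S - card A)"
proof -
  let ?P = "{\<tau>. \<tau> permutes S \<and> \<tau> ` A = A}"
  let ?Q = "{\<tau>. \<tau> permutes A} \<times> {\<tau>. \<tau> permutes (S - A)}"
  let ?h = "\<lambda>(\<tau>1, \<tau>2). \<tau>1 \<circ> \<tau>2"
  have "bij_betw ?h ?Q ?P"
  proof (rule bij_betwI[where g = "\<lambda>\<tau>. (\<lambda>x. if x \<in> A then \<tau> x else x, \<lambda>x. if x \<in> S - A then \<tau> x else x)"])
    show "?h \<in> ?Q \<rightarrow> ?P"
    proof
      fix p assume "p \<in> ?Q"
      then obtain \<tau>1 \<tau>2 where p: "p = (\<tau>1, \<tau>2)" "\<tau>1 permutes A" "\<tau>2 permutes (S - A)"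
        by auto
      have "\<tau>1 \<circ> \<tau>2 permutes S"
        using permutes_compose[OF permutes_subset[OF p(3)] permutes_subset[OF p(2) AS]] by auto
      moreover have "(\<tau>1 \<circ> \<tau>2) ` A = A"
      proof -
        have "\<tau>2 ` A = A" using p(3) permutes_not_in[OF p(3)] by force
        moreover have "(\<tau>1 \<circ> \<tau>2) ` A = \<tau>1 ` (\<tau>2 ` A)"
          by (rule image_comp[symmetric])
        ultimately show ?thesis using permutes_image[OF p(2)] by simp
      qed
      ultimately show "?h p \<in> ?P" using p by simp
    qed
    show "(\<lambda>\<tau>. (\<lambda>x. if x \<in> A then \<tau> x else x, \<lambda>x. if x \<in> S - A then \<tau> x else x)) \<in> ?P \<rightarrow> ?Q"
    proof
      fix \<tau> assume "\<tau> \<in> ?P"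
      then have t: "\<tau> permutes S" "\<tau> ` A = A" by auto
      have inj: "inj \<tau>" using permutes_inj[OF t(1)] .
      have "bij_betw \<tau> A A" using t(2) inj by (simp add: bij_betw_def inj_on_subset[OF inj])
      then have 1: "(\<lambda>x. if x \<in> A then \<tau> x else x) permutes A"
        by (intro bij_imp_permutes) (auto simp: bij_betw_def inj_on_def image_def)
      have "\<tau> ` (S - A) = S - A" using t permutes_image[OF t(1)] inj
        by (simp add: image_set_diff)
      then have "bij_betw \<tau> (S - A) (S - A)" using inj
        by (simp add: bij_betw_def inj_on_subset[OF inj])
      then have 2: "(\<lambda>x. if x \<in> S - A then \<tau> x else x) permutes (S - A)"
        by (intro bij_imp_permutes) (auto simp: bij_betw_def inj_on_def image_def)
      show "(\<lambda>x. if x \<in> A then \<tau> x else x, \<lambda>x. if x \<in> S - A then \<tau> x else x) \<in> ?Q"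
        using 1 2 by simp
    qed
    show "(\<lambda>\<tau>. (\<lambda>x. if x \<in> A then \<tau> x else x, \<lambda>x. if x \<in> S - A then \<tau> x else x)) (?h p) = p"
      if pQ: "p \<in> ?Q" for p
    proof -
      obtain \<tau>1 \<tau>2 where p: "p = (\<tau>1, \<tau>2)" "\<tau>1 permutes A" "\<tau>2 permutes (S - A)"
        using pQ by auto
      have a: "\<tau>2 x = x" if "x \<in> A" for x using permutes_not_in[OF p(3)] that by auto
      have b: "\<tau>1 (\<tau>2 x) = \<tau>2 x" if "x \<in> S - A" for x
        using permutes_not_in[OF p(2)] permutes_in_image[OF p(3)] that by auto
      have c: "\<tau>1 x = x" if "x \<notin> A" for x using permutes_not_in[OF p(2)] that by auto
      have d: "\<tau>2 x = x" if "x \<notin> S - A" for x using permutes_not_in[OF p(3)] that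
        by auto
      show ?thesis using p a b c d by (auto simp: fun_eq_iff)
    qed
    show "?h ((\<lambda>\<tau>. (\<lambda>x. if x \<in> A then \<tau> x else x, \<lambda>x. if x \<in> S - A then \<tau> x else x)) \<tau>) = \<tau>"
      if "\<tau> \<in> ?P" for \<tau>
    proof -
      have t: "\<tau> permutes S" "\<tau> ` A = A" using that by auto
      have "\<tau> x \<notin> A" if "x \<in> S - A" for x
        using t permutes_inj[OF t(1)] that by (metis DiffD2 image_iff injD)
      moreover have "\<tau> x = x" if "x \<notin> S" for x using permutes_not_in[OF t(1) that] .
      ultimately show ?thesis by (auto simp: fun_eq_iff)
    qed
  qed
  then have "card ?P = card ?Q" using bij_betw_same_card[of ?h ?Q ?P] by simp
  also have "\<dots> = card {\<tau>. \<tau> permutes A} * card {\<tau>. \<tau> permutes (S - A)}"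
    by (rule card_cartesian_product)
  also have "\<dots> = fact (card A) * fact (card (S - A))"
    using card_permutations[of A "card A"] card_permutations[of "S - A" "card (S - A)"] fin AS
    by (simp add: finite_subset)
  finally show ?thesis using card_Diff_subset[OF finite_subset[OF AS fin] AS] by simp
qed

lemma card_permutes_mapping:
  assumes fin: "finite S" and AS: "A \<subseteq> S" and BS: "B \<subseteq> S" and c: "card A = card B"
  shows "card {\<pi>. \<pi> permutes S \<and> \<pi> ` A = B} = fact (card A) * fact (card S - card A)"
proof -
  have fA: "finite A" "finite B" "finite (S - A)" "finite (S - B)"
    using fin AS BS finite_subset by auto
  obtain h1 where h1: "bij_betw h1 A B" using bij_betw_iff_card fA c by blast
  have "card (S - A) = card (S - B)" using c AS BS fin by (simp add: card_Diff_subset finite_subset)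
  then obtain h2 where h2: "bij_betw h2 (S - A) (S - B)" using bij_betw_iff_card fA by blast
  define \<phi> where "\<phi> x = (if x \<in> A then h1 x else if x \<in> S - A then h2 x else x)" for x
  have "bij_betw \<phi> A B" using h1
    by (rule bij_betw_cong[THEN iffD1, rotated]) (auto simp: \<phi>_def)
  moreover have "bij_betw \<phi> (S - A) (S - B)" using h2
    by (rule bij_betw_cong[THEN iffD1, rotated]) (auto simp: \<phi>_def)
  ultimately have "bij_betw \<phi> (A \<union> (S - A)) (B \<union> (S - B))"
    by (rule bij_betw_combine) auto
  then have "bij_betw \<phi> S S" using AS BS by (simp add: Un_Diff_cancel Un_absorb1)
  then have phi: "\<phi> permutes S"
    by (rule bij_imp_permutes) (use AS in \<open>auto simp: \<phi>_def\<close>)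
  have phiA: "\<phi> ` A = B" using \<open>bij_betw \<phi> A B\<close> by (simp add: bij_betw_def)
  let ?P = "{\<pi>. \<pi> permutes S \<and> \<pi> ` A = B}"
  let ?T = "{\<tau>. \<tau> permutes S \<and> \<tau> ` A = A}"
  have "bij_betw (\<lambda>\<pi>. inv \<phi> \<circ> \<pi>) ?P ?T"
  proof (rule bij_betwI[where g = "\<lambda>\<tau>. \<phi> \<circ> \<tau>"])
    have invphi: "inv \<phi> permutes S" using permutes_inv[OF phi] .
    have invB: "inv \<phi> ` B = A" using phiA permutes_inj[OF phi] by (metis image_inv_f_f)
    show "(\<lambda>\<pi>. inv \<phi> \<circ> \<pi>) \<in> ?P \<rightarrow> ?T"
    proof
      fix \<pi> assume "\<pi> \<in> ?P"
      then have p: "\<pi> permutes S" "\<pi> ` A = B" by auto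
      have "(inv \<phi> \<circ> \<pi>) ` A = inv \<phi> ` (\<pi> ` A)"
        by (rule image_comp[symmetric])
      then show "inv \<phi> \<circ> \<pi> \<in> ?T" using permutes_compose[OF p(1) invphi] invB p(2)
        by simp
    qed
    show "(\<lambda>\<tau>. \<phi> \<circ> \<tau>) \<in> ?T \<rightarrow> ?P"
    proof
      fix \<pi> assume "\<pi> \<in> ?T"
      then have p: "\<pi> permutes S" "\<pi> ` A = A" by auto
      have "(\<phi> \<circ> \<pi>) ` A = \<phi> ` (\<pi> ` A)" by (rule image_comp[symmetric])
      then show "\<phi> \<circ> \<pi> \<in> ?P" using permutes_compose[OF p(1) phi] phiA p(2)
        by simp
    qed
    show "\<phi> \<circ> (inv \<phi> \<circ> \<pi>) = \<pi>" for \<pi>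
      using permutes_inverses[OF phi] by (auto simp: fun_eq_iff)
    show "inv \<phi> \<circ> (\<phi> \<circ> \<tau>) = \<tau>" for \<tau>
      using permutes_inverses[OF phi] by (auto simp: fun_eq_iff)
  qed
  then have "card ?P = card ?T"
    using bij_betw_same_card[of "\<lambda>\<pi>. inv \<phi> \<circ> \<pi>" ?P ?T] by simp
  then show ?thesis using card_permutes_stabilising[OF fin AS] by simp
qed

lemma card_inj_funcset_fact:
  assumes "finite A" "finite B" "card A = card B"
  shows "card {f \<in> A \<rightarrow>\<^sub>E B. inj_on f A} = fact (card A)"
proof -
  have "card {f \<in> A \<rightarrow>\<^sub>E B. inj_on f A} = card B ^ (card A - card A) * prod ((-) (card B)) {0..<card A}"
    using card_inj_on_subset_funcset[OF assms(1,2) subset_refl] .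
  also have "\<dots> = (\<Prod>i = 0..<card A. card A - i)" using assms(3) by simp
  also have "\<dots> = fact (card A)" using fact_prod_rev[of "card A", where 'a = nat] by simp
  finally show ?thesis .
qed

section \<open>Relabelling the darts of a map\<close>

type_synonym oriented_map = "(nat \<Rightarrow> nat) \<times> (nat \<Rightarrow> nat) \<times> nat set"
type_synonym partially_oriented_map = "(nat \<Rightarrow> nat) \<times> (nat \<Rightarrow> nat) \<times> nat set \<times> nat set"

definition conjugate :: "(nat \<Rightarrow> nat) \<Rightarrow> (nat \<Rightarrow> nat) \<Rightarrow> nat \<Rightarrow> nat" where
  "conjugate \<pi> f = \<pi> \<circ> f \<circ> inv \<pi>"

definition dart_rel :: "nat \<Rightarrow> (nat \<Rightarrow> nat) \<Rightarrow> (nat \<Rightarrow> nat) \<Rightarrow> (nat \<times> nat) set" where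
  "dart_rel N \<sigma> \<alpha> = {(a, \<sigma> a) | a. a < N} \<union> {(a, \<alpha> a) | a. a < N}"

definition darts_connected :: "nat \<Rightarrow> (nat \<Rightarrow> nat) \<Rightarrow> (nat \<Rightarrow> nat) \<Rightarrow> bool" where
  "darts_connected N \<sigma> \<alpha> \<longleftrightarrow> (\<forall>x<N. \<forall>y<N. (x, y) \<in> (dart_rel N \<sigma> \<alpha>)\<^sup>*)"

lemma is_map_iff_connected: "is_map N \<sigma> \<alpha> \<longleftrightarrow> \<sigma> permutes {..<N} \<and> \<alpha> permutes {..<N} \<and>
     (\<forall>d<N. \<alpha> d \<noteq> d \<and> \<alpha> (\<alpha> d) = d) \<and> darts_connected N \<sigma> \<alpha>"
  unfolding is_map_def dart_rel_def darts_connected_def by simp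

lemma rtrancl_map_rtrancl:
  assumes "\<And>x y. (x, y) \<in> r \<Longrightarrow> (f x, f y) \<in> s\<^sup>*" and "(x, y) \<in> r\<^sup>*"
  shows "(f x, f y) \<in> s\<^sup>*"
  using assms(2) by induction (auto dest: assms(1) intro: rtrancl_trans)

lemma dart_rel_rot: "a < N \<Longrightarrow> (a, \<sigma> a) \<in> dart_rel N \<sigma> \<alpha>"
  unfolding dart_rel_def by auto
lemma dart_rel_inv: "a < N \<Longrightarrow> (a, \<alpha> a) \<in> dart_rel N \<sigma> \<alpha>"
  unfolding dart_rel_def by auto

context
  fixes \<pi> :: "nat \<Rightarrow> nat" and N :: nat assumes \<pi>: "\<pi> permutes {..<N}"
begin

lemma permutes_inv_apply_left[simp]: "inv \<pi> (\<pi> x) = x"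
  using permutes_inverses(2)[OF \<pi>] .
lemma permutes_inv_apply_right[simp]: "\<pi> (inv \<pi> x) = x"
  using permutes_inverses(1)[OF \<pi>] .
lemma permutes_less_iff[simp]: "\<pi> x < N \<longleftrightarrow> x < N"
  using permutes_in_image[OF \<pi>] by simp
lemma permutes_inv_less_iff[simp]: "inv \<pi> x < N \<longleftrightarrow> x < N"
  using permutes_in_image[OF permutes_inv[OF \<pi>]] by simp
lemma mem_permutes_image_iff: "x \<in> \<pi> ` S \<longleftrightarrow> inv \<pi> x \<in> S"
  by (metis image_iff permutes_inv_apply_left permutes_inv_apply_right)
lemma permutes_apply_mem_image_iff[simp]: "\<pi> x \<in> \<pi> ` S \<longleftrightarrow> x \<in> S"
  by (simp add: mem_permutes_image_iff)
lemma conjugate_apply[simp]: "conjugate \<pi> f (\<pi> x) = \<pi> (f x)" unfolding conjugate_def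
  by simp
lemma conjugate_apply': "conjugate \<pi> f y = \<pi> (f (inv \<pi> y))" unfolding conjugate_def
  by simp
lemma conjugate_comp: "conjugate \<pi> f \<circ> conjugate \<pi> g = conjugate \<pi> (f \<circ> g)"
  unfolding conjugate_def by (auto simp: fun_eq_iff)
lemma conjugate_permutes: "f permutes {..<N} \<Longrightarrow> conjugate \<pi> f permutes {..<N}"
  unfolding conjugate_def by (intro permutes_compose permutes_inv \<pi>) auto

lemma orbit_conjugate: "orbit (conjugate \<pi> f) y = \<pi> ` orbit f (inv \<pi> y)"
  unfolding conjugate_def using orbit_bij_conj'[OF permutes_bij[OF \<pi>]] by simp

lemma card_permutes_image: "card (\<pi> ` S) = card S"
  using card_image permutes_inj[OF \<pi>] inj_on_subset by blast

lemma permutes_image_Int: "\<pi> ` A \<inter> \<pi> ` B = \<pi> ` (A \<inter> B)"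
  using permutes_inj[OF \<pi>] by (simp add: image_Int)

lemma card_orbit_conjugate: "card (orbit (conjugate \<pi> f) y) = card (orbit f (inv \<pi> y))"
  unfolding orbit_conjugate card_permutes_image ..

lemma card_orbit_conjugate_Int: "card (orbit (conjugate \<pi> f) y \<inter> \<pi> ` S) = card (orbit f (inv \<pi> y) \<inter> S)"
  unfolding orbit_conjugate permutes_image_Int card_permutes_image ..

lemma card_orbits_conjugate: "card (orbits (conjugate \<pi> f) N) = card (orbits f N)"
  unfolding conjugate_def using card_orbits_permutes_conj[OF \<pi>] .

lemma dart_rel_rtrancl_conjugate:
  "(x, y) \<in> (dart_rel N \<sigma> \<alpha>)\<^sup>* \<Longrightarrow> (\<pi> x, \<pi> y) \<in> (dart_rel N (conjugate \<pi> \<sigma>) (conjugate \<pi> \<alpha>))\<^sup>*"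
proof (induction rule: rtrancl_induct)
  case base then show ?case by simp
next
  case (step y z)
  have "(\<pi> y, \<pi> z) \<in> dart_rel N (conjugate \<pi> \<sigma>) (conjugate \<pi> \<alpha>)"
    using step(2) unfolding dart_rel_def by auto
  then show ?case using step(3) by simp
qed

lemma is_map_conjugate: "is_map N \<sigma> \<alpha> \<Longrightarrow> is_map N (conjugate \<pi> \<sigma>) (conjugate \<pi> \<alpha>)"
  unfolding is_map_iff_connected darts_connected_def
proof (intro conjI allI impI)
  assume m: "\<sigma> permutes {..<N} \<and> \<alpha> permutes {..<N} \<and> (\<forall>d<N. \<alpha> d \<noteq> d \<and> \<alpha> (\<alpha> d) = d) \<and>
    (\<forall>x<N. \<forall>y<N. (x, y) \<in> (dart_rel N \<sigma> \<alpha>)\<^sup>*)"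
  show "conjugate \<pi> \<sigma> permutes {..<N}" "conjugate \<pi> \<alpha> permutes {..<N}"
    using m conjugate_permutes by auto
  fix d assume d: "d < N"
  have h: "\<alpha> (inv \<pi> d) \<noteq> inv \<pi> d" using m d by simp
  show "conjugate \<pi> \<alpha> d \<noteq> d" unfolding conjugate_apply'
  proof
    assume "\<pi> (\<alpha> (inv \<pi> d)) = d"
    then have "inv \<pi> (\<pi> (\<alpha> (inv \<pi> d))) = inv \<pi> d" by simp
    with h show False by simp
  qed
  show "conjugate \<pi> \<alpha> (conjugate \<pi> \<alpha> d) = d" using m d
    by (simp add: conjugate_apply')
next
  fix x y assume m: "\<sigma> permutes {..<N} \<and> \<alpha> permutes {..<N} \<and> (\<forall>d<N. \<alpha> d \<noteq> d \<and> \<alpha> (\<alpha> d) = d) \<and>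
    (\<forall>x<N. \<forall>y<N. (x, y) \<in> (dart_rel N \<sigma> \<alpha>)\<^sup>*)" and xy: "x < N" "y < N"
  then have "(inv \<pi> x, inv \<pi> y) \<in> (dart_rel N \<sigma> \<alpha>)\<^sup>*" by simp
  from dart_rel_rtrancl_conjugate[OF this] show "(x, y) \<in> (dart_rel N (conjugate \<pi> \<sigma>) (conjugate \<pi> \<alpha>))\<^sup>*"
    by simp
qed

lemma is_planar_map_conjugate: "is_planar_map N \<sigma> \<alpha> \<Longrightarrow> is_planar_map N (conjugate \<pi> \<sigma>) (conjugate \<pi> \<alpha>)"
  unfolding is_planar_map_def using is_map_conjugate
  by (simp add: conjugate_comp card_orbits_conjugate)

lemma conjugate_fixing_map_eq_id:
  assumes m: "is_map N \<sigma> \<alpha>" and N: "0 < N" and p0: "\<pi> 0 = 0"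
    and s: "conjugate \<pi> \<sigma> = \<sigma>" and a: "conjugate \<pi> \<alpha> = \<alpha>"
  shows "\<pi> = id"
proof -
  have cs: "\<pi> (\<sigma> x) = \<sigma> (\<pi> x)" for x using conjugate_apply[of \<sigma> x] s
    by simp
  have ca: "\<pi> (\<alpha> x) = \<alpha> (\<pi> x)" for x using conjugate_apply[of \<alpha> x] a
    by simp
  have "(0, y) \<in> (dart_rel N \<sigma> \<alpha>)\<^sup>* \<Longrightarrow> \<pi> y = y" for y
  proof (induction rule: rtrancl_induct)
    case base then show ?case using p0 .
  next
    case (step y z) then show ?case unfolding dart_rel_def using cs ca by auto
  qed
  moreover have "\<pi> y = y" if "\<not> y < N" for y using permutes_not_in[OF \<pi>] that by auto
  moreover have "(0, y) \<in> (dart_rel N \<sigma> \<alpha>)\<^sup>*" if "y < N" for y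
    using m N that unfolding is_map_iff_connected darts_connected_def by blast
  ultimately show ?thesis by (metis eq_id_iff)
qed

end

definition root_perms :: "nat \<Rightarrow> (nat \<Rightarrow> nat) set" where
  "root_perms N = {\<pi>. \<pi> permutes {..<N} \<and> \<pi> 0 = 0}"

lemma id_root_perms: "id \<in> root_perms N" unfolding root_perms_def by simp
lemma comp_root_perms: "\<pi> \<in> root_perms N \<Longrightarrow> \<pi>' \<in> root_perms N \<Longrightarrow> \<pi> \<circ> \<pi>' \<in> root_perms N"
  unfolding root_perms_def using permutes_compose by auto
lemma inv_root_perms: "\<pi> \<in> root_perms N \<Longrightarrow> inv \<pi> \<in> root_perms N \<and> inv \<pi> \<circ> \<pi> = id \<and> \<pi> \<circ> inv \<pi> = id"
  unfolding root_perms_def using permutes_inv permutes_inv_eq permutes_inv_o by fastforce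
lemma conjugate_id: "conjugate id f = f" unfolding conjugate_def by simp
lemma conjugate_compose:
  "\<pi> \<in> root_perms N \<Longrightarrow> \<pi>' \<in> root_perms N \<Longrightarrow> conjugate (\<pi> \<circ> \<pi>') f = conjugate \<pi> (conjugate \<pi>' f)"
proof -
  assume a: "\<pi> \<in> root_perms N" "\<pi>' \<in> root_perms N"
  have "inv (\<pi> \<circ> \<pi>') = inv \<pi>' \<circ> inv \<pi>"
    using a unfolding root_perms_def by (intro o_inv_distrib permutes_bij) auto
  then show ?thesis unfolding conjugate_def by (simp add: comp_assoc)
qed

lemma card_root_perms: "0 < N \<Longrightarrow> card (root_perms N) = fact (N - 1)"
  unfolding root_perms_def using card_permutes_fixing by simp

definition relabel_Q :: "(nat \<Rightarrow> nat) \<Rightarrow> oriented_map \<Rightarrow> oriented_map" where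
  "relabel_Q \<pi> x = (case x of (\<sigma>, \<alpha>, Out) \<Rightarrow> (conjugate \<pi> \<sigma>, conjugate \<pi> \<alpha>, \<pi> ` Out))"

definition weight_Q :: "complex \<Rightarrow> nat \<Rightarrow> oriented_map \<Rightarrow> complex" where
  "weight_Q \<gamma> N x = (case x of (\<sigma>, \<alpha>, Out) \<Rightarrow> \<gamma> ^ num_alternating N \<sigma> Out)"

lemma iso_Q_iff: "(x, x') \<in> iso_Q N \<longleftrightarrow> (\<exists>\<pi>\<in>root_perms N. x' = relabel_Q \<pi> x)"
  by (cases x; cases x') (auto simp: iso_Q_def relabel_Q_def root_perms_def conjugate_def)

lemma relabel_Q_quartic_EO:
  assumes x: "x \<in> quartic_EO n" and p: "\<pi> \<in> root_perms (4 * n)"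
  shows "relabel_Q \<pi> x \<in> quartic_EO n"
proof -
  obtain \<sigma> \<alpha> Out where xe: "x = (\<sigma>, \<alpha>, Out)" by (cases x)
  have \<pi>: "\<pi> permutes {..<4 * n}" "\<pi> 0 = 0" using p unfolding root_perms_def by auto
  note x' = x[unfolded xe quartic_EO_def, simplified]
  have "is_planar_map (4 * n) (conjugate \<pi> \<sigma>) (conjugate \<pi> \<alpha>)"
    using is_planar_map_conjugate[OF \<pi>(1)] x' by auto
  moreover have "\<forall>d<4 * n. card (orbit (conjugate \<pi> \<sigma>) d) = 4"
    using x' card_orbit_conjugate[OF \<pi>(1)] permutes_inv_less_iff[OF \<pi>(1)] by auto
  moreover have "\<pi> ` Out \<subseteq> {..<4 * n}" using x' permutes_less_iff[OF \<pi>(1)] by auto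
  moreover have "\<forall>d<4 * n. d \<in> \<pi> ` Out \<longleftrightarrow> conjugate \<pi> \<alpha> d \<notin> \<pi> ` Out"
    using x' mem_permutes_image_iff[OF \<pi>(1)] conjugate_apply'[OF \<pi>(1)]
      permutes_inv_less_iff[OF \<pi>(1)] permutes_inv_apply_left[OF \<pi>(1)]
      by auto
  moreover have "\<forall>d<4 * n. card (orbit (conjugate \<pi> \<sigma>) d \<inter> \<pi> ` Out) = 2"
    using x' card_orbit_conjugate_Int[OF \<pi>(1)] permutes_inv_less_iff[OF \<pi>(1)] by auto
  moreover have "0 \<in> \<pi> ` Out" using x' \<pi>(2) by (metis image_eqI)
  ultimately show ?thesis unfolding xe relabel_Q_def quartic_EO_def by simp
qed

lemma card_filter_image:
  assumes "inj_on f A"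
  shows "card {v \<in> f ` A. P v} = card {w \<in> A. P (f w)}"
proof -
  have "{v \<in> f ` A. P v} = f ` {w \<in> A. P (f w)}" by auto
  then show ?thesis using card_image inj_on_subset[OF assms]
    by (metis (no_types, lifting) mem_Collect_eq subsetI)
qed

lemma inj_image_permutes: "\<pi> permutes S \<Longrightarrow> inj (\<lambda>Ob. \<pi> ` Ob)"
  using permutes_inj inj_image_eq_iff by (metis injI)

lemma num_alternating_conjugate:
  assumes \<pi>: "\<pi> permutes {..<N}"
  shows "num_alternating N (conjugate \<pi> \<sigma>) (\<pi> ` Out) = num_alternating N \<sigma> Out"
proof -
  have o: "orbits (conjugate \<pi> \<sigma>) N = (\<lambda>Ob. \<pi> ` Ob) ` orbits \<sigma> N"
    unfolding conjugate_def using orbits_permutes_conj[OF \<pi>] .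
  have "(\<forall>d\<in>\<pi> ` w. d \<in> \<pi> ` Out \<longrightarrow> conjugate \<pi> \<sigma> (conjugate \<pi> \<sigma> d) \<in> \<pi> ` Out) \<longleftrightarrow>
        (\<forall>e\<in>w. e \<in> Out \<longrightarrow> \<sigma> (\<sigma> e) \<in> Out)" for w
    using conjugate_apply[OF \<pi>] permutes_apply_mem_image_iff[OF \<pi>] by auto
  then show ?thesis unfolding num_alternating_def o
    using card_filter_image[OF inj_on_subset[OF inj_image_permutes[OF \<pi>] subset_UNIV]] by simp
qed

lemma finite_quartic_EO: "finite (quartic_EO n)"
proof -
  have "quartic_EO n \<subseteq> {\<sigma>. \<sigma> permutes {..<4*n}} \<times> {\<alpha>. \<alpha> permutes {..<4*n}} \<times> Pow {..<4*n}"
    unfolding quartic_EO_def is_planar_map_def is_map_def by auto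
  moreover have "finite ({\<sigma>. \<sigma> permutes {..<4*n}} \<times> {\<alpha>. \<alpha> permutes {..<4*n}} \<times> Pow {..<4*n})"
    using finite_permutations[of "{..<4*n}"] by simp
  ultimately show ?thesis using finite_subset by blast
qed

lemma free_action_relabel_Q:
  assumes "0 < n"
  shows "free_action (root_perms (4 * n)) relabel_Q (quartic_EO n)"
proof
  fix \<pi> x assume \<pi>: "\<pi> \<in> root_perms (4 * n)" and x: "x \<in> quartic_EO n" and fixed: "relabel_Q \<pi> x = x"
  obtain \<sigma> \<alpha> Out where xe: "x = (\<sigma>, \<alpha>, Out)" by (cases x)
  have "is_map (4 * n) \<sigma> \<alpha>" using x unfolding xe quartic_EO_def is_planar_map_def by auto
  moreover have "conjugate \<pi> \<sigma> = \<sigma>" "conjugate \<pi> \<alpha> = \<alpha>" using fixed unfolding xe relabel_Q_def by auto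
  ultimately show "\<pi> = id"
    using conjugate_fixing_map_eq_id[of \<pi> "4 * n" \<sigma> \<alpha>] \<pi> assms unfolding root_perms_def by auto
next
  show "relabel_Q \<pi> x \<in> quartic_EO n" if "\<pi> \<in> root_perms (4 * n)" "x \<in> quartic_EO n" for \<pi> x
    using relabel_Q_quartic_EO that by blast
qed (auto simp: id_root_perms comp_root_perms inv_root_perms relabel_Q_def
  conjugate_id conjugate_compose image_comp split: prod.splits)

lemma Q_coeff_labelled:
  assumes n: "0 < n"
  shows "of_nat (fact (4 * n - 1)) * Q_coeff n \<gamma> = (\<Sum>x\<in>quartic_EO n. weight_Q \<gamma> (4 * n) x)"
  unfolding Q_coeff_def weight_Q_def[symmetric]
proof (rule free_action.sum_quotient[OF free_action_relabel_Q[OF n]])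
  show "(x, x') \<in> iso_Q (4 * n) \<longleftrightarrow> (\<exists>\<pi>\<in>root_perms (4 * n). x' = relabel_Q \<pi> x)" for x x'
    by (rule iso_Q_iff)
  show "weight_Q \<gamma> (4 * n) (relabel_Q \<pi> x) = weight_Q \<gamma> (4 * n) x" if "\<pi> \<in> root_perms (4 * n)" for \<pi> x
    using that by (auto simp: weight_Q_def relabel_Q_def root_perms_def num_alternating_conjugate split: prod.splits)
  show "card {\<pi> \<in> root_perms (4 * n). relabel_Q \<pi> x \<in> quartic_EO n} = fact (4 * n - 1)"
    if "x \<in> quartic_EO n" for x
  proof -
    have "{\<pi> \<in> root_perms (4 * n). relabel_Q \<pi> x \<in> quartic_EO n} = root_perms (4 * n)"
      using relabel_Q_quartic_EO[OF that] by auto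
    then show ?thesis using card_root_perms n by simp
  qed
qed (simp_all add: finite_quartic_EO)

definition relabel_C :: "(nat \<Rightarrow> nat) \<Rightarrow> partially_oriented_map \<Rightarrow> partially_oriented_map" where
  "relabel_C \<pi> x = (case x of (\<sigma>, \<alpha>, U, Out) \<Rightarrow> (conjugate \<pi> \<sigma>, conjugate \<pi> \<alpha>, \<pi> ` U, \<pi> ` Out))"

definition weight_C :: "complex \<Rightarrow> nat \<Rightarrow> partially_oriented_map \<Rightarrow> complex" where
  "weight_C \<omega> N x = (case x of (\<sigma>, \<alpha>, U, Out) \<Rightarrow>
     \<omega> powi (int (num_left_turn N \<sigma> U Out) - int (num_right_turn N \<sigma> U Out)))"

lemma iso_C_iff: "(x, x') \<in> iso_C N \<longleftrightarrow> (\<exists>\<pi>\<in>root_perms N. x' = relabel_C \<pi> x)"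
  by (cases x; cases x') (auto simp: iso_C_def relabel_C_def root_perms_def conjugate_def)

lemma relabel_C_cubic_PO:
  assumes x: "x \<in> cubic_PO n" and p: "\<pi> \<in> root_perms (6 * n)"
  shows "relabel_C \<pi> x \<in> cubic_PO n"
proof -
  obtain \<sigma> \<alpha> U Out where xe: "x = (\<sigma>, \<alpha>, U, Out)" by (cases x)
  have \<pi>: "\<pi> permutes {..<6 * n}" "\<pi> 0 = 0" using p unfolding root_perms_def by auto
  note x' = x[unfolded xe cubic_PO_def, simplified]
  have "is_planar_map (6 * n) (conjugate \<pi> \<sigma>) (conjugate \<pi> \<alpha>)"
    using is_planar_map_conjugate[OF \<pi>(1)] x' by auto
  moreover have "\<forall>d<6 * n. card (orbit (conjugate \<pi> \<sigma>) d) = 3"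
    using x' card_orbit_conjugate[OF \<pi>(1)] permutes_inv_less_iff[OF \<pi>(1)] by auto
  moreover have "\<pi> ` Out \<subseteq> {..<6 * n}" "\<pi> ` U \<subseteq> {..<6 * n}"
    using x' permutes_less_iff[OF \<pi>(1)] by auto
  moreover have "\<pi> ` U \<inter> \<pi> ` Out = {}" using x' permutes_image_Int[OF \<pi>(1)]
    by auto
  moreover have "\<forall>d<6 * n. d \<in> \<pi> ` U \<longleftrightarrow> conjugate \<pi> \<alpha> d \<in> \<pi> ` U"
    using x' mem_permutes_image_iff[OF \<pi>(1)] conjugate_apply'[OF \<pi>(1)]
      permutes_inv_less_iff[OF \<pi>(1)] permutes_inv_apply_left[OF \<pi>(1)]
      by auto
  moreover have "\<forall>d<6 * n. d \<notin> \<pi> ` U \<longrightarrow> (d \<in> \<pi> ` Out \<longleftrightarrow> conjugate \<pi> \<alpha> d \<notin> \<pi> ` Out)"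
    using x' mem_permutes_image_iff[OF \<pi>(1)] conjugate_apply'[OF \<pi>(1)]
      permutes_inv_less_iff[OF \<pi>(1)] permutes_inv_apply_left[OF \<pi>(1)]
      by auto
  moreover have "\<forall>d<6 * n. card (orbit (conjugate \<pi> \<sigma>) d \<inter> \<pi> ` U) = 1 \<and>
      card (orbit (conjugate \<pi> \<sigma>) d \<inter> \<pi> ` Out) = 1"
    using x' card_orbit_conjugate_Int[OF \<pi>(1)] permutes_inv_less_iff[OF \<pi>(1)] by auto
  moreover have "card (\<pi> ` U) = 2 * n" using x' card_permutes_image[OF \<pi>(1)] by auto
  moreover have "0 \<in> \<pi> ` Out" using x' \<pi>(2) by (metis image_eqI)
  ultimately show ?thesis unfolding xe relabel_C_def cubic_PO_def by simp
qed

lemma num_turn_conjugate: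
  assumes \<pi>: "\<pi> permutes {..<N}"
  shows "num_left_turn N (conjugate \<pi> \<sigma>) (\<pi> ` U) (\<pi> ` Out) = num_left_turn N \<sigma> U Out"
        "num_right_turn N (conjugate \<pi> \<sigma>) (\<pi> ` U) (\<pi> ` Out) = num_right_turn N \<sigma> U Out"
proof -
  have o: "orbits (conjugate \<pi> \<sigma>) N = (\<lambda>Ob. \<pi> ` Ob) ` orbits \<sigma> N"
    unfolding conjugate_def using orbits_permutes_conj[OF \<pi>] .
  have "(\<exists>d\<in>\<pi> ` w. d \<notin> \<pi> ` U \<and> d \<notin> \<pi> ` Out \<and> conjugate \<pi> \<sigma> d \<in> \<pi> ` Out) \<longleftrightarrow>
        (\<exists>e\<in>w. e \<notin> U \<and> e \<notin> Out \<and> \<sigma> e \<in> Out)" for w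
    using conjugate_apply[OF \<pi>] permutes_apply_mem_image_iff[OF \<pi>] by auto
  then show "num_left_turn N (conjugate \<pi> \<sigma>) (\<pi> ` U) (\<pi> ` Out) = num_left_turn N \<sigma> U Out"
    unfolding num_left_turn_def o
    using card_filter_image[OF inj_on_subset[OF inj_image_permutes[OF \<pi>] subset_UNIV]] by simp
  have "(\<exists>d\<in>\<pi> ` w. d \<in> \<pi> ` Out \<and> conjugate \<pi> \<sigma> d \<notin> \<pi> ` U \<and> conjugate \<pi> \<sigma> d \<notin> \<pi> ` Out) \<longleftrightarrow>
        (\<exists>e\<in>w. e \<in> Out \<and> \<sigma> e \<notin> U \<and> \<sigma> e \<notin> Out)" for w
    using conjugate_apply[OF \<pi>] permutes_apply_mem_image_iff[OF \<pi>] by auto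
  then show "num_right_turn N (conjugate \<pi> \<sigma>) (\<pi> ` U) (\<pi> ` Out) = num_right_turn N \<sigma> U Out"
    unfolding num_right_turn_def o
    using card_filter_image[OF inj_on_subset[OF inj_image_permutes[OF \<pi>] subset_UNIV]] by simp
qed

lemma finite_cubic_PO: "finite (cubic_PO n)"
proof -
  have "cubic_PO n \<subseteq> {\<sigma>. \<sigma> permutes {..<6*n}} \<times> {\<alpha>. \<alpha> permutes {..<6*n}} \<times> Pow {..<6*n} \<times> Pow {..<6*n}"
    unfolding cubic_PO_def is_planar_map_def is_map_def by auto
  moreover have "finite ({\<sigma>. \<sigma> permutes {..<6*n}} \<times> {\<alpha>. \<alpha> permutes {..<6*n}} \<times> Pow {..<6*n} \<times> Pow {..<6*n})"
    using finite_permutations[of "{..<6*n}"] by simp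
  ultimately show ?thesis using finite_subset by blast
qed

definition undir_darts :: "nat \<Rightarrow> nat set" where "undir_darts n = {4 * n..<6 * n}"

definition cubic_PO_std :: "nat \<Rightarrow> partially_oriented_map set" where
  "cubic_PO_std n = {y \<in> cubic_PO n. fst (snd (snd y)) = undir_darts n}"

lemma free_action_relabel_C:
  assumes "0 < n"
  shows "free_action (root_perms (6 * n)) relabel_C (cubic_PO n)"
proof
  fix \<pi> x assume \<pi>: "\<pi> \<in> root_perms (6 * n)" and x: "x \<in> cubic_PO n" and fixed: "relabel_C \<pi> x = x"
  obtain \<sigma> \<alpha> U Out where xe: "x = (\<sigma>, \<alpha>, U, Out)" by (cases x)
  have "is_map (6 * n) \<sigma> \<alpha>" using x unfolding xe cubic_PO_def is_planar_map_def by auto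
  moreover have "conjugate \<pi> \<sigma> = \<sigma>" "conjugate \<pi> \<alpha> = \<alpha>" using fixed unfolding xe relabel_C_def by auto
  ultimately show "\<pi> = id"
    using conjugate_fixing_map_eq_id[of \<pi> "6 * n" \<sigma> \<alpha>] \<pi> assms unfolding root_perms_def by auto
next
  show "relabel_C \<pi> x \<in> cubic_PO n" if "\<pi> \<in> root_perms (6 * n)" "x \<in> cubic_PO n" for \<pi> x
    using relabel_C_cubic_PO that by blast
qed (auto simp: id_root_perms comp_root_perms inv_root_perms relabel_C_def
  conjugate_id conjugate_compose image_comp split: prod.splits)

lemma card_relabel_cubic_PO_std:
  assumes n: "0 < n" and x: "x \<in> cubic_PO n"
  shows "card {\<pi> \<in> root_perms (6 * n). relabel_C \<pi> x \<in> cubic_PO_std n} = fact (2 * n) * fact (4 * n - 1)"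
proof -
  obtain \<sigma> \<alpha> U Out where xe: "x = (\<sigma>, \<alpha>, U, Out)" by (cases x)
  note x' = x[unfolded xe cubic_PO_def, simplified]
  let ?S = "{..<6 * n} - {0}"
  have "{\<pi> \<in> root_perms (6 * n). relabel_C \<pi> x \<in> cubic_PO_std n} = {\<pi>. \<pi> permutes ?S \<and> \<pi> ` U = undir_darts n}"
    using relabel_C_cubic_PO[OF x] permutes_fix_iff[of 0 "{..<6 * n}"] n
    unfolding cubic_PO_std_def root_perms_def xe relabel_C_def by auto
  also have "card \<dots> = fact (card U) * fact (card ?S - card U)"
  proof (rule card_permutes_mapping)
    show "U \<subseteq> ?S" using x' by auto
    show "undir_darts n \<subseteq> ?S" using n unfolding undir_darts_def by auto
    show "card U = card (undir_darts n)" using x' unfolding undir_darts_def by simp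
  qed simp
  also have "\<dots> = fact (2 * n) * fact (4 * n - 1)" using x' n by simp
  finally show ?thesis .
qed

lemma C_coeff_labelled:
  assumes n: "0 < n"
  shows "of_nat (fact (2 * n) * fact (4 * n - 1)) * C_coeff n \<omega> = (\<Sum>y\<in>cubic_PO_std n. weight_C \<omega> (6 * n) y)"
  unfolding C_coeff_def weight_C_def[symmetric]
proof (rule free_action.sum_quotient[OF free_action_relabel_C[OF n]])
  show "(x, x') \<in> iso_C (6 * n) \<longleftrightarrow> (\<exists>\<pi>\<in>root_perms (6 * n). x' = relabel_C \<pi> x)" for x x'
    by (rule iso_C_iff)
  show "weight_C \<omega> (6 * n) (relabel_C \<pi> x) = weight_C \<omega> (6 * n) x" if "\<pi> \<in> root_perms (6 * n)" for \<pi> x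
    using that by (auto simp: weight_C_def relabel_C_def root_perms_def num_turn_conjugate split: prod.splits)
  show "card {\<pi> \<in> root_perms (6 * n). relabel_C \<pi> x \<in> cubic_PO_std n} = fact (2 * n) * fact (4 * n - 1)"
    if "x \<in> cubic_PO n" for x
    using card_relabel_cubic_PO_std[OF n that] .
qed (auto simp: finite_cubic_PO cubic_PO_std_def)

section \<open>Contracting the undirected edges\<close>

lemma lessThan_3_eq: "{..<3::nat} = {0,1,2}" by auto
lemma lessThan_4_eq: "{..<4::nat} = {0,1,2,3}" by auto
lemma lessThan_2_eq: "{..<2::nat} = {0,1}" by auto
lemma funpow_2_apply: "(f ^^ 2) d = f (f d)" by (simp add: numeral_2_eq_2)
lemma funpow_3_apply: "(f ^^ 3) d = f (f (f d))" by (simp add: numeral_3_eq_3)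
lemma funpow_4_apply: "(f ^^ 4) d = f (f (f (f d)))" by (simp add: eval_nat_numeral)

lemma card_Int_three_eq_1:
  assumes "a \<noteq> b" "a \<noteq> c" "b \<noteq> c"
  shows "card ({a, b, c} \<inter> S) = 1 \<longleftrightarrow>
    (a \<in> S \<and> b \<notin> S \<and> c \<notin> S) \<or> (a \<notin> S \<and> b \<in> S \<and> c \<notin> S) \<or> (a \<notin> S \<and> b \<notin> S \<and> c \<in> S)"
  using assms
    by (cases "a \<in> S"; cases "b \<in> S"; cases "c \<in> S") (auto simp: Int_insert_left)

lemma card_orbit_eq_3_iff:
  assumes "f permutes S" "finite S"
  shows "card (orbit f d) = 3 \<longleftrightarrow> f (f (f d)) = d \<and> f d \<noteq> d \<and> f (f d) \<noteq> d \<and> f (f d) \<noteq> f d"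
  using card_orbit_iff[OF assms, of 3 d] unfolding lessThan_3_eq funpow_3_apply
    by (auto simp: funpow_2_apply)

lemma card_orbit_eq_4_iff:
  assumes "f permutes S" "finite S"
  shows "card (orbit f d) = 4 \<longleftrightarrow> f (f (f (f d))) = d \<and> f d \<noteq> d \<and> f (f d) \<noteq> d \<and> f (f (f d)) \<noteq> d
     \<and> f (f d) \<noteq> f d \<and> f (f (f d)) \<noteq> f d \<and> f (f (f d)) \<noteq> f (f d)"
  using card_orbit_iff[OF assms, of 4 d] unfolding lessThan_4_eq funpow_4_apply
    by (auto simp: funpow_2_apply funpow_3_apply)

lemma card_orbit_eq_2_iff:
  assumes "f permutes S" "finite S"
  shows "card (orbit f d) = 2 \<longleftrightarrow> f (f d) = d \<and> f d \<noteq> d"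
  using card_orbit_iff[OF assms, of 2 d] unfolding lessThan_2_eq funpow_2_apply by auto

lemma orbit_of_order_3: "f (f (f d)) = d \<Longrightarrow> orbit f d = {d, f d, f (f d)}"
  using orbit_eq_image_period[where f=f and m=3 and x=d] unfolding lessThan_3_eq funpow_3_apply
    by (auto simp: funpow_2_apply)

lemma orbit_of_order_4: "f (f (f (f d))) = d \<Longrightarrow> orbit f d = {d, f d, f (f d), f (f (f d))}"
  using orbit_eq_image_period[where f=f and m=4 and x=d] unfolding lessThan_4_eq funpow_4_apply
    by (auto simp: funpow_2_apply funpow_3_apply)

definition contr_rot :: "nat \<Rightarrow> (nat \<Rightarrow> nat) \<Rightarrow> (nat \<Rightarrow> nat) \<Rightarrow> nat \<Rightarrow> nat" where
  "contr_rot N \<sigma> \<alpha> d = (if d < N then (if \<sigma> d < N then \<sigma> d else \<sigma> (\<alpha> (\<sigma> d))) else d)"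

definition contr_inv :: "nat \<Rightarrow> (nat \<Rightarrow> nat) \<Rightarrow> nat \<Rightarrow> nat" where
  "contr_inv N \<alpha> d = (if d < N then \<alpha> d else d)"

(* The darts N..<M are those of the undirected edges; every vertex carries exactly one of them. *)
definition contractible :: "nat \<Rightarrow> nat \<Rightarrow> (nat \<Rightarrow> nat) \<Rightarrow> (nat \<Rightarrow> nat) \<Rightarrow> nat set \<Rightarrow> bool" where
  "contractible N M \<sigma> \<alpha> Out \<longleftrightarrow> N \<le> M \<and>
     \<sigma> permutes {..<M} \<and> \<alpha> permutes {..<M} \<and> (\<forall>d<M. \<alpha> d \<noteq> d \<and> \<alpha> (\<alpha> d) = d) \<and>
     (\<forall>d<M. \<sigma> (\<sigma> (\<sigma> d)) = d \<and> \<sigma> d \<noteq> d) \<and>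
     (\<forall>u. N \<le> u \<and> u < M \<longrightarrow> \<sigma> u < N \<and> \<sigma> (\<sigma> u) < N \<and> N \<le> \<alpha> u) \<and>
     (\<forall>d<N. N \<le> \<sigma> d \<or> N \<le> \<sigma> (\<sigma> d)) \<and>
     (\<forall>d<N. \<alpha> d < N \<and> (d \<in> Out \<longleftrightarrow> \<alpha> d \<notin> Out)) \<and>
     (\<forall>u. N \<le> u \<and> u < M \<longrightarrow> (\<sigma> u \<in> Out \<longleftrightarrow> \<sigma> (\<sigma> u) \<notin> Out)) \<and>
     Out \<subseteq> {..<N} \<and> 0 \<in> Out"

context
  fixes N M \<sigma> \<alpha> Out assumes lc: "contractible N M \<sigma> \<alpha> Out"
begin

lemma contractible_le: "N \<le> M" using lc unfolding contractible_def by auto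
lemma contractible_rot_permutes: "\<sigma> permutes {..<M}" using lc unfolding contractible_def
  by auto
lemma contractible_inv_permutes: "\<alpha> permutes {..<M}" using lc unfolding contractible_def
  by auto
lemma contractible_rot_less_iff: "\<sigma> d < M \<longleftrightarrow> d < M"
  using permutes_in_image[OF contractible_rot_permutes] by simp
lemma contractible_inv_less_iff: "\<alpha> d < M \<longleftrightarrow> d < M"
  using permutes_in_image[OF contractible_inv_permutes] by simp
lemma contractible_rot_eq_iff: "\<sigma> a = \<sigma> b \<longleftrightarrow> a = b"
  using permutes_inj[OF contractible_rot_permutes] by (auto dest: injD)
lemma contractible_inv_inv: "d < M \<Longrightarrow> \<alpha> (\<alpha> d) = d" using lc
  unfolding contractible_def by auto
lemma contractible_inv_neq: "d < M \<Longrightarrow> \<alpha> d \<noteq> d" using lc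
  unfolding contractible_def by auto
lemma contractible_rot3: "d < M \<Longrightarrow> \<sigma> (\<sigma> (\<sigma> d)) = d" using lc
  unfolding contractible_def by auto
lemma contractible_rot_neq: "d < M \<Longrightarrow> \<sigma> d \<noteq> d" using lc
  unfolding contractible_def by auto
lemma contractible_undir: "N \<le> u \<Longrightarrow> u < M \<Longrightarrow> \<sigma> u < N \<and> \<sigma> (\<sigma> u) < N \<and> N \<le> \<alpha> u \<and> \<alpha> u < M"
  using lc contractible_inv_less_iff unfolding contractible_def by auto
lemma contractible_dir_next_undir: "d < N \<Longrightarrow> N \<le> \<sigma> d \<or> N \<le> \<sigma> (\<sigma> d)"
  using lc unfolding contractible_def by auto
lemma contractible_inv_dir: "d < N \<Longrightarrow> \<alpha> d < N" using lc
  unfolding contractible_def by auto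
lemma contractible_inv_Out: "d < N \<Longrightarrow> d \<in> Out \<longleftrightarrow> \<alpha> d \<notin> Out"
  using lc unfolding contractible_def by blast
lemma contractible_undir_Out: "N \<le> u \<Longrightarrow> u < M \<Longrightarrow> \<sigma> u \<in> Out \<longleftrightarrow> \<sigma> (\<sigma> u) \<notin> Out"
  using lc unfolding contractible_def by blast
lemma contractible_Out: "Out \<subseteq> {..<N}" "0 \<in> Out" using lc unfolding contractible_def
  by auto

lemma contractible_dir_undir_rot: "d < N \<Longrightarrow> \<exists>u. N \<le> u \<and> u < M \<and> (d = \<sigma> u \<or> d = \<sigma> (\<sigma> u))"
proof -
  assume d: "d < N"
  then have dM: "d < M" using contractible_le by auto
  show ?thesis
  proof (cases "N \<le> \<sigma> d")
    case True
    then show ?thesis using contractible_rot3[OF dM] contractible_rot_less_iff dM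
      by (intro exI[of _ "\<sigma> d"]) auto
  next
    case False
    then have "N \<le> \<sigma> (\<sigma> d)" using contractible_dir_next_undir[OF d] by auto
    then show ?thesis using contractible_rot3[OF dM] contractible_rot_less_iff dM
      by (intro exI[of _ "\<sigma> (\<sigma> d)"]) auto
  qed
qed

lemma contr_rot_less_iff: "contr_rot N \<sigma> \<alpha> d < N \<longleftrightarrow> d < N"
proof
  assume d: "d < N"
  show "contr_rot N \<sigma> \<alpha> d < N"
  proof (cases "\<sigma> d < N")
    case False
    have "\<sigma> d < M" using d contractible_le contractible_rot_less_iff by auto
    then have "N \<le> \<alpha> (\<sigma> d)" "\<alpha> (\<sigma> d) < M"
      using contractible_undir[of "\<sigma> d"] False by auto
    then show ?thesis using d False contractible_undir by (auto simp: contr_rot_def)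
  qed (use d in \<open>auto simp: contr_rot_def\<close>)
qed (auto simp: contr_rot_def split: if_splits)

lemma contr_rot_undir1: "N \<le> u \<Longrightarrow> u < M \<Longrightarrow> contr_rot N \<sigma> \<alpha> (\<sigma> u) = \<sigma> (\<sigma> u)"
  using contractible_undir by (auto simp: contr_rot_def)

lemma contr_rot_undir2: "N \<le> u \<Longrightarrow> u < M \<Longrightarrow> contr_rot N \<sigma> \<alpha> (\<sigma> (\<sigma> u)) = \<sigma> (\<alpha> u)"
  using contractible_undir contractible_rot3 by (auto simp: contr_rot_def)

lemma undir_rot_distinct:
  assumes u: "N \<le> u" "u < M"
  shows "\<sigma> u \<noteq> \<sigma> (\<sigma> u)" "\<sigma> u \<noteq> \<sigma> (\<alpha> u)" "\<sigma> u \<noteq> \<sigma> (\<sigma> (\<alpha> u))"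
        "\<sigma> (\<sigma> u) \<noteq> \<sigma> (\<alpha> u)" "\<sigma> (\<sigma> u) \<noteq> \<sigma> (\<sigma> (\<alpha> u))" "\<sigma> (\<alpha> u) \<noteq> \<sigma> (\<sigma> (\<alpha> u))"
proof -
  note U = contractible_undir[OF u] and Ua = contractible_undir[of "\<alpha> u"]
  have au: "N \<le> \<alpha> u" "\<alpha> u < M" using U by auto
  show "\<sigma> u \<noteq> \<sigma> (\<sigma> u)"
    using contractible_rot_neq[OF u(2)] contractible_rot_eq_iff by metis
  show "\<sigma> u \<noteq> \<sigma> (\<alpha> u)"
    using contractible_inv_neq[OF u(2)] contractible_rot_eq_iff by metis
  show "\<sigma> u \<noteq> \<sigma> (\<sigma> (\<alpha> u))"
    using contractible_rot_eq_iff Ua[OF au] u by (metis not_le)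
  show "\<sigma> (\<sigma> u) \<noteq> \<sigma> (\<alpha> u)" using contractible_rot_eq_iff U au
    by (metis not_le)
  show "\<sigma> (\<sigma> u) \<noteq> \<sigma> (\<sigma> (\<alpha> u))"
    using contractible_inv_neq[OF u(2)] contractible_rot_eq_iff by metis
  show "\<sigma> (\<alpha> u) \<noteq> \<sigma> (\<sigma> (\<alpha> u))"
    using contractible_rot_neq[OF au(2)] contractible_rot_eq_iff by metis
qed

lemma contr_inv_permutes: "contr_inv N \<alpha> permutes {..<N}"
proof (rule bij_imp_permutes)
  show "bij_betw (contr_inv N \<alpha>) {..<N} {..<N}"
  proof (rule bij_betwI[where g = "contr_inv N \<alpha>"])
    show "contr_inv N \<alpha> \<in> {..<N} \<rightarrow> {..<N}" using contractible_inv_dir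
      by (auto simp: contr_inv_def)
    show "contr_inv N \<alpha> \<in> {..<N} \<rightarrow> {..<N}" using contractible_inv_dir
      by (auto simp: contr_inv_def)
    show "contr_inv N \<alpha> (contr_inv N \<alpha> x) = x" if "x \<in> {..<N}" for x
      using that contractible_inv_dir contractible_inv_inv contractible_le
        by (auto simp: contr_inv_def)
    show "contr_inv N \<alpha> (contr_inv N \<alpha> y) = y" if "y \<in> {..<N}" for y
      using that contractible_inv_dir contractible_inv_inv contractible_le
        by (auto simp: contr_inv_def)
  qed
qed (auto simp: contr_inv_def)

lemma contr_rot_inj: "a < N \<Longrightarrow> b < N \<Longrightarrow> contr_rot N \<sigma> \<alpha> a = contr_rot N \<sigma> \<alpha> b \<Longrightarrow> a = b"
proof -
  assume a: "a < N" and b: "b < N" and e: "contr_rot N \<sigma> \<alpha> a = contr_rot N \<sigma> \<alpha> b"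
  have aM: "a < M" "b < M" using a b contractible_le by auto
  have x: "\<alpha> (\<sigma> x) \<ge> N" if "x < N" "\<not> \<sigma> x < N" for x
    using contractible_undir[of "\<sigma> x"] that contractible_rot_less_iff contractible_le by auto
  show "a = b"
  proof (cases "\<sigma> a < N"; cases "\<sigma> b < N")
    assume "\<sigma> a < N" "\<sigma> b < N" then show ?thesis using e a b contractible_rot_eq_iff
      by (auto simp: contr_rot_def)
  next
    assume 1: "\<sigma> a < N" "\<not> \<sigma> b < N"
    then have "a = \<alpha> (\<sigma> b)" using e a b contractible_rot_eq_iff
      by (auto simp: contr_rot_def)
    then show ?thesis using x[OF b 1(2)] a by auto
  next
    assume 1: "\<not> \<sigma> a < N" "\<sigma> b < N"
    then have "b = \<alpha> (\<sigma> a)" using e a b contractible_rot_eq_iff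
      by (auto simp: contr_rot_def)
    then show ?thesis using x[OF a 1(1)] b by auto
  next
    assume 1: "\<not> \<sigma> a < N" "\<not> \<sigma> b < N"
    then have "\<alpha> (\<sigma> a) = \<alpha> (\<sigma> b)" using e a b contractible_rot_eq_iff
      by (auto simp: contr_rot_def)
    then have "\<alpha> (\<alpha> (\<sigma> a)) = \<alpha> (\<alpha> (\<sigma> b))" by simp
    then have "\<sigma> a = \<sigma> b" using contractible_inv_inv contractible_rot_less_iff aM
      by auto
    then show ?thesis using contractible_rot_eq_iff by auto
  qed
qed

lemma contr_rot_permutes: "contr_rot N \<sigma> \<alpha> permutes {..<N}"
proof (rule bij_imp_permutes)
  have inj: "inj_on (contr_rot N \<sigma> \<alpha>) {..<N}" using contr_rot_inj
    by (auto intro: inj_onI)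
  have "contr_rot N \<sigma> \<alpha> ` {..<N} \<subseteq> {..<N}" using contr_rot_less_iff by auto
  then have "contr_rot N \<sigma> \<alpha> ` {..<N} = {..<N}" using endo_inj_surj[OF _ _ inj]
    by auto
  then show "bij_betw (contr_rot N \<sigma> \<alpha>) {..<N} {..<N}" using inj
    by (simp add: bij_betw_def)
qed (auto simp: contr_rot_def)

lemma card_orbit_contr_rot:
  assumes d: "d < N"
  shows "card (orbit (contr_rot N \<sigma> \<alpha>) d) = 4"
proof -
  obtain u where u: "N \<le> u" "u < M" "d = \<sigma> u \<or> d = \<sigma> (\<sigma> u)"
    using contractible_dir_undir_rot[OF d] by blast
  have au: "N \<le> \<alpha> u" "\<alpha> u < M" using contractible_undir[OF u(1,2)] by auto
  have aau: "\<alpha> (\<alpha> u) = u" using contractible_inv_inv u by auto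
  note D = undir_rot_distinct[OF u(1,2)]
  let ?f = "contr_rot N \<sigma> \<alpha>"
  have f1: "?f (\<sigma> u) = \<sigma> (\<sigma> u)" and f2: "?f (\<sigma> (\<sigma> u)) = \<sigma> (\<alpha> u)"
    and f3: "?f (\<sigma> (\<alpha> u)) = \<sigma> (\<sigma> (\<alpha> u))" and f4: "?f (\<sigma> (\<sigma> (\<alpha> u))) = \<sigma> u"
    using contr_rot_undir1[OF u(1,2)] contr_rot_undir2[OF u(1,2)]
      contr_rot_undir1[OF au] contr_rot_undir2[OF au] aau
      by auto
  show ?thesis unfolding card_orbit_eq_4_iff[OF contr_rot_permutes finite_lessThan]
    using u(3) f1 f2 f3 f4 D by (auto simp: eq_commute[of "\<sigma> _" "\<sigma> _"])
qed

lemma orbit_contr_rot: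
  assumes u: "N \<le> u" "u < M"
  shows "orbit (contr_rot N \<sigma> \<alpha>) (\<sigma> u) = {\<sigma> u, \<sigma> (\<sigma> u), \<sigma> (\<alpha> u), \<sigma> (\<sigma> (\<alpha> u))}"
proof -
  have au: "N \<le> \<alpha> u" "\<alpha> u < M" using contractible_undir[OF u(1,2)] by auto
  have aau: "\<alpha> (\<alpha> u) = u" using contractible_inv_inv u by auto
  let ?f = "contr_rot N \<sigma> \<alpha>"
  have f1: "?f (\<sigma> u) = \<sigma> (\<sigma> u)" and f2: "?f (\<sigma> (\<sigma> u)) = \<sigma> (\<alpha> u)"
    and f3: "?f (\<sigma> (\<alpha> u)) = \<sigma> (\<sigma> (\<alpha> u))" and f4: "?f (\<sigma> (\<sigma> (\<alpha> u))) = \<sigma> u"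
    using contr_rot_undir1[OF u(1,2)] contr_rot_undir2[OF u(1,2)]
      contr_rot_undir1[OF au] contr_rot_undir2[OF au] aau
      by auto
  show ?thesis using orbit_of_order_4[of ?f "\<sigma> u"] f1 f2 f3 f4 by simp
qed

lemma card_orbit_contr_rot_Out:
  assumes d: "d < N"
  shows "card (orbit (contr_rot N \<sigma> \<alpha>) d \<inter> Out) = 2"
proof -
  obtain u where u: "N \<le> u" "u < M" "d = \<sigma> u \<or> d = \<sigma> (\<sigma> u)"
    using contractible_dir_undir_rot[OF d] by blast
  have au: "N \<le> \<alpha> u" "\<alpha> u < M" using contractible_undir[OF u(1,2)] by auto
  have "orbit (contr_rot N \<sigma> \<alpha>) d = orbit (contr_rot N \<sigma> \<alpha>) (\<sigma> u)"
  proof (cases "d = \<sigma> u")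
    case False
    then have "d = contr_rot N \<sigma> \<alpha> (\<sigma> u)" using u contr_rot_undir1[OF u(1,2)]
      by auto
    then show ?thesis using orbit_apply[OF contr_rot_permutes finite_lessThan] by simp
  qed simp
  also have "\<dots> = {\<sigma> u, \<sigma> (\<sigma> u), \<sigma> (\<alpha> u), \<sigma> (\<sigma> (\<alpha> u))}"
    by (rule orbit_contr_rot[OF u(1,2)])
  finally have o: "orbit (contr_rot N \<sigma> \<alpha>) d = {\<sigma> u, \<sigma> (\<sigma> u), \<sigma> (\<alpha> u), \<sigma> (\<sigma> (\<alpha> u))}" .
  note D = undir_rot_distinct[OF u(1,2)]
  note O1 = contractible_undir_Out[OF u(1,2)] and O2 = contractible_undir_Out[OF au]
  show ?thesis unfolding o
  proof (cases "\<sigma> u \<in> Out"; cases "\<sigma> (\<alpha> u) \<in> Out")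
    assume a: "\<sigma> u \<in> Out" "\<sigma> (\<alpha> u) \<in> Out"
    then have "{\<sigma> u, \<sigma> (\<sigma> u), \<sigma> (\<alpha> u), \<sigma> (\<sigma> (\<alpha> u))} \<inter> Out = {\<sigma> u, \<sigma> (\<alpha> u)}"
      using O1 O2 by auto
    then show "card ({\<sigma> u, \<sigma> (\<sigma> u), \<sigma> (\<alpha> u), \<sigma> (\<sigma> (\<alpha> u))} \<inter> Out) = 2"
      using D by simp
  next
    assume a: "\<sigma> u \<in> Out" "\<sigma> (\<alpha> u) \<notin> Out"
    then have "{\<sigma> u, \<sigma> (\<sigma> u), \<sigma> (\<alpha> u), \<sigma> (\<sigma> (\<alpha> u))} \<inter> Out = {\<sigma> u, \<sigma> (\<sigma> (\<alpha> u))}"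
      using O1 O2 by auto
    then show "card ({\<sigma> u, \<sigma> (\<sigma> u), \<sigma> (\<alpha> u), \<sigma> (\<sigma> (\<alpha> u))} \<inter> Out) = 2"
      using D by simp
  next
    assume a: "\<sigma> u \<notin> Out" "\<sigma> (\<alpha> u) \<in> Out"
    then have "{\<sigma> u, \<sigma> (\<sigma> u), \<sigma> (\<alpha> u), \<sigma> (\<sigma> (\<alpha> u))} \<inter> Out = {\<sigma> (\<sigma> u), \<sigma> (\<alpha> u)}"
      using O1 O2 by auto
    then show "card ({\<sigma> u, \<sigma> (\<sigma> u), \<sigma> (\<alpha> u), \<sigma> (\<sigma> (\<alpha> u))} \<inter> Out) = 2"
      using D by simp
  next
    assume a: "\<sigma> u \<notin> Out" "\<sigma> (\<alpha> u) \<notin> Out"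
    then have "{\<sigma> u, \<sigma> (\<sigma> u), \<sigma> (\<alpha> u), \<sigma> (\<sigma> (\<alpha> u))} \<inter> Out = {\<sigma> (\<sigma> u), \<sigma> (\<sigma> (\<alpha> u))}"
      using O1 O2 by auto
    then show "card ({\<sigma> u, \<sigma> (\<sigma> u), \<sigma> (\<alpha> u), \<sigma> (\<sigma> (\<alpha> u))} \<inter> Out) = 2"
      using D by simp
  qed
qed

end

context
  fixes N M \<sigma> \<alpha> Out assumes lc: "contractible N M \<sigma> \<alpha> Out"
begin

abbreviation "\<sigma>\<^sub>c \<equiv> contr_rot N \<sigma> \<alpha>"
abbreviation "\<alpha>\<^sub>c \<equiv> contr_inv N \<alpha>"

lemma contr_rot_rtrancl_across:
  assumes u: "N \<le> u" "u < M"
  shows "(\<sigma> (\<sigma> u), \<sigma> u) \<in> (dart_rel N \<sigma>\<^sub>c \<alpha>\<^sub>c)\<^sup>*"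
proof -
  let ?R = "dart_rel N \<sigma>\<^sub>c \<alpha>\<^sub>c"
  have au: "N \<le> \<alpha> u" "\<alpha> u < M" using contractible_undir[OF lc u] by auto
  have "(\<sigma> (\<sigma> u), \<sigma> (\<alpha> u)) \<in> ?R"
    using dart_rel_rot[of "\<sigma> (\<sigma> u)" N "\<sigma>\<^sub>c" "\<alpha>\<^sub>c"] contr_rot_undir2[OF lc u] contractible_undir[OF lc u] by simp
  moreover have "(\<sigma> (\<alpha> u), \<sigma> (\<sigma> (\<alpha> u))) \<in> ?R"
    using dart_rel_rot[of "\<sigma> (\<alpha> u)" N "\<sigma>\<^sub>c" "\<alpha>\<^sub>c"] contr_rot_undir1[OF lc au] contractible_undir[OF lc au] by simp
  moreover have "(\<sigma> (\<sigma> (\<alpha> u)), \<sigma> u) \<in> ?R"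
    using dart_rel_rot[of "\<sigma> (\<sigma> (\<alpha> u))" N "\<sigma>\<^sub>c" "\<alpha>\<^sub>c"] contr_rot_undir2[OF lc au] contractible_undir[OF lc au]
      contractible_inv_inv[OF lc u(2)] by simp
  ultimately show ?thesis by (meson converse_rtrancl_into_rtrancl r_into_rtrancl)
qed

lemma contr_rot_rtrancl_undir:
  assumes u: "N \<le> u" "u < M"
  shows "(\<sigma> u, \<sigma> (\<alpha> u)) \<in> (dart_rel N \<sigma>\<^sub>c \<alpha>\<^sub>c)\<^sup>*"
proof -
  let ?R = "dart_rel N \<sigma>\<^sub>c \<alpha>\<^sub>c"
  have "(\<sigma> u, \<sigma> (\<sigma> u)) \<in> ?R"
    using dart_rel_rot[of "\<sigma> u" N "\<sigma>\<^sub>c" "\<alpha>\<^sub>c"] contr_rot_undir1[OF lc u] contractible_undir[OF lc u] by simp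
  moreover have "(\<sigma> (\<sigma> u), \<sigma> (\<alpha> u)) \<in> ?R"
    using dart_rel_rot[of "\<sigma> (\<sigma> u)" N "\<sigma>\<^sub>c" "\<alpha>\<^sub>c"] contr_rot_undir2[OF lc u] contractible_undir[OF lc u] by simp
  ultimately show ?thesis by (meson converse_rtrancl_into_rtrancl r_into_rtrancl)
qed

(* Each step of the cubic map projects to a path of the contracted map, an undirected dart u
   being represented by the directed dart \<sigma> u at its vertex. *)
lemma contract_dart_rel_step:
  assumes ab: "(a, b) \<in> dart_rel M \<sigma> \<alpha>"
  shows "(if a < N then a else \<sigma> a, if b < N then b else \<sigma> b) \<in> (dart_rel N \<sigma>\<^sub>c \<alpha>\<^sub>c)\<^sup>*"
proof -
  let ?R = "dart_rel N \<sigma>\<^sub>c \<alpha>\<^sub>c"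
  have aM: "a < M" using ab unfolding dart_rel_def by auto
  consider "b = \<sigma> a" "a < N" "\<sigma> a < N" | "b = \<sigma> a" "a < N" "N \<le> \<sigma> a" | "b = \<sigma> a" "N \<le> a"
    | "b = \<alpha> a" "a < N" | "b = \<alpha> a" "N \<le> a"
    using ab unfolding dart_rel_def by fastforce
  then show ?thesis
  proof cases
    case 1
    then show ?thesis using dart_rel_rot[of a N "\<sigma>\<^sub>c" "\<alpha>\<^sub>c"] by (simp add: contr_rot_def)
  next
    case 2
    have u: "N \<le> \<sigma> a" "\<sigma> a < M" using 2 contractible_rot_less_iff[OF lc] aM by auto
    then show ?thesis
      using 2 contr_rot_rtrancl_across[OF u] contractible_rot3[OF lc aM] by simp
  next
    case 3
    then show ?thesis using contractible_undir[OF lc, of a] aM by simp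
  next
    case 4
    then have "\<alpha>\<^sub>c a = \<alpha> a" "\<alpha> a < N" using contractible_inv_dir[OF lc] by (auto simp: contr_inv_def)
    then show ?thesis using 4 dart_rel_inv[of a N "\<alpha>\<^sub>c" "\<sigma>\<^sub>c"] by auto
  next
    case 5
    then have u: "N \<le> a" "a < M" using aM by auto
    then show ?thesis using 5 contr_rot_rtrancl_undir[OF u] contractible_undir[OF lc u] by simp
  qed
qed

lemma darts_connected_contract:
  assumes c: "darts_connected M \<sigma> \<alpha>"
  shows "darts_connected N \<sigma>\<^sub>c \<alpha>\<^sub>c"
  unfolding darts_connected_def
proof (intro allI impI)
  fix x y assume xy: "x < N" "y < N"
  define r where "r d = (if d < N then d else \<sigma> d)" for d
  have "(x, y) \<in> (dart_rel M \<sigma> \<alpha>)\<^sup>*" using c xy contractible_le[OF lc] unfolding darts_connected_def by auto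
  then have "(r x, r y) \<in> (dart_rel N \<sigma>\<^sub>c \<alpha>\<^sub>c)\<^sup>*"
    using rtrancl_map_rtrancl[of "dart_rel M \<sigma> \<alpha>" r] contract_dart_rel_step unfolding r_def by blast
  then show "(x, y) \<in> (dart_rel N \<sigma>\<^sub>c \<alpha>\<^sub>c)\<^sup>*" using xy unfolding r_def by simp
qed

lemma expand_dart_rel_step:
  assumes ab: "(a, b) \<in> dart_rel N \<sigma>\<^sub>c \<alpha>\<^sub>c"
  shows "(a, b) \<in> (dart_rel M \<sigma> \<alpha>)\<^sup>*"
proof -
  let ?R = "dart_rel M \<sigma> \<alpha>"
  have a: "a < N" and aM: "a < M" using ab contractible_le[OF lc] unfolding dart_rel_def by auto
  have S: "(d, \<sigma> d) \<in> ?R\<^sup>*" and A: "(d, \<alpha> d) \<in> ?R\<^sup>*" if "d < M" for d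
    using dart_rel_rot[OF that] dart_rel_inv[OF that] by blast+
  have "(a, \<sigma>\<^sub>c a) \<in> ?R\<^sup>*"
  proof (cases "\<sigma> a < N")
    case False
    have "\<sigma> a < M" "\<alpha> (\<sigma> a) < M"
      using contractible_rot_less_iff[OF lc] contractible_inv_less_iff[OF lc] aM by auto
    then have "(a, \<sigma> (\<alpha> (\<sigma> a))) \<in> ?R\<^sup>*" using S[OF aM] A S by (meson rtrancl_trans)
    then show ?thesis using False a by (simp add: contr_rot_def)
  qed (use S[OF aM] a in \<open>simp add: contr_rot_def\<close>)
  moreover have "(a, \<alpha>\<^sub>c a) \<in> ?R\<^sup>*" using A[OF aM] a by (simp add: contr_inv_def)
  ultimately show ?thesis using ab unfolding dart_rel_def by auto
qed

lemma darts_connected_expand: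
  assumes c: "darts_connected N \<sigma>\<^sub>c \<alpha>\<^sub>c"
  shows "darts_connected M \<sigma> \<alpha>"
  unfolding darts_connected_def
proof (intro allI impI)
  fix x y assume xy: "x < M" "y < M"
  let ?R = "dart_rel M \<sigma> \<alpha>"
  define r where "r d = (if d < N then d else \<sigma> d)" for d
  have lift: "(dart_rel N \<sigma>\<^sub>c \<alpha>\<^sub>c)\<^sup>* \<subseteq> ?R\<^sup>*"
    using expand_dart_rel_step by (intro rtrancl_subset_rtrancl) auto
  have S: "(d, \<sigma> d) \<in> ?R\<^sup>*" if "d < M" for d using dart_rel_rot[OF that] by blast
  have to_dir: "(d, r d) \<in> ?R\<^sup>*" "r d < N" if "d < M" for d
    using S[OF that] that contractible_undir[OF lc, of d] unfolding r_def by auto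
  have from_dir: "(r d, d) \<in> ?R\<^sup>*" if "d < M" for d
  proof (cases "d < N")
    case False
    have "\<sigma> d < M" "\<sigma> (\<sigma> d) < M" using contractible_rot_less_iff[OF lc] that by auto
    then have "(\<sigma> d, \<sigma> (\<sigma> (\<sigma> d))) \<in> ?R\<^sup>*" using S by (meson rtrancl_trans)
    then show ?thesis using contractible_rot3[OF lc that] False unfolding r_def by simp
  qed (simp add: r_def)
  have "(r x, r y) \<in> (dart_rel N \<sigma>\<^sub>c \<alpha>\<^sub>c)\<^sup>*" using c to_dir xy unfolding darts_connected_def by auto
  then show "(x, y) \<in> ?R\<^sup>*" using lift to_dir(1)[OF xy(1)] from_dir[OF xy(2)] by (meson rtrancl_trans subsetD)
qed

lemma card_faces_contract: "card (orbits (\<sigma> \<circ> \<alpha>) M) = card (orbits (\<sigma>\<^sub>c \<circ> \<alpha>\<^sub>c) N)"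
proof (rule card_orbits_first_return)
  show "\<sigma> \<circ> \<alpha> permutes {..<M}"
    using permutes_compose[OF contractible_inv_permutes[OF lc] contractible_rot_permutes[OF lc]] .
  show "N \<le> M" using contractible_le[OF lc] .
  show "(\<sigma> \<circ> \<alpha>) a < N" if "N \<le> a" "a < M" for a
    using contractible_undir[OF lc that] contractible_undir[OF lc, of "\<alpha> a"] by auto
  show "(\<sigma>\<^sub>c \<circ> \<alpha>\<^sub>c) b = (if (\<sigma> \<circ> \<alpha>) b < N then (\<sigma> \<circ> \<alpha>) b else (\<sigma> \<circ> \<alpha>) ((\<sigma> \<circ> \<alpha>) b))" if "b < N" for b
    using that contractible_inv_dir[OF lc, of b] by (simp add: contr_rot_def contr_inv_def)
qed

end

lemma cubic_PO_D:
  assumes "(\<sigma>, \<alpha>, U, Out) \<in> cubic_PO n"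
  shows "is_planar_map (6 * n) \<sigma> \<alpha>" "\<forall>d < 6 * n. card (orbit \<sigma> d) = 3"
    "U \<subseteq> {..< 6 * n}" "Out \<subseteq> {..< 6 * n}" "U \<inter> Out = {}"
    "\<forall>d < 6 * n. d \<in> U \<longleftrightarrow> \<alpha> d \<in> U"
    "\<forall>d < 6 * n. d \<notin> U \<longrightarrow> (d \<in> Out \<longleftrightarrow> \<alpha> d \<notin> Out)"
    "\<forall>d < 6 * n. card (orbit \<sigma> d \<inter> U) = 1 \<and> card (orbit \<sigma> d \<inter> Out) = 1"
    "card U = 2 * n" "0 \<in> Out"
  using assms unfolding cubic_PO_def
    by (simp_all only: mem_Collect_eq prod.case) (elim conjE, assumption)+

lemma quartic_EO_D:
  assumes "(\<sigma>, \<alpha>, Out) \<in> quartic_EO n"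
  shows "is_planar_map (4 * n) \<sigma> \<alpha>" "\<forall>d < 4 * n. card (orbit \<sigma> d) = 4"
      "Out \<subseteq> {..< 4 * n}" "\<forall>d < 4 * n. d \<in> Out \<longleftrightarrow> \<alpha> d \<notin> Out"
      "\<forall>d < 4 * n. card (orbit \<sigma> d \<inter> Out) = 2" "0 \<in> Out"
  using assms unfolding quartic_EO_def
    by (simp_all only: mem_Collect_eq prod.case) (elim conjE, assumption)+

lemma cubic_PO_std_contractible:
  assumes y: "(\<sigma>, \<alpha>, undir_darts n, Out) \<in> cubic_PO n"
  shows "contractible (4*n) (6*n) \<sigma> \<alpha> Out" "darts_connected (6*n) \<sigma> \<alpha>" "card (orbits (\<sigma> \<circ> \<alpha>) (6*n)) = n + 2"
proof -
  note y' = cubic_PO_D[OF y[unfolded undir_darts_def]]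
  have sp: "\<sigma> permutes {..<6*n}" and ap: "\<alpha> permutes {..<6*n}"
    and af: "\<forall>d<6*n. \<alpha> d \<noteq> d \<and> \<alpha> (\<alpha> d) = d" and cn: "darts_connected (6*n) \<sigma> \<alpha>"
    using y'(1) unfolding is_planar_map_def is_map_iff_connected by auto
  show "darts_connected (6*n) \<sigma> \<alpha>" by (rule cn)
  have o3: "\<sigma> (\<sigma> (\<sigma> d)) = d \<and> \<sigma> d \<noteq> d \<and> \<sigma> (\<sigma> d) \<noteq> d \<and> \<sigma> (\<sigma> d) \<noteq> \<sigma> d" if "d < 6*n" for d
    using y'(2) that card_orbit_eq_3_iff[OF sp finite_lessThan] by auto
  have oset: "orbit \<sigma> d = {d, \<sigma> d, \<sigma> (\<sigma> d)}" if "d < 6*n" for d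
    using orbit_of_order_3 o3[OF that] by auto
  have sM: "\<sigma> d < 6*n \<longleftrightarrow> d < 6*n" for d using permutes_in_image[OF sp]
    by simp
  have U1: "card ({d, \<sigma> d, \<sigma> (\<sigma> d)} \<inter> {4*n..<6*n}) = 1" if "d < 6*n" for d
    using y'(8) that oset[OF that] by auto
  have dist: "d \<noteq> \<sigma> d" "d \<noteq> \<sigma> (\<sigma> d)" "\<sigma> d \<noteq> \<sigma> (\<sigma> d)" if "d < 6*n" for d
    using o3[OF that] by auto
  have U1': "(d \<in> {4*n..<6*n} \<and> \<sigma> d \<notin> {4*n..<6*n} \<and> \<sigma> (\<sigma> d) \<notin> {4*n..<6*n}) \<or>
    (d \<notin> {4*n..<6*n} \<and> \<sigma> d \<in> {4*n..<6*n} \<and> \<sigma> (\<sigma> d) \<notin> {4*n..<6*n}) \<or>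
    (d \<notin> {4*n..<6*n} \<and> \<sigma> d \<notin> {4*n..<6*n} \<and> \<sigma> (\<sigma> d) \<in> {4*n..<6*n})" if "d < 6*n" for d
    using card_Int_three_eq_1[OF dist[OF that]] U1[OF that] by blast
  have O1: "card ({d, \<sigma> d, \<sigma> (\<sigma> d)} \<inter> Out) = 1" if "d < 6*n" for d
    using y'(8) that oset[OF that] by auto
  have O1': "(d \<in> Out \<and> \<sigma> d \<notin> Out \<and> \<sigma> (\<sigma> d) \<notin> Out) \<or>
    (d \<notin> Out \<and> \<sigma> d \<in> Out \<and> \<sigma> (\<sigma> d) \<notin> Out) \<or>
    (d \<notin> Out \<and> \<sigma> d \<notin> Out \<and> \<sigma> (\<sigma> d) \<in> Out)" if "d < 6*n" for d
    using card_Int_three_eq_1[OF dist[OF that]] O1[OF that] by blast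
  have Uc: "d \<in> {4*n..<6*n} \<longleftrightarrow> \<alpha> d \<in> {4*n..<6*n}" if "d < 6*n" for d
    using y'(6) that by (elim allE[of _ d]) (erule impE)
  have Oc: "d \<in> Out \<longleftrightarrow> \<alpha> d \<notin> Out" if "d < 4*n" for d
    using y'(7) that by (elim allE[of _ d]) auto
  have Osub: "Out \<subseteq> {..<4*n}"
  proof
    fix x assume x: "x \<in> Out"
    then have "x < 6*n" "x \<notin> {4*n..<6*n}" using y'(4,5) by auto
    then show "x \<in> {..<4*n}" by auto
  qed
  have aM: "\<alpha> d < 6*n \<longleftrightarrow> d < 6*n" for d using permutes_in_image[OF ap]
    by simp
  show "contractible (4*n) (6*n) \<sigma> \<alpha> Out"
    unfolding contractible_def
  proof (intro conjI allI impI)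
    show "4 * n \<le> 6 * n" by simp
    show "\<sigma> permutes {..<6*n}" "\<alpha> permutes {..<6*n}" by fact+
    fix d assume d: "d < 6*n"
    show "\<alpha> d \<noteq> d" "\<alpha> (\<alpha> d) = d" using af d by auto
    show "\<sigma> (\<sigma> (\<sigma> d)) = d" "\<sigma> d \<noteq> d" using o3[OF d] by auto
  next
    fix u assume u: "4*n \<le> u \<and> u < 6*n"
    have "u \<in> {4*n..<6*n}" using u by auto
    then have "\<sigma> u \<notin> {4*n..<6*n} \<and> \<sigma> (\<sigma> u) \<notin> {4*n..<6*n}"
      using U1'[of u] u by blast
    then show "\<sigma> u < 4*n" "\<sigma> (\<sigma> u) < 4*n" using u sM by auto
    show "4*n \<le> \<alpha> u" using Uc[of u] u by auto
    have "u \<notin> Out" using Osub u by auto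
    then show "\<sigma> u \<in> Out \<longleftrightarrow> \<sigma> (\<sigma> u) \<notin> Out"
      using O1'[of u] u by blast
  next
    fix d assume d: "d < 4*n"
    have "d \<notin> {4*n..<6*n}" using d by auto
    then have "\<sigma> d \<in> {4*n..<6*n} \<or> \<sigma> (\<sigma> d) \<in> {4*n..<6*n}"
      using U1'[of d] d by auto
    then show "4*n \<le> \<sigma> d \<or> 4*n \<le> \<sigma> (\<sigma> d)" by auto
    show "\<alpha> d < 4*n" using Uc[of d] d aM[of d] by auto
    show "d \<in> Out \<longleftrightarrow> \<alpha> d \<notin> Out" using Oc d by auto
  next
    show "Out \<subseteq> {..<4*n}" by fact
    show "0 \<in> Out" using y'(10) by auto
  qed
  have cs: "card (orbits \<sigma> (6*n)) = 2*n"
    using card_orbits_uniform[OF sp, of 3] y'(2) by auto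
  have ca: "card (orbits \<alpha> (6*n)) = 3*n"
    using card_orbits_uniform[OF ap, of 2] card_orbit_eq_2_iff[OF ap finite_lessThan] af by auto
  show "card (orbits (\<sigma> \<circ> \<alpha>) (6*n)) = n + 2" using y'(1) cs ca
    unfolding is_planar_map_def by auto
qed

lemma contractible_cubic_PO_std:
  assumes lc: "contractible (4*n) (6*n) \<sigma> \<alpha> Out" and cn: "darts_connected (6*n) \<sigma> \<alpha>"
    and F: "card (orbits (\<sigma> \<circ> \<alpha>) (6*n)) = n + 2"
  shows "(\<sigma>, \<alpha>, undir_darts n, Out) \<in> cubic_PO n"
proof -
  note sp = contractible_rot_permutes[OF lc] and ap = contractible_inv_permutes[OF lc]
  have o3: "\<sigma> (\<sigma> (\<sigma> d)) = d \<and> \<sigma> d \<noteq> d \<and> \<sigma> (\<sigma> d) \<noteq> d \<and> \<sigma> (\<sigma> d) \<noteq> \<sigma> d" if "d < 6*n" for d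
  proof -
    have a: "\<sigma> (\<sigma> (\<sigma> d)) = d" "\<sigma> d \<noteq> d"
      using contractible_rot3[OF lc that] contractible_rot_neq[OF lc that] by auto
    have "\<sigma> (\<sigma> d) \<noteq> d" using a contractible_rot_eq_iff[OF lc] by metis
    moreover have "\<sigma> (\<sigma> d) \<noteq> \<sigma> d" using a contractible_rot_eq_iff[OF lc]
      by metis
    ultimately show ?thesis using a by auto
  qed
  have c3: "card (orbit \<sigma> d) = 3" if "d < 6*n" for d
    using o3[OF that] card_orbit_eq_3_iff[OF sp finite_lessThan] by auto
  have af: "\<forall>d<6*n. \<alpha> d \<noteq> d \<and> \<alpha> (\<alpha> d) = d"
    using contractible_inv_inv[OF lc] contractible_inv_neq[OF lc] by auto
  have ismap: "is_map (6*n) \<sigma> \<alpha>" unfolding is_map_iff_connected using sp ap af cn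
    by auto
  have cs: "card (orbits \<sigma> (6*n)) = 2*n" using card_orbits_uniform[OF sp c3] by auto
  have ca: "card (orbits \<alpha> (6*n)) = 3*n"
    using card_orbits_uniform[OF ap, of 2] card_orbit_eq_2_iff[OF ap finite_lessThan] af by auto
  have Osub: "Out \<subseteq> {..<4*n}" "0 \<in> Out" using contractible_Out[OF lc] by auto
  have rep: "\<exists>u. 4*n \<le> u \<and> u < 6*n \<and> orbit \<sigma> d = orbit \<sigma> u" if d: "d < 6*n" for d
  proof (cases "4*n \<le> d")
    case False
    then obtain u where u: "4*n \<le> u" "u < 6*n" "d = \<sigma> u \<or> d = \<sigma> (\<sigma> u)"
      using contractible_dir_undir_rot[OF lc, of d] by auto
    have "orbit \<sigma> (\<sigma> u) = orbit \<sigma> u" "orbit \<sigma> (\<sigma> (\<sigma> u)) = orbit \<sigma> u"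
      using orbit_apply[OF sp finite_lessThan] by auto
    then show ?thesis using u by auto
  qed (use d in auto)
  have cU: "card (orbit \<sigma> u \<inter> {4*n..<6*n}) = 1 \<and> card (orbit \<sigma> u \<inter> Out) = 1"
    if u: "4*n \<le> u" "u < 6*n" for u
  proof -
    have os: "orbit \<sigma> u = {u, \<sigma> u, \<sigma> (\<sigma> u)}"
      using orbit_of_order_3 o3[OF u(2)] by auto
    have l: "\<sigma> u < 4*n" "\<sigma> (\<sigma> u) < 4*n" using contractible_undir[OF lc u]
      by auto
    have "u \<notin> Out" using Osub u by auto
    moreover have "\<sigma> u \<in> Out \<longleftrightarrow> \<sigma> (\<sigma> u) \<notin> Out"
      using contractible_undir_Out[OF lc u] .
    note uo = calculation this
    have ds: "u \<noteq> \<sigma> u" "u \<noteq> \<sigma> (\<sigma> u)" "\<sigma> u \<noteq> \<sigma> (\<sigma> u)"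
      using o3[OF u(2)] by auto
    have 1: "card ({u, \<sigma> u, \<sigma> (\<sigma> u)} \<inter> {4*n..<6*n}) = 1"
      by (rule card_Int_three_eq_1[OF ds, THEN iffD2]) (use u l in auto)
    have 2: "card ({u, \<sigma> u, \<sigma> (\<sigma> u)} \<inter> Out) = 1"
    proof (rule card_Int_three_eq_1[OF ds, THEN iffD2])
      show "(u \<in> Out \<and> \<sigma> u \<notin> Out \<and> \<sigma> (\<sigma> u) \<notin> Out) \<or>
        (u \<notin> Out \<and> \<sigma> u \<in> Out \<and> \<sigma> (\<sigma> u) \<notin> Out) \<or>
        (u \<notin> Out \<and> \<sigma> u \<notin> Out \<and> \<sigma> (\<sigma> u) \<in> Out)"
        using uo by (cases "\<sigma> u \<in> Out") blast+
    qed
    show ?thesis unfolding os using 1 2 by simp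
  qed
  show ?thesis unfolding cubic_PO_def undir_darts_def mem_Collect_eq prod.case
  proof (intro conjI allI impI)
    show "is_planar_map (6 * n) \<sigma> \<alpha>" unfolding is_planar_map_def using ismap cs ca F
      by auto
    show "\<And>d. d < 6 * n \<Longrightarrow> card (orbit \<sigma> d) = 3" by (rule c3)
    show "Out \<subseteq> {..<6 * n}" using Osub by auto
    show "{4 * n..<6 * n} \<inter> Out = {}" using Osub by auto
    show "{4 * n..<6 * n} \<subseteq> {..<6 * n}" by auto
    show "card {4 * n..<6 * n} = 2 * n" by simp
    show "0 \<in> Out" using Osub by auto
  next
    fix d assume d: "d < 6*n"
    show "d \<in> {4 * n..<6 * n} \<longleftrightarrow> \<alpha> d \<in> {4 * n..<6 * n}"
      using contractible_undir[OF lc, of d] contractible_inv_dir[OF lc, of d] d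
        contractible_inv_less_iff[OF lc, of d]
        by (cases "4*n \<le> d") auto
  next
    fix d assume d: "d < 6*n" "d \<notin> {4 * n..<6 * n}"
    then have "d < 4*n" by auto
    then show "d \<in> Out \<longleftrightarrow> \<alpha> d \<notin> Out"
      using contractible_inv_Out[OF lc] by blast
  next
    fix d assume d: "d < 6*n"
    obtain u where u: "4*n \<le> u" "u < 6*n" "orbit \<sigma> d = orbit \<sigma> u" using rep[OF d]
      by auto
    show "card (orbit \<sigma> d \<inter> {4*n..<6*n}) = 1" using cU[OF u(1,2)] u(3) by simp
    show "card (orbit \<sigma> d \<inter> Out) = 1" using cU[OF u(1,2)] u(3) by simp
  qed
qed

lemma contractible_contract_quartic_EO:
  assumes lc: "contractible (4*n) (6*n) \<sigma> \<alpha> Out" and cn: "darts_connected (6*n) \<sigma> \<alpha>"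
    and F: "card (orbits (\<sigma> \<circ> \<alpha>) (6*n)) = n + 2"
  shows "(contr_rot (4*n) \<sigma> \<alpha>, contr_inv (4*n) \<alpha>, Out) \<in> quartic_EO n"
proof -
  let ?s = "contr_rot (4*n) \<sigma> \<alpha>" and ?a = "contr_inv (4*n) \<alpha>"
  have sp: "?s permutes {..<4*n}" by (rule contr_rot_permutes[OF lc])
  have ap: "?a permutes {..<4*n}" by (rule contr_inv_permutes[OF lc])
  have af: "\<forall>d<4*n. ?a d \<noteq> d \<and> ?a (?a d) = d"
    using contractible_inv_neq[OF lc] contractible_inv_inv[OF lc] contractible_inv_dir[OF lc]
      by (auto simp: contr_inv_def)
  have cn': "darts_connected (4*n) ?s ?a" by (rule darts_connected_contract[OF lc cn])
  have c4: "card (orbit ?s d) = 4" if "d < 4*n" for d by (rule card_orbit_contr_rot[OF lc that])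
  have cs: "card (orbits ?s (4*n)) = n" using card_orbits_uniform[OF sp c4] by auto
  have ca: "card (orbits ?a (4*n)) = 2*n"
    using card_orbits_uniform[OF ap, of 2] card_orbit_eq_2_iff[OF ap finite_lessThan] af by auto
  have F': "card (orbits (?s \<circ> ?a) (4*n)) = n + 2" using card_faces_contract[OF lc] F by simp
  have Osub: "Out \<subseteq> {..<4*n}" "0 \<in> Out" using contractible_Out[OF lc] by auto
  show ?thesis unfolding quartic_EO_def
  proof (simp, intro conjI allI impI)
    show "is_planar_map (4 * n) ?s ?a" unfolding is_planar_map_def is_map_iff_connected
      using sp ap af cn' cs ca F' by auto
    show "\<And>d. d < 4 * n \<Longrightarrow> card (orbit ?s d) = 4" by (rule c4)
    show "Out \<subseteq> {..<4 * n}" "0 \<in> Out" using Osub by auto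
    fix d assume d: "d < 4*n"
    show "d \<in> Out \<longleftrightarrow> ?a d \<notin> Out" using contractible_inv_Out[OF lc d] d
      by (simp add: contr_inv_def)
    show "card (orbit ?s d \<inter> Out) = 2" by (rule card_orbit_contr_rot_Out[OF lc d])
  qed
qed

lemma quartic_EO_connected_faces:
  assumes x: "(\<sigma>, \<alpha>, Out) \<in> quartic_EO n"
  shows "darts_connected (4*n) \<sigma> \<alpha>" "card (orbits (\<sigma> \<circ> \<alpha>) (4*n)) = n + 2"
proof -
  note x' = quartic_EO_D[OF x]
  have sp: "\<sigma> permutes {..<4*n}" and ap: "\<alpha> permutes {..<4*n}"
    and af: "\<forall>d<4*n. \<alpha> d \<noteq> d \<and> \<alpha> (\<alpha> d) = d" and cn: "darts_connected (4*n) \<sigma> \<alpha>"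
    using x'(1) unfolding is_planar_map_def is_map_iff_connected by auto
  show "darts_connected (4*n) \<sigma> \<alpha>" by (rule cn)
  have cs: "card (orbits \<sigma> (4*n)) = n" using card_orbits_uniform[OF sp, of 4] x'(2) by auto
  have ca: "card (orbits \<alpha> (4*n)) = 2*n"
    using card_orbits_uniform[OF ap, of 2] card_orbit_eq_2_iff[OF ap finite_lessThan] af by auto
  show "card (orbits (\<sigma> \<circ> \<alpha>) (4*n)) = n + 2" using x'(1) cs ca
    unfolding is_planar_map_def by auto
qed

section \<open>Expanding a quartic map along a placement\<close>

(* The undirected dart u forms a cubic vertex with p u and its predecessor s\<^sup>3 (p u) at the quartic vertex. *)
definition exp_rot :: "nat \<Rightarrow> (nat \<Rightarrow> nat) \<Rightarrow> (nat \<Rightarrow> nat) \<Rightarrow> nat \<Rightarrow> nat" where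
  "exp_rot n s p d = (if d \<in> undir_darts n then s (s (s (p d)))
     else if d \<in> p ` undir_darts n then inv_into (undir_darts n) p d else s d)"

definition exp_inv :: "nat \<Rightarrow> (nat \<Rightarrow> nat) \<Rightarrow> (nat \<Rightarrow> nat) \<Rightarrow> (nat \<Rightarrow> nat) \<Rightarrow> nat \<Rightarrow> nat" where
  "exp_inv n s a p d = (if d \<in> undir_darts n then inv_into (undir_darts n) p (s (s (p d))) else a d)"

(* p u becomes \<sigma> (\<sigma> u) in the expanded cubic map; the last condition gives every cubic vertex
   exactly one outgoing dart. *)
definition placements :: "nat \<Rightarrow> (nat \<Rightarrow> nat) \<Rightarrow> nat set \<Rightarrow> (nat \<Rightarrow> nat) set" where
  "placements n s Out = {p \<in> undir_darts n \<rightarrow>\<^sub>E {..<4*n}. inj_on p (undir_darts n) \<and>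
     (\<forall>d<4*n. d \<in> p ` undir_darts n \<longleftrightarrow> s d \<notin> p ` undir_darts n) \<and>
     (\<forall>u\<in>undir_darts n. p u \<in> Out \<longleftrightarrow> s (s (s (p u))) \<notin> Out)}"

(* The possible images of placements, and the same condition at a single vertex v. *)
definition split_sets :: "nat \<Rightarrow> (nat \<Rightarrow> nat) \<Rightarrow> nat set \<Rightarrow> nat set set" where
  "split_sets n s Out = {P. P \<subseteq> {..<4*n} \<and> (\<forall>d<4*n. d \<in> P \<longleftrightarrow> s d \<notin> P) \<and> (\<forall>d\<in>P. d \<in> Out \<longleftrightarrow> s (s (s d)) \<notin> Out)}"

definition local_splits :: "(nat \<Rightarrow> nat) \<Rightarrow> nat set \<Rightarrow> nat set \<Rightarrow> nat set set" where
  "local_splits s Out v = {B. B \<subseteq> v \<and> (\<forall>d\<in>v. d \<in> B \<longleftrightarrow> s d \<notin> B) \<and> (\<forall>d\<in>B. d \<in> Out \<longleftrightarrow> s (s (s d)) \<notin> Out)}"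

lemma undir_darts_iff: "u \<in> undir_darts n \<longleftrightarrow> 4*n \<le> u \<and> u < 6*n"
  unfolding undir_darts_def by auto

lemma finite_placements: "finite (placements n s Out)"
proof -
  have "placements n s Out \<subseteq> undir_darts n \<rightarrow>\<^sub>E {..<4*n}"
    unfolding placements_def by auto
  moreover have "finite (undir_darts n \<rightarrow>\<^sub>E {..<4*n})"
    by (rule finite_PiE) (auto simp: undir_darts_def)
  ultimately show ?thesis using finite_subset by blast
qed

context
  fixes n s a Out assumes x: "(s, a, Out) \<in> quartic_EO n"
begin

lemma quartic_rot_permutes: "s permutes {..<4*n}" and quartic_inv_permutes: "a permutes {..<4*n}"
  and quartic_inv_invol: "\<forall>d<4*n. a d \<noteq> d \<and> a (a d) = d"
  using quartic_EO_D(1)[OF x] unfolding is_planar_map_def is_map_iff_connected by auto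

lemma quartic_rot4: "d < 4*n \<Longrightarrow> s (s (s (s d))) = d \<and> s d \<noteq> d \<and> s (s d) \<noteq> d \<and> s (s (s d)) \<noteq> d
     \<and> s (s d) \<noteq> s d \<and> s (s (s d)) \<noteq> s d \<and> s (s (s d)) \<noteq> s (s d)"
  using quartic_EO_D(2)[OF x] card_orbit_eq_4_iff[OF quartic_rot_permutes finite_lessThan] by blast

lemma quartic_rot_less_iff: "s d < 4*n \<longleftrightarrow> d < 4*n"
  using permutes_in_image[OF quartic_rot_permutes] by simp
lemma quartic_inv_less_iff: "a d < 4*n \<longleftrightarrow> d < 4*n"
  using permutes_in_image[OF quartic_inv_permutes] by simp
lemma quartic_rot_outside: "\<not> d < 4*n \<Longrightarrow> s d = d"
  using permutes_not_in[OF quartic_rot_permutes] by simp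
lemma quartic_inv_outside: "\<not> d < 4*n \<Longrightarrow> a d = d"
  using permutes_not_in[OF quartic_inv_permutes] by simp

lemma orbit_quartic_rot: "d < 4*n \<Longrightarrow> orbit s d = {d, s d, s (s d), s (s (s d))}"
  using orbit_of_order_4 quartic_rot4 by blast

lemma orbit_quartic_rot_subset: "d < 4*n \<Longrightarrow> orbit s d \<subseteq> {..<4*n}"
  using orbit_subset[OF quartic_rot_permutes] by auto

lemma card_orbit_quartic_Out: "d < 4*n \<Longrightarrow> card ({d, s d, s (s d), s (s (s d))} \<inter> Out) = 2"
  using quartic_EO_D(5)[OF x] orbit_quartic_rot by auto

lemma sum_local_splits:
  fixes \<omega> :: complex
  assumes w: "\<omega> \<noteq> 0" and d0: "d0 < 4*n"
  shows "(\<Sum>B\<in>local_splits s Out (orbit s d0). \<Prod>d\<in>B. if d \<in> Out then \<omega> else inverse \<omega>) =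
     (if (\<forall>d\<in>orbit s d0. d \<in> Out \<longrightarrow> s (s d) \<in> Out) then \<omega>\<^sup>2 + inverse (\<omega>\<^sup>2) else 1)"
proof -
  define d1 where "d1 = s d0"
  define d2 where "d2 = s d1"
  define d3 where "d3 = s d2"
  have F: "s d3 = d0" "d0 \<noteq> d1" "d0 \<noteq> d2" "d0 \<noteq> d3" "d1 \<noteq> d2" "d1 \<noteq> d3" "d2 \<noteq> d3"
    using quartic_rot4[OF d0] unfolding d1_def d2_def d3_def by auto
  have v: "orbit s d0 = {d0, d1, d2, d3}" using orbit_quartic_rot[OF d0]
    unfolding d1_def d2_def d3_def by simp
  have cO: "card ({d0, d1, d2, d3} \<inter> Out) = 2"
    using card_orbit_quartic_Out[OF d0] unfolding d1_def d2_def d3_def by simp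
  let ?g = "\<lambda>d. if d \<in> Out then \<omega> else inverse \<omega>"
  define c02 where "c02 = ((d0 \<in> Out \<longleftrightarrow> d3 \<notin> Out) \<and> (d2 \<in> Out \<longleftrightarrow> d1 \<notin> Out))"
  define c13 where "c13 = ((d1 \<in> Out \<longleftrightarrow> d0 \<notin> Out) \<and> (d3 \<in> Out \<longleftrightarrow> d2 \<notin> Out))"
  have L: "local_splits s Out (orbit s d0) =
      (if c02 then {{d0, d2}} else {}) \<union> (if c13 then {{d1, d3}} else {})"
  proof -
    have "B \<in> local_splits s Out (orbit s d0) \<longleftrightarrow> (B = {d0, d2} \<and> c02) \<or> (B = {d1, d3} \<and> c13)" for B
    proof
      assume B: "B \<in> local_splits s Out (orbit s d0)"
      then have sub: "B \<subseteq> {d0, d1, d2, d3}" and alt: "\<forall>d\<in>{d0, d1, d2, d3}. d \<in> B \<longleftrightarrow> s d \<notin> B"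
        and o: "\<forall>d\<in>B. d \<in> Out \<longleftrightarrow> s (s (s d)) \<notin> Out"
        unfolding local_splits_def v by auto
      have a0: "d0 \<in> B \<longleftrightarrow> d1 \<notin> B" using alt d1_def by auto
      have a1: "d1 \<in> B \<longleftrightarrow> d2 \<notin> B" using alt d2_def by auto
      have a2: "d2 \<in> B \<longleftrightarrow> d3 \<notin> B" using alt d3_def by auto
      have s3: "s (s (s d0)) = d3" "s (s (s d1)) = d0" "s (s (s d2)) = d1" "s (s (s d3)) = d2"
        using F(1) d1_def d2_def d3_def by auto
      show "(B = {d0, d2} \<and> c02) \<or> (B = {d1, d3} \<and> c13)"
      proof (cases "d0 \<in> B")
        case True
        then have "B = {d0, d2}" using sub a0 a1 a2 by auto
        moreover have c02 using o True s3 \<open>B = {d0, d2}\<close> unfolding c02_def by auto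
        ultimately show ?thesis by simp
      next
        case False
        then have "B = {d1, d3}" using sub a0 a1 a2 by auto
        moreover have c13 using o s3 \<open>B = {d1, d3}\<close> unfolding c13_def by auto
        ultimately show ?thesis by simp
      qed
    next
      assume "(B = {d0, d2} \<and> c02) \<or> (B = {d1, d3} \<and> c13)"
      then show "B \<in> local_splits s Out (orbit s d0)"
        unfolding local_splits_def v c02_def c13_def using F d1_def d2_def d3_def by auto
    qed
    then show ?thesis by auto
  qed
  have ne: "{d0, d2} \<noteq> {d1, d3}" "{d1, d3} \<noteq> {d0, d2}" using F by auto
  have S: "(\<Sum>B\<in>local_splits s Out (orbit s d0). \<Prod>d\<in>B. ?g d) =
      (if c02 then ?g d0 * ?g d2 else 0) + (if c13 then ?g d1 * ?g d3 else 0)"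
  proof -
    have p02: "(\<Prod>d\<in>{d0, d2}. ?g d) = ?g d0 * ?g d2" using F by simp
    have p13: "(\<Prod>d\<in>{d1, d3}. ?g d) = ?g d1 * ?g d3" using F by simp
    show ?thesis unfolding L by (cases c02; cases c13) (simp_all add: ne p02 p13 add.commute)
  qed
  have alt: "(\<forall>d\<in>orbit s d0. d \<in> Out \<longrightarrow> s (s d) \<in> Out) \<longleftrightarrow>
     ((d0 \<in> Out \<longleftrightarrow> d2 \<in> Out) \<and> (d1 \<in> Out \<longleftrightarrow> d3 \<in> Out))"
    unfolding v using F d1_def d2_def d3_def by auto
  have inv2: "inverse \<omega> * inverse \<omega> = inverse (\<omega>\<^sup>2)"
    by (simp add: power2_eq_square)
  have sq: "\<omega> * \<omega> = \<omega>\<^sup>2" by (simp add: power2_eq_square)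
  show ?thesis unfolding S alt
    using cO F w
    by (cases "d0 \<in> Out"; cases "d1 \<in> Out"; cases "d2 \<in> Out"; cases "d3 \<in> Out")
       (simp_all add: c02_def c13_def inv2 sq Int_insert_left card_insert_if)
qed

lemma card_local_split:
  assumes d0: "d0 < 4*n" and B: "B \<in> local_splits s Out (orbit s d0)"
  shows "card B = 2"
proof -
  define d1 where "d1 = s d0"
  define d2 where "d2 = s d1"
  define d3 where "d3 = s d2"
  have F: "s d3 = d0" "d0 \<noteq> d1" "d0 \<noteq> d2" "d0 \<noteq> d3" "d1 \<noteq> d2" "d1 \<noteq> d3" "d2 \<noteq> d3"
    using quartic_rot4[OF d0] unfolding d1_def d2_def d3_def by auto
  have v: "orbit s d0 = {d0, d1, d2, d3}" using orbit_quartic_rot[OF d0]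
    unfolding d1_def d2_def d3_def by simp
  have sub: "B \<subseteq> {d0, d1, d2, d3}" and alt: "\<forall>d\<in>{d0, d1, d2, d3}. d \<in> B \<longleftrightarrow> s d \<notin> B"
    using B unfolding local_splits_def v by auto
  have a0: "d0 \<in> B \<longleftrightarrow> d1 \<notin> B" using alt d1_def by auto
  have a1: "d1 \<in> B \<longleftrightarrow> d2 \<notin> B" using alt d2_def by auto
  have a2: "d2 \<in> B \<longleftrightarrow> d3 \<notin> B" using alt d3_def by auto
  have "B = {d0, d2} \<or> B = {d1, d3}"
    using sub a0 a1 a2 by (cases "d0 \<in> B") auto
  then show ?thesis using F by auto
qed

lemma quartic_vertices:
  shows "finite (orbits s (4*n))"
    and "\<And>v. v \<in> orbits s (4*n) \<Longrightarrow> \<exists>d0<4*n. v = orbit s d0"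
    and "\<And>v. v \<in> orbits s (4*n) \<Longrightarrow> v \<subseteq> {..<4*n}"
    and "\<And>d. d < 4*n \<Longrightarrow> orbit s d \<in> orbits s (4*n)"
    and "\<And>v d. v \<in> orbits s (4*n) \<Longrightarrow> d \<in> v \<Longrightarrow> v = orbit s d"
    and "\<And>v d. v \<in> orbits s (4*n) \<Longrightarrow> d \<in> v \<Longrightarrow> s d \<in> v"
    and "card (orbits s (4*n)) = n"
    and "\<And>v v'. v \<in> orbits s (4*n) \<Longrightarrow> v' \<in> orbits s (4*n) \<Longrightarrow> v \<noteq> v' \<Longrightarrow> v \<inter> v' = {}"
proof -
  show "finite (orbits s (4*n))" unfolding orbits_def by simp
  show "\<And>v. v \<in> orbits s (4*n) \<Longrightarrow> \<exists>d0<4*n. v = orbit s d0"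
    unfolding orbits_def by auto
  show "\<And>v. v \<in> orbits s (4*n) \<Longrightarrow> v \<subseteq> {..<4*n}"
    unfolding orbits_def using orbit_quartic_rot_subset by auto
  show "\<And>d. d < 4*n \<Longrightarrow> orbit s d \<in> orbits s (4*n)" unfolding orbits_def
    by auto
  show "\<And>v d. v \<in> orbits s (4*n) \<Longrightarrow> d \<in> v \<Longrightarrow> v = orbit s d"
    unfolding orbits_def using orbit_eq[OF quartic_rot_permutes finite_lessThan] by auto
  show "\<And>v d. v \<in> orbits s (4*n) \<Longrightarrow> d \<in> v \<Longrightarrow> s d \<in> v"
    unfolding orbits_def using orbit_apply_closed by auto
  show "card (orbits s (4*n)) = n"
    using card_orbits_uniform[OF quartic_rot_permutes, of 4] quartic_EO_D(2)[OF x] by auto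
  show "v \<inter> v' = {}" if "v \<in> orbits s (4*n)" "v' \<in> orbits s (4*n)" "v \<noteq> v'" for v v'
    using that unfolding orbits_def using orbit_eq_if_meet[OF quartic_rot_permutes finite_lessThan]
      by blast
qed

lemma split_set_Int_vertex:
  assumes P: "P \<in> split_sets n s Out" and v: "v \<in> orbits s (4*n)"
  shows "P \<inter> v \<in> local_splits s Out v"
  unfolding local_splits_def
proof (intro CollectI conjI ballI)
  show "P \<inter> v \<subseteq> v" by auto
  fix d assume d: "d \<in> v"
  have "d < 4*n" "s d \<in> v" using quartic_vertices(3,6)[OF v] d by auto
  then show "d \<in> P \<inter> v \<longleftrightarrow> s d \<notin> P \<inter> v" using P d
    unfolding split_sets_def by auto
next
  fix d assume "d \<in> P \<inter> v"
  then show "d \<in> Out \<longleftrightarrow> s (s (s d)) \<notin> Out" using P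
    unfolding split_sets_def by blast
qed

lemma split_set_eq_UN_vertices:
  assumes "P \<in> split_sets n s Out"
  shows "P = (\<Union>v\<in>orbits s (4*n). P \<inter> v)"
proof (intro equalityI subsetI)
  fix d assume "d \<in> P"
  moreover have "d < 4*n" using assms \<open>d \<in> P\<close> unfolding split_sets_def by auto
  ultimately show "d \<in> (\<Union>v\<in>orbits s (4*n). P \<inter> v)"
    using quartic_vertices(4) self_in_orbit by blast
qed auto

lemma bij_betw_UN_local_splits:
  "bij_betw (\<lambda>h. \<Union>(h ` orbits s (4*n)))
     (PiE (orbits s (4*n)) (local_splits s Out)) (split_sets n s Out)"
proof -
  let ?V = "orbits s (4*n)" and ?L = "local_splits s Out"
  define \<Lambda> where "\<Lambda> h = \<Union>(h ` ?V)" for h :: "nat set \<Rightarrow> nat set"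
  have sub: "h v \<subseteq> v" if "h \<in> PiE ?V ?L" "v \<in> ?V" for h v
    using that unfolding local_splits_def by auto
  have \<Lambda>_Int: "\<Lambda> h \<inter> v = h v" if h: "h \<in> PiE ?V ?L" and v: "v \<in> ?V" for h v
  proof -
    have "h v' \<inter> v = {}" if "v' \<in> ?V" "v' \<noteq> v" for v'
      using sub[OF h that(1)] quartic_vertices(8)[OF that(1) v] that(2) by blast
    then show ?thesis using sub[OF h v] v unfolding \<Lambda>_def by blast
  qed
  have to_split: "\<Lambda> h \<in> split_sets n s Out" if h: "h \<in> PiE ?V ?L" for h
    unfolding split_sets_def
  proof (intro CollectI conjI allI impI ballI)
    have hv: "h v \<in> ?L v" if "v \<in> ?V" for v using h that by auto
    show "\<Lambda> h \<subseteq> {..<4*n}" using sub[OF h] quartic_vertices(3)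
      unfolding \<Lambda>_def by blast
    fix d assume d: "d < 4*n"
    let ?v = "orbit s d"
    have v: "?v \<in> ?V" and dv: "d \<in> ?v" using quartic_vertices(4)[OF d] self_in_orbit by auto
    then have "s d \<in> ?v" using quartic_vertices(6) by blast
    moreover have "d \<in> h ?v \<longleftrightarrow> s d \<notin> h ?v" using hv[OF v] dv
      unfolding local_splits_def by blast
    ultimately show "d \<in> \<Lambda> h \<longleftrightarrow> s d \<notin> \<Lambda> h"
      using \<Lambda>_Int[OF h v] dv by blast
  next
    fix d assume "d \<in> \<Lambda> h"
    then obtain v where "v \<in> ?V" "d \<in> h v" unfolding \<Lambda>_def by auto
    then show "d \<in> Out \<longleftrightarrow> s (s (s d)) \<notin> Out" using h
      unfolding local_splits_def by blast
  qed
  have to_local: "restrict (\<lambda>v. P \<inter> v) ?V \<in> PiE ?V ?L" if "P \<in> split_sets n s Out" for P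
    using split_set_Int_vertex[OF that] by auto
  have local_split: "restrict (\<lambda>v. \<Lambda> h \<inter> v) ?V = h" if "h \<in> PiE ?V ?L" for h
  proof
    fix v show "restrict (\<lambda>v. \<Lambda> h \<inter> v) ?V v = h v"
      using \<Lambda>_Int[OF that] that by (cases "v \<in> ?V") auto
  qed
  have split_local: "\<Lambda> (restrict (\<lambda>v. P \<inter> v) ?V) = P" if "P \<in> split_sets n s Out" for P
  proof -
    have "\<Lambda> (restrict (\<lambda>v. P \<inter> v) ?V) = (\<Union>v\<in>?V. P \<inter> v)"
      unfolding \<Lambda>_def by simp
    then show ?thesis using split_set_eq_UN_vertices[OF that] by simp
  qed
  have "bij_betw \<Lambda> (PiE ?V ?L) (split_sets n s Out)"
    by (rule bij_betwI[where g = "\<lambda>P. restrict (\<lambda>v. P \<inter> v) ?V"])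
      (use to_split to_local local_split split_local in \<open>simp_all add: funcsetI\<close>)
  then show ?thesis unfolding \<Lambda>_def .
qed

lemma sum_split_sets:
  fixes \<omega> :: complex
  assumes w: "\<omega> \<noteq> 0"
  shows "(\<Sum>P\<in>split_sets n s Out. \<Prod>d\<in>P. if d \<in> Out then \<omega> else inverse \<omega>) =
    (\<omega>\<^sup>2 + inverse (\<omega>\<^sup>2)) ^ num_alternating (4*n) s Out"
proof -
  let ?V = "orbits s (4*n)" and ?L = "local_splits s Out"
  let ?g = "\<lambda>d. if d \<in> Out then \<omega> else inverse \<omega>"
  let ?alt = "\<lambda>v. \<forall>d\<in>v. d \<in> Out \<longrightarrow> s (s d) \<in> Out"
  have fin_v: "finite v" if "v \<in> ?V" for v
    using quartic_vertices(3)[OF that] finite_subset by blast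
  have "(\<Sum>P\<in>split_sets n s Out. \<Prod>d\<in>P. ?g d) = (\<Sum>h\<in>PiE ?V ?L. \<Prod>d\<in>\<Union>(h ` ?V). ?g d)"
    using sum.reindex_bij_betw[OF bij_betw_UN_local_splits, of "\<lambda>P. \<Prod>d\<in>P. ?g d"]
      by simp
  also have "\<dots> = (\<Sum>h\<in>PiE ?V ?L. \<Prod>v\<in>?V. \<Prod>d\<in>h v. ?g d)"
  proof (rule sum.cong[OF refl], rule prod.UNION_disjoint)
    fix h assume h: "h \<in> PiE ?V ?L"
    then have sub: "h v \<subseteq> v" if "v \<in> ?V" for v using that unfolding local_splits_def
      by auto
    show "finite ?V" by (rule quartic_vertices(1))
    show "\<forall>v\<in>?V. finite (h v)" using sub fin_v finite_subset by blast
    show "\<forall>v\<in>?V. \<forall>v'\<in>?V. v \<noteq> v' \<longrightarrow> h v \<inter> h v' = {}"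
      using sub quartic_vertices(8) by blast
  qed
  also have "\<dots> = (\<Prod>v\<in>?V. \<Sum>B\<in>?L v. \<Prod>d\<in>B. ?g d)"
  proof (rule prod_sum_PiE[symmetric])
    show "finite ?V" by (rule quartic_vertices(1))
    show "finite (?L v)" if "v \<in> ?V" for v
      using fin_v[OF that] by (simp add: local_splits_def)
  qed
  also have "\<dots> = (\<Prod>v\<in>?V. if ?alt v then \<omega>\<^sup>2 + inverse (\<omega>\<^sup>2) else 1)"
  proof (rule prod.cong[OF refl])
    fix v assume "v \<in> ?V"
    then obtain d0 where "d0 < 4*n" "v = orbit s d0" using quartic_vertices(2) by blast
    then show "(\<Sum>B\<in>?L v. \<Prod>d\<in>B. ?g d) = (if ?alt v then \<omega>\<^sup>2 + inverse (\<omega>\<^sup>2) else 1)"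
      using sum_local_splits[OF w] by simp
  qed
  also have "\<dots> = (\<omega>\<^sup>2 + inverse (\<omega>\<^sup>2)) ^ card {v \<in> ?V. ?alt v}"
    by (subst prod.If_cases[OF quartic_vertices(1)]) (simp add: Collect_conj_eq Int_commute)
  finally show ?thesis unfolding num_alternating_def .
qed

lemma card_split_set:
  assumes P: "P \<in> split_sets n s Out"
  shows "card P = 2 * n"
proof -
  let ?V = "orbits s (4*n)"
  have "card P = (\<Sum>v\<in>?V. card (P \<inter> v))"
  proof (subst split_set_eq_UN_vertices[OF P], rule card_UN_disjoint)
    show "finite ?V" by (rule quartic_vertices(1))
    show "\<forall>v\<in>?V. finite (P \<inter> v)"
      using quartic_vertices(3) finite_subset by (metis finite_lessThan inf.coboundedI2)
    show "\<forall>v\<in>?V. \<forall>v'\<in>?V. v \<noteq> v' \<longrightarrow> (P \<inter> v) \<inter> (P \<inter> v') = {}"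
      using quartic_vertices(8) by blast
  qed
  also have "\<dots> = (\<Sum>v\<in>?V. 2)"
  proof (rule sum.cong[OF refl])
    fix v assume v: "v \<in> ?V"
    then obtain d0 where "d0 < 4*n" "v = orbit s d0" using quartic_vertices(2) by blast
    then show "card (P \<inter> v) = 2" using card_local_split split_set_Int_vertex[OF P v] by blast
  qed
  also have "\<dots> = 2 * n" using quartic_vertices(7) by simp
  finally show ?thesis .
qed

lemma image_placement_split_set:
  assumes "p \<in> placements n s Out"
  shows "p ` undir_darts n \<in> split_sets n s Out"
  using assms unfolding placements_def split_sets_def by blast

lemma placements_with_image:
  assumes P: "P \<in> split_sets n s Out"
  shows "{p \<in> placements n s Out. p ` undir_darts n = P} =
    {p \<in> undir_darts n \<rightarrow>\<^sub>E P. inj_on p (undir_darts n)}"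
proof (intro equalityI subsetI)
  fix p assume "p \<in> {p \<in> placements n s Out. p ` undir_darts n = P}"
  then show "p \<in> {p \<in> undir_darts n \<rightarrow>\<^sub>E P. inj_on p (undir_darts n)}"
    unfolding placements_def by auto
next
  fix p assume "p \<in> {p \<in> undir_darts n \<rightarrow>\<^sub>E P. inj_on p (undir_darts n)}"
  then have p: "p \<in> undir_darts n \<rightarrow>\<^sub>E P" "inj_on p (undir_darts n)" by auto
  have "finite P" using P finite_subset unfolding split_sets_def by auto
  moreover have "card (p ` undir_darts n) = card P"
    using card_image[OF p(2)] card_split_set[OF P] by (simp add: undir_darts_def)
  ultimately have img: "p ` undir_darts n = P" using p(1) by (intro card_subset_eq) auto
  then show "p \<in> {p \<in> placements n s Out. p ` undir_darts n = P}"
    using P p unfolding placements_def split_sets_def by auto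
qed

lemma sum_placements:
  fixes \<omega> :: complex
  assumes w: "\<omega> \<noteq> 0"
  shows "(\<Sum>p\<in>placements n s Out. \<Prod>u\<in>undir_darts n. if p u \<in> Out then \<omega> else inverse \<omega>) =
     of_nat (fact (2 * n)) * (\<omega>\<^sup>2 + inverse (\<omega>\<^sup>2)) ^ num_alternating (4*n) s Out"
proof -
  let ?U = "undir_darts n"
  let ?g = "\<lambda>d. if d \<in> Out then \<omega> else inverse \<omega>"
  have fin_split: "finite (split_sets n s Out)"
    by (rule finite_subset[of _ "Pow {..<4*n}"]) (auto simp: split_sets_def)
  have "(\<Sum>p\<in>placements n s Out. \<Prod>u\<in>?U. ?g (p u)) =
      (\<Sum>P\<in>split_sets n s Out. \<Sum>p\<in>{p \<in> placements n s Out. p ` ?U = P}. \<Prod>u\<in>?U. ?g (p u))"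
    using image_placement_split_set
    by (intro sum.group[symmetric] finite_placements fin_split) auto
  also have "\<dots> = (\<Sum>P\<in>split_sets n s Out. of_nat (fact (2 * n)) * (\<Prod>d\<in>P. ?g d))"
  proof (rule sum.cong[OF refl])
    fix P assume P: "P \<in> split_sets n s Out"
    have card_inj: "card {p \<in> ?U \<rightarrow>\<^sub>E P. inj_on p ?U} = fact (2 * n)"
      using card_inj_funcset_fact[of ?U P] card_split_set[OF P] finite_subset P
      by (auto simp: undir_darts_def split_sets_def)
    have "(\<Sum>p\<in>{p \<in> placements n s Out. p ` ?U = P}. \<Prod>u\<in>?U. ?g (p u)) =
        (\<Sum>p\<in>{p \<in> ?U \<rightarrow>\<^sub>E P. inj_on p ?U}. \<Prod>d\<in>P. ?g d)"
    proof (rule sum.cong[OF placements_with_image[OF P]])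
      fix p assume "p \<in> {p \<in> ?U \<rightarrow>\<^sub>E P. inj_on p ?U}"
      then have "p ` ?U = P" "inj_on p ?U" using placements_with_image[OF P] by auto
      then show "(\<Prod>u\<in>?U. ?g (p u)) = (\<Prod>d\<in>P. ?g d)"
        using prod.reindex[of p ?U ?g] by simp
    qed
    also have "\<dots> = of_nat (fact (2 * n)) * (\<Prod>d\<in>P. ?g d)" using card_inj by simp
    finally show "(\<Sum>p\<in>{p \<in> placements n s Out. p ` ?U = P}. \<Prod>u\<in>?U. ?g (p u)) =
        of_nat (fact (2 * n)) * (\<Prod>d\<in>P. ?g d)" .
  qed
  also have "\<dots> = of_nat (fact (2 * n)) * (\<omega>\<^sup>2 + inverse (\<omega>\<^sup>2)) ^ num_alternating (4*n) s Out"
    by (simp add: sum_split_sets[OF w] flip: sum_distrib_left)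
  finally show ?thesis .
qed

context
  fixes p assumes pv: "p \<in> placements n s Out"
begin

lemma placement_less: "u \<in> undir_darts n \<Longrightarrow> p u < 4*n" using pv
  unfolding placements_def by auto
lemma placement_undefined: "u \<notin> undir_darts n \<Longrightarrow> p u = undefined" using pv
  unfolding placements_def by auto
lemma placement_inj: "inj_on p (undir_darts n)" using pv unfolding placements_def by auto
lemma placement_image_alt: "d < 4*n \<Longrightarrow> d \<in> p ` undir_darts n \<longleftrightarrow> s d \<notin> p ` undir_darts n"
  using pv unfolding placements_def by blast
lemma placement_Out: "u \<in> undir_darts n \<Longrightarrow> p u \<in> Out \<longleftrightarrow> s (s (s (p u))) \<notin> Out"
  using pv unfolding placements_def by blast

lemma inv_placement_placement: "u \<in> undir_darts n \<Longrightarrow> inv_into (undir_darts n) p (p u) = u"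
  using inv_into_f_f[OF placement_inj] by simp
lemma placement_inv_placement:
  "d \<in> p ` undir_darts n \<Longrightarrow>
    p (inv_into (undir_darts n) p d) = d \<and> inv_into (undir_darts n) p d \<in> undir_darts n"
  using f_inv_into_f inv_into_into by metis

lemma placed_less: "d \<in> p ` undir_darts n \<Longrightarrow> d < 4*n" using placement_less
  by auto

lemma placed_rot2: "d \<in> p ` undir_darts n \<Longrightarrow> s (s d) \<in> p ` undir_darts n"
proof -
  assume d: "d \<in> p ` undir_darts n"
  then have dl: "d < 4*n" by (rule placed_less)
  then have "s d \<notin> p ` undir_darts n" using placement_image_alt d by blast
  moreover have "s d < 4*n" using dl quartic_rot_less_iff by simp
  ultimately show ?thesis using placement_image_alt by blast
qed

lemma placement_rot3_not_placed: "u \<in> undir_darts n \<Longrightarrow> s (s (s (p u))) \<notin> p ` undir_darts n"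
proof -
  assume u: "u \<in> undir_darts n"
  have l: "s (s (s (p u))) < 4*n" using placement_less[OF u] quartic_rot_less_iff by simp
  have "s (s (s (s (p u)))) = p u" using quartic_rot4[OF placement_less[OF u]] by simp
  then have "s (s (s (s (p u)))) \<in> p ` undir_darts n" using u by auto
  then show ?thesis using placement_image_alt[OF l] by blast
qed

abbreviation "\<sigma>\<^sub>e \<equiv> exp_rot n s p"
abbreviation "\<alpha>\<^sub>e \<equiv> exp_inv n s a p"

lemma exp_rot_undir: "u \<in> undir_darts n \<Longrightarrow> \<sigma>\<^sub>e u = s (s (s (p u)))"
  by (simp add: exp_rot_def)
lemma exp_rot_placed: "d \<in> p ` undir_darts n \<Longrightarrow> d \<notin> undir_darts n \<and> \<sigma>\<^sub>e d = inv_into (undir_darts n) p d"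
  using placed_less undir_darts_iff by (force simp: exp_rot_def)
lemma exp_rot_other: "d \<notin> undir_darts n \<Longrightarrow> d \<notin> p ` undir_darts n \<Longrightarrow> \<sigma>\<^sub>e d = s d"
  by (simp add: exp_rot_def)

lemma exp_rot_placement: "u \<in> undir_darts n \<Longrightarrow> \<sigma>\<^sub>e (p u) = u"
  using exp_rot_placed inv_placement_placement by auto

lemma exp_rot2_undir: "u \<in> undir_darts n \<Longrightarrow> \<sigma>\<^sub>e (\<sigma>\<^sub>e u) = p u"
proof -
  assume u: "u \<in> undir_darts n"
  have 1: "\<sigma>\<^sub>e u = s (s (s (p u)))" by (rule exp_rot_undir[OF u])
  have l: "s (s (s (p u))) < 4*n" using placement_less[OF u] quartic_rot_less_iff by simp
  then have 2: "s (s (s (p u))) \<notin> undir_darts n" using undir_darts_iff by auto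
  have 3: "s (s (s (p u))) \<notin> p ` undir_darts n" by (rule placement_rot3_not_placed[OF u])
  have "\<sigma>\<^sub>e (\<sigma>\<^sub>e u) = s (s (s (s (p u))))" unfolding 1
    using exp_rot_other[OF 2 3] .
  then show ?thesis using quartic_rot4[OF placement_less[OF u]] by simp
qed

lemma exp_rot3: "d < 6*n \<Longrightarrow> \<sigma>\<^sub>e (\<sigma>\<^sub>e (\<sigma>\<^sub>e d)) = d \<and> \<sigma>\<^sub>e d \<noteq> d"
proof -
  assume dM: "d < 6*n"
  show ?thesis
  proof (cases "d \<in> undir_darts n")
    case True
    have "\<sigma>\<^sub>e d < 4*n"
      using exp_rot_undir[OF True] placement_less[OF True] quartic_rot_less_iff by simp
    then show ?thesis using exp_rot2_undir[OF True] exp_rot_placement[OF True] True undir_darts_iff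
      by auto
  next
    case nU: False
    then have d4: "d < 4*n" using dM undir_darts_iff by auto
    show ?thesis
    proof (cases "d \<in> p ` undir_darts n")
      case True
      then obtain u where u: "u \<in> undir_darts n" "d = p u" by auto
      then show ?thesis using exp_rot_placement[OF u(1)] exp_rot2_undir[OF u(1)] nU by auto
    next
      case False
      then have "s d \<in> p ` undir_darts n" using placement_image_alt[OF d4] by blast
      then obtain u where u: "u \<in> undir_darts n" "s d = p u" by auto
      have Sd: "\<sigma>\<^sub>e d = s d" using exp_rot_other[OF nU False] .
      have "\<sigma>\<^sub>e (\<sigma>\<^sub>e (\<sigma>\<^sub>e d)) = \<sigma>\<^sub>e (\<sigma>\<^sub>e (p u))"
        using Sd u by simp
      also have "\<dots> = \<sigma>\<^sub>e u" using exp_rot_placement[OF u(1)] by simp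
      also have "\<dots> = s (s (s (s d)))" using exp_rot_undir[OF u(1)] u(2) by simp
      also have "\<dots> = d" using quartic_rot4[OF d4] by simp
      finally show ?thesis using Sd quartic_rot4[OF d4] by auto
    qed
  qed
qed

lemma exp_rot_less_iff: "\<sigma>\<^sub>e d < 6*n \<longleftrightarrow> d < 6*n"
proof
  assume d: "d < 6*n"
  show "\<sigma>\<^sub>e d < 6*n"
  proof (cases "d \<in> undir_darts n")
    case True
    have "s (s (s (p d))) < 4*n" using placement_less[OF True] quartic_rot_less_iff by simp
    then show ?thesis using exp_rot_undir[OF True] by simp
  next
    case False
    then have d4: "d < 4*n" using d undir_darts_iff by auto
    show ?thesis
    proof (cases "d \<in> p ` undir_darts n")
      case True then show ?thesis using exp_rot_placed placement_inv_placement undir_darts_iff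
        by auto
    next
      case F: False
      have "s d < 4*n" using quartic_rot_less_iff d4 by simp
      then show ?thesis using exp_rot_other[OF False F] by simp
    qed
  qed
next
  assume "\<sigma>\<^sub>e d < 6*n"
  show "d < 6*n"
  proof (rule ccontr)
    assume d: "\<not> d < 6*n"
    have 1: "d \<notin> undir_darts n" using d by (simp add: undir_darts_iff)
    have 2: "d \<notin> p ` undir_darts n"
    proof
      assume "d \<in> p ` undir_darts n"
      then have "d < 4*n" by (rule placed_less)
      with d show False by simp
    qed
    have "\<sigma>\<^sub>e d = d" using exp_rot_other[OF 1 2] quartic_rot_outside d by simp
    then show False using \<open>\<sigma>\<^sub>e d < 6*n\<close> d by simp
  qed
qed

lemma exp_rot_outside: "\<not> d < 6*n \<Longrightarrow> \<sigma>\<^sub>e d = d"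
proof -
  assume d: "\<not> d < 6*n"
  have 1: "d \<notin> undir_darts n" using d by (simp add: undir_darts_iff)
  have 2: "d \<notin> p ` undir_darts n"
  proof
    assume "d \<in> p ` undir_darts n"
    then have "d < 4*n" by (rule placed_less)
    with d show False by simp
  qed
  show "\<sigma>\<^sub>e d = d" using exp_rot_other[OF 1 2] quartic_rot_outside d by simp
qed

lemma exp_rot_permutes: "\<sigma>\<^sub>e permutes {..<6*n}"
proof (rule bij_imp_permutes)
  show "bij_betw \<sigma>\<^sub>e {..<6*n} {..<6*n}"
    by (rule bij_betwI[where g = "\<lambda>d. \<sigma>\<^sub>e (\<sigma>\<^sub>e d)"]) (use exp_rot_less_iff exp_rot3 in auto)
qed (simp add: exp_rot_outside)

lemma exp_inv_undir: "u \<in> undir_darts n \<Longrightarrow> \<alpha>\<^sub>e u \<in> undir_darts n \<and> p (\<alpha>\<^sub>e u) = s (s (p u))"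
proof -
  assume u: "u \<in> undir_darts n"
  have "s (s (p u)) \<in> p ` undir_darts n" using placed_rot2 u by auto
  then show ?thesis using placement_inv_placement u by (simp add: exp_inv_def)
qed

lemma exp_inv_inv_undir: "u \<in> undir_darts n \<Longrightarrow> \<alpha>\<^sub>e (\<alpha>\<^sub>e u) = u \<and> \<alpha>\<^sub>e u \<noteq> u"
proof -
  assume u: "u \<in> undir_darts n"
  note 1 = exp_inv_undir[OF u]
  note 2 = exp_inv_undir[OF 1[THEN conjunct1]]
  have "p (\<alpha>\<^sub>e (\<alpha>\<^sub>e u)) = s (s (s (s (p u))))" using 1 2 by simp
  also have "\<dots> = p u" using quartic_rot4[OF placement_less[OF u]] by simp
  finally have "\<alpha>\<^sub>e (\<alpha>\<^sub>e u) = u" using placement_inj 1 2 u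
    by (auto dest: inj_onD)
  moreover have "\<alpha>\<^sub>e u \<noteq> u"
  proof
    assume "\<alpha>\<^sub>e u = u"
    then have "s (s (p u)) = p u" using 1 by simp
    then show False using quartic_rot4[OF placement_less[OF u]] by simp
  qed
  ultimately show ?thesis by simp
qed

lemma exp_inv_other: "u \<notin> undir_darts n \<Longrightarrow> \<alpha>\<^sub>e u = a u"
  by (simp add: exp_inv_def)

lemma exp_inv_less_iff: "\<alpha>\<^sub>e d < 6*n \<longleftrightarrow> d < 6*n"
proof (cases "d \<in> undir_darts n")
  case True
  then have "\<alpha>\<^sub>e d \<in> undir_darts n" using exp_inv_undir by auto
  then show ?thesis using True undir_darts_iff by auto
next
  case False
  then have Ad: "\<alpha>\<^sub>e d = a d" by (rule exp_inv_other)
  show ?thesis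
  proof (cases "d < 4*n")
    case True
    then have "a d < 4*n" using quartic_inv_less_iff by simp
    then show ?thesis using Ad True by simp
  next
    case F: False
    then have "a d = d" using quartic_inv_outside by simp
    then show ?thesis using Ad by simp
  qed
qed

lemma exp_inv_permutes: "\<alpha>\<^sub>e permutes {..<6*n}"
proof (rule bij_imp_permutes)
  have inv: "\<alpha>\<^sub>e (\<alpha>\<^sub>e d) = d" if "d < 6*n" for d
  proof (cases "d \<in> undir_darts n")
    case True then show ?thesis using exp_inv_inv_undir by auto
  next
    case False
    then have d4: "d < 4*n" using that undir_darts_iff by auto
    then have "a d < 4*n" using quartic_inv_less_iff by simp
      then have "a d \<notin> undir_darts n" using undir_darts_iff by auto
    then show ?thesis using exp_inv_other False quartic_inv_invol d4 by auto
  qed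
  show "bij_betw \<alpha>\<^sub>e {..<6*n} {..<6*n}"
    by (rule bij_betwI[where g = \<alpha>\<^sub>e]) (use exp_inv_less_iff inv in auto)
qed (use exp_inv_other quartic_inv_outside undir_darts_iff in auto)

lemma expand_contractible: "contractible (4*n) (6*n) \<sigma>\<^sub>e \<alpha>\<^sub>e Out"
  unfolding contractible_def
proof (intro conjI allI impI)
  show "4*n \<le> 6*n" by simp
  show "\<sigma>\<^sub>e permutes {..<6*n}" by (rule exp_rot_permutes)
  show "\<alpha>\<^sub>e permutes {..<6*n}" by (rule exp_inv_permutes)
  fix d assume d: "d < 6*n"
  show "\<alpha>\<^sub>e d \<noteq> d" "\<alpha>\<^sub>e (\<alpha>\<^sub>e d) = d"
  proof -
    have "\<alpha>\<^sub>e d \<noteq> d \<and> \<alpha>\<^sub>e (\<alpha>\<^sub>e d) = d"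
    proof (cases "d \<in> undir_darts n")
      case True then show ?thesis using exp_inv_inv_undir by auto
    next
      case False
      then have d4: "d < 4*n" using d undir_darts_iff by auto
      then have "a d < 4*n" using quartic_inv_less_iff by simp
      then have "a d \<notin> undir_darts n" using undir_darts_iff by auto
      then show ?thesis using exp_inv_other False quartic_inv_invol d4 by auto
    qed
    then show "\<alpha>\<^sub>e d \<noteq> d" "\<alpha>\<^sub>e (\<alpha>\<^sub>e d) = d" by auto
  qed
  show "\<sigma>\<^sub>e (\<sigma>\<^sub>e (\<sigma>\<^sub>e d)) = d" "\<sigma>\<^sub>e d \<noteq> d"
    using exp_rot3[OF d] by auto
next
  fix u assume u: "4*n \<le> u \<and> u < 6*n"
  then have uU: "u \<in> undir_darts n" using undir_darts_iff by auto
  show "\<sigma>\<^sub>e u < 4*n"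
    using exp_rot_undir[OF uU] placement_less[OF uU] quartic_rot_less_iff by simp
  show "\<sigma>\<^sub>e (\<sigma>\<^sub>e u) < 4*n"
    using exp_rot2_undir[OF uU] placement_less[OF uU] by simp
  show "4*n \<le> \<alpha>\<^sub>e u" using exp_inv_undir[OF uU] undir_darts_iff by auto
  have "\<sigma>\<^sub>e u \<in> Out \<longleftrightarrow> s (s (s (p u))) \<in> Out"
    using exp_rot_undir[OF uU] by simp
  then show "\<sigma>\<^sub>e u \<in> Out \<longleftrightarrow> \<sigma>\<^sub>e (\<sigma>\<^sub>e u) \<notin> Out"
    using exp_rot2_undir[OF uU] placement_Out[OF uU] by simp
next
  fix d assume d: "d < 4*n"
  then have nU: "d \<notin> undir_darts n" using undir_darts_iff by auto
  show "4*n \<le> \<sigma>\<^sub>e d \<or> 4*n \<le> \<sigma>\<^sub>e (\<sigma>\<^sub>e d)"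
  proof (cases "d \<in> p ` undir_darts n")
    case True
    then show ?thesis using exp_rot_placed placement_inv_placement undir_darts_iff by auto
  next
    case False
    then have "s d \<in> p ` undir_darts n" using placement_image_alt[OF d] by blast
    moreover have "\<sigma>\<^sub>e d = s d" using exp_rot_other[OF nU False] .
    ultimately show ?thesis using exp_rot_placed placement_inv_placement undir_darts_iff by auto
  qed
  show "\<alpha>\<^sub>e d < 4*n" using exp_inv_other[OF nU] quartic_inv_less_iff d by simp
  show "d \<in> Out \<longleftrightarrow> \<alpha>\<^sub>e d \<notin> Out"
    using exp_inv_other[OF nU] quartic_EO_D(4)[OF x] d by auto
next
  show "Out \<subseteq> {..<4*n}" "0 \<in> Out" using quartic_EO_D(3,6)[OF x] by auto
qed

lemma contr_rot_expand: "contr_rot (4*n) \<sigma>\<^sub>e \<alpha>\<^sub>e = s"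
proof
  fix d show "contr_rot (4*n) \<sigma>\<^sub>e \<alpha>\<^sub>e d = s d"
  proof (cases "d < 4*n")
    case False then show ?thesis using quartic_rot_outside by (simp add: contr_rot_def)
  next
    case d: True
    then have nU: "d \<notin> undir_darts n" using undir_darts_iff by auto
    show ?thesis
    proof (cases "d \<in> p ` undir_darts n")
      case False
      then have "\<sigma>\<^sub>e d = s d" using exp_rot_other[OF nU] by simp
      then show ?thesis using d quartic_rot_less_iff by (simp add: contr_rot_def)
    next
      case True
      then obtain u where u: "u \<in> undir_darts n" "d = p u" by auto
      have Sd: "\<sigma>\<^sub>e d = u" using exp_rot_placement[OF u(1)] u by simp
      have "\<not> u < 4*n" using u undir_darts_iff by auto
      then have "contr_rot (4*n) \<sigma>\<^sub>e \<alpha>\<^sub>e d = \<sigma>\<^sub>e (\<alpha>\<^sub>e u)"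
        using d Sd by (simp add: contr_rot_def)
      also have "\<dots> = s (s (s (p (\<alpha>\<^sub>e u))))"
        using exp_rot_undir exp_inv_undir[OF u(1)] by simp
      also have "\<dots> = s (s (s (s (s (p u)))))" using exp_inv_undir[OF u(1)] by simp
      also have "\<dots> = s d" using quartic_rot4[OF placement_less[OF u(1)]] u by simp
      finally show ?thesis .
    qed
  qed
qed

lemma contr_inv_expand: "contr_inv (4*n) \<alpha>\<^sub>e = a"
proof
  fix d show "contr_inv (4*n) \<alpha>\<^sub>e d = a d"
    using exp_inv_other undir_darts_iff quartic_inv_outside
      by (cases "d < 4*n") (auto simp: contr_inv_def)
qed

lemma placement_of_expand: "restrict (\<lambda>u. \<sigma>\<^sub>e (\<sigma>\<^sub>e u)) (undir_darts n) = p"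
proof
  fix u show "restrict (\<lambda>u. \<sigma>\<^sub>e (\<sigma>\<^sub>e u)) (undir_darts n) u = p u"
    using exp_rot2_undir placement_undefined by (cases "u \<in> undir_darts n") auto
qed

lemma expand_cubic_PO_std: "(\<sigma>\<^sub>e, \<alpha>\<^sub>e, undir_darts n, Out) \<in> cubic_PO n"
proof (rule contractible_cubic_PO_std[OF expand_contractible])
  have lc: "contractible (4*n) (6*n) \<sigma>\<^sub>e \<alpha>\<^sub>e Out"
    by (rule expand_contractible)
  have "darts_connected (4*n) s a" using quartic_EO_connected_faces(1)[OF x] .
  then show "darts_connected (6*n) \<sigma>\<^sub>e \<alpha>\<^sub>e"
    using darts_connected_expand[OF lc] contr_rot_expand contr_inv_expand by simp
  have "card (orbits (\<sigma>\<^sub>e \<circ> \<alpha>\<^sub>e) (6*n)) = card (orbits (contr_rot (4*n) \<sigma>\<^sub>e \<alpha>\<^sub>e \<circ> contr_inv (4*n) \<alpha>\<^sub>e) (4*n))"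
    by (rule card_faces_contract[OF lc])
  then show "card (orbits (\<sigma>\<^sub>e \<circ> \<alpha>\<^sub>e) (6*n)) = n + 2"
    using quartic_EO_connected_faces(2)[OF x] contr_rot_expand contr_inv_expand by simp
qed

end

end

section \<open>Contraction and expansion are inverse\<close>

context
  fixes n \<sigma> \<alpha> Out
  assumes y: "(\<sigma>, \<alpha>, undir_darts n, Out) \<in> cubic_PO n"
begin

lemma std_contractible: "contractible (4*n) (6*n) \<sigma> \<alpha> Out"
  using cubic_PO_std_contractible(1)[OF y] .

abbreviation "\<sigma>\<^sub>q \<equiv> contr_rot (4*n) \<sigma> \<alpha>"
abbreviation "\<alpha>\<^sub>q \<equiv> contr_inv (4*n) \<alpha>"
abbreviation "p\<^sub>q \<equiv> restrict (\<lambda>u. \<sigma> (\<sigma> u)) (undir_darts n)"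

lemma std_contract_quartic_EO: "(\<sigma>\<^sub>q, \<alpha>\<^sub>q, Out) \<in> quartic_EO n"
  using contractible_contract_quartic_EO[OF cubic_PO_std_contractible[OF y]] .

lemma std_undir:
  "u \<in> undir_darts n \<Longrightarrow> \<sigma> u < 4*n \<and> \<sigma> (\<sigma> u) < 4*n \<and> \<alpha> u \<in> undir_darts n \<and> \<alpha> (\<alpha> u) = u \<and> \<sigma> (\<sigma> (\<sigma> u)) = u"
  using contractible_undir[OF std_contractible, of u] contractible_inv_inv[OF std_contractible, of u]
    contractible_rot3[OF std_contractible, of u] undir_darts_iff
    by auto

lemma std_rot3: "d < 6*n \<Longrightarrow> \<sigma> (\<sigma> (\<sigma> d)) = d"
  using contractible_rot3[OF std_contractible] .
lemma std_rot_less_iff: "\<sigma> d < 6*n \<longleftrightarrow> d < 6*n"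
  using contractible_rot_less_iff[OF std_contractible] .

lemma contr_rot_around_undir: "u \<in> undir_darts n \<Longrightarrow> \<sigma>\<^sub>q (\<sigma> (\<sigma> u)) = \<sigma> (\<alpha> u) \<and> \<sigma>\<^sub>q (\<sigma> (\<alpha> u)) = \<sigma> (\<sigma> (\<alpha> u))
    \<and> \<sigma>\<^sub>q (\<sigma> (\<sigma> (\<alpha> u))) = \<sigma> u \<and> \<sigma>\<^sub>q (\<sigma> u) = \<sigma> (\<sigma> u)"
proof -
  assume u: "u \<in> undir_darts n"
  have u': "4*n \<le> u" "u < 6*n" using u undir_darts_iff by auto
  have au: "4*n \<le> \<alpha> u" "\<alpha> u < 6*n" using std_undir[OF u] undir_darts_iff by auto
  show ?thesis
    using contr_rot_undir1[OF std_contractible u'] contr_rot_undir2[OF std_contractible u']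
      contr_rot_undir1[OF std_contractible au] contr_rot_undir2[OF std_contractible au] std_undir[OF u]
      by simp
qed

lemma placement_of_image_iff: "d < 4*n \<Longrightarrow> d \<in> p\<^sub>q ` undir_darts n \<longleftrightarrow> 4*n \<le> \<sigma> d"
proof
  assume d: "d < 4*n" and "d \<in> p\<^sub>q ` undir_darts n"
  then obtain u where u: "u \<in> undir_darts n" "d = \<sigma> (\<sigma> u)" by auto
  then show "4*n \<le> \<sigma> d" using std_undir[OF u(1)] undir_darts_iff by auto
next
  assume d: "d < 4*n" and \<sigma>\<^sub>q: "4*n \<le> \<sigma> d"
  have dM: "d < 6*n" using d by simp
  have "\<sigma> d \<in> undir_darts n" using \<sigma>\<^sub>q std_rot_less_iff dM undir_darts_iff
    by auto
  moreover have "p\<^sub>q (\<sigma> d) = d" using calculation std_rot3[OF dM] by simp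
  ultimately show "d \<in> p\<^sub>q ` undir_darts n" by (metis image_eqI)
qed

lemma placement_of_placements: "p\<^sub>q \<in> placements n \<sigma>\<^sub>q Out"
  unfolding placements_def
proof (intro CollectI conjI ballI allI impI)
  show "p\<^sub>q \<in> undir_darts n \<rightarrow>\<^sub>E {..<4*n}" using std_undir by auto
  show "inj_on p\<^sub>q (undir_darts n)"
    using contractible_rot_eq_iff[OF std_contractible] by (auto intro!: inj_onI)
next
  fix d assume d: "d < 4*n"
  have dM: "d < 6*n" using d by simp
  obtain u where u: "4*n \<le> u" "u < 6*n" "d = \<sigma> u \<or> d = \<sigma> (\<sigma> u)"
    using contractible_dir_undir_rot[OF std_contractible d] by blast
  have uU: "u \<in> undir_darts n" using u undir_darts_iff by auto
  note S = contr_rot_around_undir[OF uU] and Y = std_undir[OF uU]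
  have l1: "\<sigma> (\<sigma> (\<alpha> u)) < 4*n" using std_undir[of "\<alpha> u"] Y by auto
  have l2: "\<sigma> (\<alpha> u) < 4*n" using std_undir[of "\<alpha> u"] Y by auto
  show "d \<in> p\<^sub>q ` undir_darts n \<longleftrightarrow> \<sigma>\<^sub>q d \<notin> p\<^sub>q ` undir_darts n"
  proof (cases "d = \<sigma> u")
    case True
    have "d \<notin> p\<^sub>q ` undir_darts n" using placement_of_image_iff[OF d] True Y by auto
    moreover have "\<sigma>\<^sub>q d \<in> p\<^sub>q ` undir_darts n"
      using placement_of_image_iff[of "\<sigma> (\<sigma> u)"] True S Y u by auto
    ultimately show ?thesis by simp
  next
    case False
    then have dd: "d = \<sigma> (\<sigma> u)" using u by auto
    have "d \<in> p\<^sub>q ` undir_darts n" using placement_of_image_iff[OF d] dd Y u by auto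
    moreover have "\<sigma>\<^sub>q d \<notin> p\<^sub>q ` undir_darts n"
      using placement_of_image_iff[OF l2] dd S l1 by auto
    ultimately show ?thesis by simp
  qed
next
  fix u assume u: "u \<in> undir_darts n"
  note S = contr_rot_around_undir[OF u]
  have "\<sigma>\<^sub>q (\<sigma>\<^sub>q (\<sigma>\<^sub>q (p\<^sub>q u))) = \<sigma> u" using S u
    by simp
  then show "p\<^sub>q u \<in> Out \<longleftrightarrow> \<sigma>\<^sub>q (\<sigma>\<^sub>q (\<sigma>\<^sub>q (p\<^sub>q u))) \<notin> Out"
    using contractible_undir_Out[OF std_contractible, of u] u undir_darts_iff by auto
qed

lemma exp_rot_contract: "exp_rot n \<sigma>\<^sub>q p\<^sub>q = \<sigma>"
proof
  fix d show "exp_rot n \<sigma>\<^sub>q p\<^sub>q d = \<sigma> d"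
  proof (cases "d \<in> undir_darts n")
    case True
    then show ?thesis using contr_rot_around_undir[OF True] by (simp add: exp_rot_def)
  next
    case nU: False
    show ?thesis
    proof (cases "d \<in> p\<^sub>q ` undir_darts n")
      case True
      then obtain u where u: "u \<in> undir_darts n" "d = \<sigma> (\<sigma> u)" by auto
      have "\<sigma> d = u" using u std_undir by simp
      moreover have "inv_into (undir_darts n) p\<^sub>q d = u"
        by (rule inv_into_f_eq) (use u contractible_rot_eq_iff[OF std_contractible] in \<open>auto intro!: inj_onI\<close>)
      ultimately show ?thesis using nU True by (simp add: exp_rot_def)
    next
      case False
      show ?thesis
      proof (cases "d < 4*n")
        case True
        then have "\<sigma> d < 4*n" using placement_of_image_iff False by auto
        then show ?thesis using nU False True by (simp add: exp_rot_def contr_rot_def)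
      next
        case F: False
        then have "\<not> d < 6*n" using nU undir_darts_iff by auto
        then have "\<sigma> d = d"
          using permutes_not_in[OF contractible_rot_permutes[OF std_contractible]] by simp
        then show ?thesis using nU False F by (simp add: exp_rot_def contr_rot_def)
      qed
    qed
  qed
qed

lemma exp_inv_contract: "exp_inv n \<sigma>\<^sub>q \<alpha>\<^sub>q p\<^sub>q = \<alpha>"
proof
  fix d show "exp_inv n \<sigma>\<^sub>q \<alpha>\<^sub>q p\<^sub>q d = \<alpha> d"
  proof (cases "d \<in> undir_darts n")
    case True
    note Y = std_undir[OF True]
    have "\<sigma>\<^sub>q (\<sigma>\<^sub>q (p\<^sub>q d)) = \<sigma> (\<sigma> (\<alpha> d))"
      using contr_rot_around_undir[OF True] True by simp
    also have "\<dots> = p\<^sub>q (\<alpha> d)" using Y by simp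
    finally have "inv_into (undir_darts n) p\<^sub>q (\<sigma>\<^sub>q (\<sigma>\<^sub>q (p\<^sub>q d))) = \<alpha> d"
      using inv_into_f_f[of p\<^sub>q "undir_darts n" "\<alpha> d"] contractible_rot_eq_iff[OF std_contractible] Y
        by (auto intro!: inj_onI)
    then show ?thesis using True by (simp add: exp_inv_def)
  next
    case False
    show ?thesis
    proof (cases "d < 4*n")
      case True then show ?thesis using False by (simp add: exp_inv_def contr_inv_def)
    next
      case F: False
      then have "\<not> d < 6*n" using False undir_darts_iff by auto
      then have "\<alpha> d = d"
        using permutes_not_in[OF contractible_inv_permutes[OF std_contractible]] by simp
      then show ?thesis using False F by (simp add: exp_inv_def contr_inv_def)
    qed
  qed
qed

lemma std_orbit_undir: "u \<in> undir_darts n \<Longrightarrow> orbit \<sigma> u = {u, \<sigma> u, \<sigma> (\<sigma> u)}"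
  using orbit_of_order_3 std_undir by auto

lemma std_orbits: "orbits \<sigma> (6*n) = (\<lambda>u. orbit \<sigma> u) ` undir_darts n"
proof
  show "(\<lambda>u. orbit \<sigma> u) ` undir_darts n \<subseteq> orbits \<sigma> (6*n)"
    unfolding orbits_def by (auto simp: undir_darts_iff)
  show "orbits \<sigma> (6*n) \<subseteq> (\<lambda>u. orbit \<sigma> u) ` undir_darts n"
  proof
    fix v assume "v \<in> orbits \<sigma> (6*n)"
    then obtain d where d: "d < 6*n" "v = orbit \<sigma> d" unfolding orbits_def by auto
    have "\<exists>u\<in>undir_darts n. orbit \<sigma> d = orbit \<sigma> u"
    proof (cases "4*n \<le> d")
      case True then show ?thesis using d undir_darts_iff by auto
    next
      case False
      then obtain u where u: "4*n \<le> u" "u < 6*n" "d = \<sigma> u \<or> d = \<sigma> (\<sigma> u)"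
        using contractible_dir_undir_rot[OF std_contractible, of d] by auto
      have "orbit \<sigma> (\<sigma> u) = orbit \<sigma> u" "orbit \<sigma> (\<sigma> (\<sigma> u)) = orbit \<sigma> u"
        using orbit_apply[OF contractible_rot_permutes[OF std_contractible] finite_lessThan] by auto
      then show ?thesis using u undir_darts_iff by auto
    qed
    then show "v \<in> (\<lambda>u. orbit \<sigma> u) ` undir_darts n" using d by auto
  qed
qed

lemma std_orbit_inj: "inj_on (\<lambda>u. orbit \<sigma> u) (undir_darts n)"
proof (rule inj_onI)
  fix u u' assume u: "u \<in> undir_darts n" "u' \<in> undir_darts n" "orbit \<sigma> u = orbit \<sigma> u'"
  then have "u' \<in> {u, \<sigma> u, \<sigma> (\<sigma> u)}" using std_orbit_undir self_in_orbit
    by metis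
  then show "u = u'" using std_undir[OF u(1)] u(2) undir_darts_iff by auto
qed

lemma std_num_left_turn:
  "num_left_turn (6*n) \<sigma> (undir_darts n) Out = card {u \<in> undir_darts n. \<sigma> (\<sigma> u) \<in> Out}"
proof -
  have "num_left_turn (6*n) \<sigma> (undir_darts n) Out =
     card {u \<in> undir_darts n. \<exists>d\<in>orbit \<sigma> u. d \<notin> undir_darts n \<and> d \<notin> Out \<and> \<sigma> d \<in> Out}"
    unfolding num_left_turn_def std_orbits by (rule card_filter_image[OF std_orbit_inj])
  also have "{u \<in> undir_darts n. \<exists>d\<in>orbit \<sigma> u. d \<notin> undir_darts n \<and> d \<notin> Out \<and> \<sigma> d \<in> Out} =
      {u \<in> undir_darts n. \<sigma> (\<sigma> u) \<in> Out}"
  proof -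
    have "(\<exists>d\<in>orbit \<sigma> u. d \<notin> undir_darts n \<and> d \<notin> Out \<and> \<sigma> d \<in> Out) \<longleftrightarrow> \<sigma> (\<sigma> u) \<in> Out"
      if u: "u \<in> undir_darts n" for u
    proof -
      have Y: "\<sigma> u < 4*n" "\<sigma> (\<sigma> u) < 4*n" "\<sigma> (\<sigma> (\<sigma> u)) = u"
        using std_undir[OF u] by auto
      have uO: "u \<notin> Out" using contractible_Out(1)[OF std_contractible] u undir_darts_iff
        by auto
      have iff: "\<sigma> u \<in> Out \<longleftrightarrow> \<sigma> (\<sigma> u) \<notin> Out"
        using contractible_undir_Out[OF std_contractible, of u] u undir_darts_iff by auto
      have nU: "\<sigma> u \<notin> undir_darts n" using Y undir_darts_iff by auto
      show ?thesis unfolding std_orbit_undir[OF u] using Y uO iff nU u by auto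
    qed
    then show ?thesis by auto
  qed
  finally show ?thesis .
qed

lemma std_num_right_turn:
  "num_right_turn (6*n) \<sigma> (undir_darts n) Out = card {u \<in> undir_darts n. \<sigma> (\<sigma> u) \<notin> Out}"
proof -
  have "num_right_turn (6*n) \<sigma> (undir_darts n) Out =
     card {u \<in> undir_darts n. \<exists>d\<in>orbit \<sigma> u. d \<in> Out \<and> \<sigma> d \<notin> undir_darts n \<and> \<sigma> d \<notin> Out}"
    unfolding num_right_turn_def std_orbits by (rule card_filter_image[OF std_orbit_inj])
  also have "{u \<in> undir_darts n. \<exists>d\<in>orbit \<sigma> u. d \<in> Out \<and> \<sigma> d \<notin> undir_darts n \<and> \<sigma> d \<notin> Out} =
      {u \<in> undir_darts n. \<sigma> (\<sigma> u) \<notin> Out}"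
  proof -
    have "(\<exists>d\<in>orbit \<sigma> u. d \<in> Out \<and> \<sigma> d \<notin> undir_darts n \<and> \<sigma> d \<notin> Out) \<longleftrightarrow> \<sigma> (\<sigma> u) \<notin> Out"
      if u: "u \<in> undir_darts n" for u
    proof -
      have Y: "\<sigma> u < 4*n" "\<sigma> (\<sigma> u) < 4*n" "\<sigma> (\<sigma> (\<sigma> u)) = u"
        using std_undir[OF u] by auto
      have uO: "u \<notin> Out" using contractible_Out(1)[OF std_contractible] u undir_darts_iff
        by auto
      have iff: "\<sigma> u \<in> Out \<longleftrightarrow> \<sigma> (\<sigma> u) \<notin> Out"
        using contractible_undir_Out[OF std_contractible, of u] u undir_darts_iff by auto
      have nU: "\<sigma> (\<sigma> u) \<notin> undir_darts n" using Y undir_darts_iff by auto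
      show ?thesis unfolding std_orbit_undir[OF u] using Y uO iff nU u by auto
    qed
    then show ?thesis by auto
  qed
  finally show ?thesis .
qed

lemma weight_C_std:
  assumes w: "\<omega> \<noteq> 0"
  shows "weight_C \<omega> (6*n) (\<sigma>, \<alpha>, undir_darts n, Out) =
    (\<Prod>u\<in>undir_darts n. if \<sigma> (\<sigma> u) \<in> Out then \<omega> else inverse \<omega>)"
proof -
  let ?A = "{u \<in> undir_darts n. \<sigma> (\<sigma> u) \<in> Out}" and ?B = "{u \<in> undir_darts n. \<sigma> (\<sigma> u) \<notin> Out}"
  have "(\<Prod>u\<in>undir_darts n. if \<sigma> (\<sigma> u) \<in> Out then \<omega> else inverse \<omega>) =
      (\<Prod>u\<in>?A. \<omega>) * (\<Prod>u\<in>?B. inverse \<omega>)"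
  proof -
    have e: "undir_darts n \<inter> {x. \<sigma> (\<sigma> x) \<in> Out} = ?A" "undir_darts n \<inter> - {x. \<sigma> (\<sigma> x) \<in> Out} = ?B"
      by auto
    have f: "finite (undir_darts n)" unfolding undir_darts_def by simp
    show ?thesis by (subst prod.If_cases[OF f]) (simp add: e)
  qed
  also have "\<dots> = \<omega> ^ card ?A * inverse \<omega> ^ card ?B" by simp
  also have "\<dots> = \<omega> powi (int (card ?A) - int (card ?B))"
    using w by (simp add: power_int_diff power_inverse field_simps)
  finally show ?thesis unfolding weight_C_def prod.case using std_num_left_turn std_num_right_turn
    by simp
qed

end

definition placed_quartic_EO :: "nat \<Rightarrow> (oriented_map \<times> (nat \<Rightarrow> nat)) set" where
  "placed_quartic_EO n = (SIGMA x:quartic_EO n. case x of (s, a, Out) \<Rightarrow> placements n s Out)"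

definition expand :: "nat \<Rightarrow> oriented_map \<times> (nat \<Rightarrow> nat) \<Rightarrow> partially_oriented_map" where
  "expand n = (\<lambda>((s, a, Out), p). (exp_rot n s p, exp_inv n s a p, undir_darts n, Out))"

lemma bij_betw_expand: "bij_betw (expand n) (placed_quartic_EO n) (cubic_PO_std n)"
proof -
  define contract where "contract y = (case y of (\<sigma>, \<alpha>, U :: nat set, Out :: nat set) \<Rightarrow>
     ((contr_rot (4*n) \<sigma> \<alpha>, contr_inv (4*n) \<alpha>, Out), restrict (\<lambda>u. \<sigma> (\<sigma> u)) (undir_darts n)))" for y
  show ?thesis
  proof (rule bij_betwI[where g = contract])
    show "expand n \<in> placed_quartic_EO n \<rightarrow> cubic_PO_std n"
    proof
      fix xp assume "xp \<in> placed_quartic_EO n"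
      then obtain s a Out p
      where xp: "xp = ((s, a, Out), p)" "(s, a, Out) \<in> quartic_EO n" "p \<in> placements n s Out"
        unfolding placed_quartic_EO_def by auto
      show "expand n xp \<in> cubic_PO_std n" using expand_cubic_PO_std[OF xp(2,3)] xp(1)
        unfolding expand_def cubic_PO_std_def by simp
    qed
    show "contract \<in> cubic_PO_std n \<rightarrow> placed_quartic_EO n"
    proof
      fix y assume "y \<in> cubic_PO_std n"
      then obtain \<sigma> \<alpha> Out where y: "y = (\<sigma>, \<alpha>, undir_darts n, Out)" "(\<sigma>, \<alpha>, undir_darts n, Out) \<in> cubic_PO n"
        unfolding cubic_PO_std_def by (cases y) auto
      show "contract y \<in> placed_quartic_EO n"
        using std_contract_quartic_EO[OF y(2)] placement_of_placements[OF y(2)] y(1)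
          unfolding contract_def placed_quartic_EO_def by simp
    qed
    show "contract (expand n xp) = xp" if xT: "xp \<in> placed_quartic_EO n" for xp
    proof -
      obtain s a Out p
      where xp: "xp = ((s, a, Out), p)" "(s, a, Out) \<in> quartic_EO n" "p \<in> placements n s Out"
        using xT unfolding placed_quartic_EO_def by auto
      show ?thesis
        using contr_rot_expand[OF xp(2,3)] contr_inv_expand[OF xp(2,3)] placement_of_expand[OF xp(2,3)] xp(1)
        unfolding expand_def contract_def by simp
    qed
    show "expand n (contract y) = y" if yY: "y \<in> cubic_PO_std n" for y
    proof -
      obtain \<sigma> \<alpha> Out where y: "y = (\<sigma>, \<alpha>, undir_darts n, Out)" "(\<sigma>, \<alpha>, undir_darts n, Out) \<in> cubic_PO n"
        using yY unfolding cubic_PO_std_def by (cases y) auto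
      show ?thesis using exp_rot_contract[OF y(2)] exp_inv_contract[OF y(2)] y(1)
        unfolding expand_def contract_def by simp
    qed
  qed
qed

lemma sum_cubic_PO_std:
  assumes w: "\<omega> \<noteq> 0"
  shows "(\<Sum>y\<in>cubic_PO_std n. weight_C \<omega> (6*n) y) =
    (\<Sum>x\<in>quartic_EO n. case x of (s, a, Out) \<Rightarrow>
       \<Sum>p\<in>placements n s Out. \<Prod>u\<in>undir_darts n. if p u \<in> Out then \<omega> else inverse \<omega>)"
proof -
  let ?w = "\<lambda>p Out. \<Prod>u\<in>undir_darts n. if p u \<in> Out then \<omega> else inverse \<omega>"
  have "(\<Sum>y\<in>cubic_PO_std n. weight_C \<omega> (6*n) y) = (\<Sum>xp\<in>placed_quartic_EO n. weight_C \<omega> (6*n) (expand n xp))"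
    using sum.reindex_bij_betw[OF bij_betw_expand, of "weight_C \<omega> (6*n)"] by simp
  also have "\<dots> = (\<Sum>xp\<in>placed_quartic_EO n. case xp of ((s, a, Out), p) \<Rightarrow> ?w p Out)"
  proof (rule sum.cong[OF refl])
    fix xp assume "xp \<in> placed_quartic_EO n"
    then obtain s a Out p
      where xp: "xp = ((s, a, Out), p)" "(s, a, Out) \<in> quartic_EO n" "p \<in> placements n s Out"
      unfolding placed_quartic_EO_def by auto
    have "weight_C \<omega> (6*n) (expand n xp) =
        (\<Prod>u\<in>undir_darts n. if exp_rot n s p (exp_rot n s p u) \<in> Out then \<omega> else inverse \<omega>)"
      using weight_C_std[OF expand_cubic_PO_std[OF xp(2,3)] w] xp(1) unfolding expand_def by simp
    also have "\<dots> = ?w p Out"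
      using exp_rot2_undir[OF xp(2,3)] by (intro prod.cong) auto
    finally show "weight_C \<omega> (6*n) (expand n xp) = (case xp of ((s, a, Out), p) \<Rightarrow> ?w p Out)"
      using xp(1) by simp
  qed
  also have "\<dots> = (\<Sum>x\<in>quartic_EO n. case x of (s, a, Out) \<Rightarrow> \<Sum>p\<in>placements n s Out. ?w p Out)"
    unfolding placed_quartic_EO_def
    by (subst sum.Sigma[symmetric])
      (auto simp: finite_quartic_EO finite_placements split: prod.splits intro!: sum.cong)
  finally show ?thesis .
qed

theorem Q_coeff_eq_C_coeff:
  fixes \<omega> :: complex
  assumes w: "\<omega> \<noteq> 0"
  shows "Q_coeff n (\<omega>\<^sup>2 + inverse (\<omega>\<^sup>2)) = C_coeff n \<omega>"
proof (cases "n = 0")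
  case True
  have "quartic_EO 0 = {}" "cubic_PO 0 = {}" unfolding quartic_EO_def cubic_PO_def by auto
  then show ?thesis using True unfolding Q_coeff_def C_coeff_def by simp
next
  case False
  let ?\<gamma> = "\<omega>\<^sup>2 + inverse (\<omega>\<^sup>2)"
  let ?K = "of_nat (fact (2 * n) * fact (4 * n - 1)) :: complex"
  have "?K * C_coeff n \<omega> = (\<Sum>y\<in>cubic_PO_std n. weight_C \<omega> (6 * n) y)"
    using C_coeff_labelled False by simp
  also have "\<dots> = (\<Sum>x\<in>quartic_EO n. of_nat (fact (2 * n)) * weight_Q ?\<gamma> (4 * n) x)"
    unfolding sum_cubic_PO_std[OF w]
    by (rule sum.cong) (auto simp: weight_Q_def sum_placements[OF _ w] split: prod.splits)
  also have "\<dots> = ?K * Q_coeff n ?\<gamma>"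
    using Q_coeff_labelled[of n ?\<gamma>] False by (simp add: sum_distrib_left[symmetric])
  finally show ?thesis by (simp add: fact_nonzero)
qed

theorem mainTheorem2:
  fixes \<omega> :: complex
  assumes "\<omega> \<noteq> 0"
  shows "Q_gf (\<omega>\<^sup>2 + inverse (\<omega>\<^sup>2)) = C_gf \<omega>"
  unfolding Q_gf_def C_gf_def using Q_coeff_eq_C_coeff[OF assms] by simp

end
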